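(* Let $G$ be a full Frobenius group of finite Morley rank with proper full Frobenius complement $B$. Then: (a) if $H$ is a connected definable subgroup of $G$ which is not contained in any conjugate of $B$, then for every conjugate $B'$ of $B$ with $B'\cap H\neq\{1\}$, the subgroup $B'\cap H$ is a proper full Frobenius complement of $H$; in particular $H$ is a full Frobenius group; (b) if $H$ is a connected definable subgroup of $G$ containing some conjugate of $B$, then $H$ is a full Frobenius complement of $G$; (c) if $G$ is connected and $B'$ is a full Frobenius complement of $G$ with $B\cap B'\neq\{1\}$, then $B\cap B'$ is again a full Frobenius complement of $G$. In particular, the full Frobenius complements of $G$ that are minimal under inclusion all are conjugate in $G$ (there is a unique minimal full Frobenius complement up to conjugacy).
   Context: A subgroup $B$ of a group $G$ is malnormal if $B\cap B^g=\{1\}$ for all $g\in G\setminus B$. A full Frobenius complement of a group $G$ of finite Morley rank is a definable malnormal subgroup of $G$ whose conjugates $B^g$ ($g\in G$) cover $G$. A group $G$ of finite Morley rank is a full Frobenius group if it has a proper full Frobenius complement $B$; the conjugates of $B$ are then called the Borel subgroups of $G$. *)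

theory Defs
  imports "HOL-Algebra.Coset"
begin

text \<open>Groups of finite Morley rank are rendered, following Borovik--Nesin
(Groups of finite Morley rank, Ch. 4) and Poizat, as ranked groups: a group
together with a family of definable sets D n (subsets of M^n, encoded as lists
of length n) and a rank function rk satisfying the Borovik--Poizat axioms.\<close>

definition Mn :: "'a set \<Rightarrow> nat \<Rightarrow> 'a list set" where
  "Mn M n = {xs. length xs = n \<and> set xs \<subseteq> M}"

definition def_fun ::
  "(nat \<Rightarrow> 'a list set set) \<Rightarrow> nat \<Rightarrow> nat \<Rightarrow> 'a list set \<Rightarrow> 'a list set
     \<Rightarrow> ('a list \<Rightarrow> 'a list) \<Rightarrow> bool" where
  "def_fun D n m A B f \<longleftrightarrow> A \<in> D n \<and> B \<in> D m \<and> f ` A \<subseteq> B \<and>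
     {xs @ f xs | xs. xs \<in> A} \<in> D (n + m)"

definition fib :: "'a list set \<Rightarrow> ('a list \<Rightarrow> 'a list) \<Rightarrow> 'a list \<Rightarrow> 'a list set" where
  "fib A f b = {x \<in> A. f x = b}"

definition ranked_universe ::
  "'a set \<Rightarrow> (nat \<Rightarrow> 'a list set set) \<Rightarrow> ('a list set \<Rightarrow> nat) \<Rightarrow> bool" where
  "ranked_universe M D rk \<longleftrightarrow>
    M \<noteq> {} \<and>
    \<comment> \<open>definable sets: boolean algebra containing diagonals, closed under
        products, coordinate permutations, projections and fibres (parameters)\<close>
    (\<forall>n. D n \<subseteq> Pow (Mn M n)) \<and>
    (\<forall>n. Mn M n \<in> D n) \<and>
    (\<forall>n X. X \<in> D n \<longrightarrow> Mn M n - X \<in> D n) \<and>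
    (\<forall>n X Y. X \<in> D n \<longrightarrow> Y \<in> D n \<longrightarrow> X \<inter> Y \<in> D n) \<and>
    (\<forall>n i j. i < n \<longrightarrow> j < n \<longrightarrow> {xs \<in> Mn M n. xs ! i = xs ! j} \<in> D n) \<and>
    (\<forall>n m X Y. X \<in> D n \<longrightarrow> Y \<in> D m \<longrightarrow> {xs @ ys | xs ys. xs \<in> X \<and> ys \<in> Y} \<in> D (n + m)) \<and>
    (\<forall>n X p. X \<in> D n \<longrightarrow> bij_betw p {..<n} {..<n} \<longrightarrow>
        (\<lambda>xs. map (\<lambda>i. xs ! p i) [0..<n]) ` X \<in> D n) \<and>
    (\<forall>n m X. X \<in> D (n + m) \<longrightarrow> take n ` X \<in> D n) \<and>
    (\<forall>n m X a. X \<in> D (n + m) \<longrightarrow> a \<in> Mn M n \<longrightarrow> {ys. a @ ys \<in> X} \<in> D m) \<and>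
    \<comment> \<open>monotonicity of rank\<close>
    (\<forall>n A k. A \<in> D n \<longrightarrow> A \<noteq> {} \<longrightarrow>
       (Suc k \<le> rk A \<longleftrightarrow>
         (\<exists>S :: nat \<Rightarrow> 'a list set. (\<forall>i. S i \<in> D n \<and> S i \<subseteq> A \<and> S i \<noteq> {} \<and> k \<le> rk (S i)) \<and>
              (\<forall>i j. i \<noteq> j \<longrightarrow> S i \<inter> S j = {})))) \<and>
    \<comment> \<open>definability of rank\<close>
    (\<forall>n m A B f k. def_fun D n m A B f \<longrightarrow>
       {b \<in> B. fib A f b \<noteq> {} \<and> rk (fib A f b) = k} \<in> D m) \<and>
    \<comment> \<open>additivity of rank\<close>
    (\<forall>n m A B f k. def_fun D n m A B f \<longrightarrow> f ` A = B \<longrightarrow> A \<noteq> {} \<longrightarrow>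
       (\<forall>b\<in>B. rk (fib A f b) = k) \<longrightarrow> rk A = rk B + k) \<and>
    \<comment> \<open>elimination of infinite quantifiers\<close>
    (\<forall>n m A B f. def_fun D n m A B f \<longrightarrow>
       (\<exists>N. \<forall>b\<in>B. finite (fib A f b) \<longrightarrow> card (fib A f b) \<le> N))"

definition ranked_group ::
  "('a, 'b) monoid_scheme \<Rightarrow> (nat \<Rightarrow> 'a list set set) \<Rightarrow> ('a list set \<Rightarrow> nat) \<Rightarrow> bool" where
  "ranked_group G D rk \<longleftrightarrow> group G \<and> ranked_universe (carrier G) D rk \<and>
     {[x, y, x \<otimes>\<^bsub>G\<^esub> y] | x y. x \<in> carrier G \<and> y \<in> carrier G} \<in> D 3"

definition definable1 :: "(nat \<Rightarrow> 'a list set set) \<Rightarrow> 'a set \<Rightarrow> bool" where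
  "definable1 D S \<longleftrightarrow> (\<lambda>x. [x]) ` S \<in> D 1"

definition connected_sg ::
  "('a, 'b) monoid_scheme \<Rightarrow> (nat \<Rightarrow> 'a list set set) \<Rightarrow> 'a set \<Rightarrow> bool" where
  "connected_sg G D H \<longleftrightarrow>
     (\<forall>K. subgroup K G \<longrightarrow> K \<subseteq> H \<longrightarrow> definable1 D K \<longrightarrow>
        finite ((\<lambda>h. K #>\<^bsub>G\<^esub> h) ` H) \<longrightarrow> K = H)"

definition conjg :: "('a, 'b) monoid_scheme \<Rightarrow> 'a set \<Rightarrow> 'a \<Rightarrow> 'a set" where
  "conjg G B g = (\<lambda>b. inv\<^bsub>G\<^esub> g \<otimes>\<^bsub>G\<^esub> b \<otimes>\<^bsub>G\<^esub> g) ` B"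

definition malnormal :: "('a, 'b) monoid_scheme \<Rightarrow> 'a set \<Rightarrow> bool" where
  "malnormal G B \<longleftrightarrow> subgroup B G \<and>
     (\<forall>g \<in> carrier G - B. B \<inter> conjg G B g = {\<one>\<^bsub>G\<^esub>})"

definition full_frob_complement ::
  "('a, 'b) monoid_scheme \<Rightarrow> (nat \<Rightarrow> 'a list set set) \<Rightarrow> 'a set \<Rightarrow> bool" where
  "full_frob_complement G D B \<longleftrightarrow> definable1 D B \<and> malnormal G B \<and>
     (\<Union>g \<in> carrier G. conjg G B g) = carrier G"

definition full_frob_group ::
  "('a, 'b) monoid_scheme \<Rightarrow> (nat \<Rightarrow> 'a list set set) \<Rightarrow> bool" where
  "full_frob_group G D \<longleftrightarrow> (\<exists>B. full_frob_complement G D B \<and> B \<noteq> carrier G)"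

end

theory Submission
  imports Defs
begin

text \<open>
  The heart of the argument is that two generic definable subsets of a connected definable
  group \<open>H\<close> always meet: a generic set contains one of Morley degree one, whose stabiliser is a
  definable subgroup of finite index and hence all of \<open>H\<close>. If \<open>C \<noteq> 1\<close> is a definable subgroup
  of \<open>H\<close> that is malnormal in \<open>H\<close>, computing the rank of \<open>{(y, h) | h \<in> H, y \<noteq> 1, h y h\<inverse> \<in> C}\<close>
  through both projections shows that the \<open>H\<close>-conjugates of \<open>C - {1}\<close> cover a generic subset
  of \<open>H\<close>. So any two such subgroups have \<open>H\<close>-conjugates with a nontrivial common element.
  Applied to the nontrivial traces \<open>B\<^sup>g \<inter> H\<close>, malnormality of \<open>B\<close> makes all conjugates of \<open>B\<close>
  meeting \<open>H\<close> nontrivially \<open>H\<close>-conjugate, which yields (a) and (b); for \<open>H = G\<close> the same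
  argument applied to \<open>B \<inter> B'\<close> yields (c). Minimal complements exist since rank drops along proper
  inclusions of full Frobenius complements: equal rank would force finite index, and a proper
  malnormal subgroup of finite index cannot have its conjugates cover the bigger group, by the
  counting argument familiar from finite Frobenius groups.
\<close>

lemma disjoint_sequence_if_splitting:
  assumes S0: "S0 \<in> F"
    and split: "\<And>S. S \<in> F \<Longrightarrow> \<exists>P Q. P \<in> F \<and> Q \<in> F \<and> P \<subseteq> S \<and> Q \<subseteq> S \<and> P \<inter> Q = {}"
  shows "\<exists>T :: nat \<Rightarrow> 'a set. (\<forall>i. T i \<in> F) \<and> (\<forall>i j. i \<noteq> j \<longrightarrow> T i \<inter> T j = {})"
proof -
  have "\<forall>S. \<exists>p. S \<in> F \<longrightarrow> fst p \<in> F \<and> snd p \<in> F \<and> fst p \<subseteq> S \<and> snd p \<subseteq> S \<and> fst p \<inter> snd p = {}"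
    using split by fastforce
  then obtain spl where spl: "\<And>S. S \<in> F \<Longrightarrow> fst (spl S) \<in> F \<and> snd (spl S) \<in> F \<and>
      fst (spl S) \<subseteq> S \<and> snd (spl S) \<subseteq> S \<and> fst (spl S) \<inter> snd (spl S) = {}"
    by metis
  define W where "W = rec_nat S0 (\<lambda>_ S. snd (spl S))"
  have W_Suc: "W (Suc i) = snd (spl (W i))" for i by (simp add: W_def)
  have W_F: "W i \<in> F" for i by (induction i) (simp_all add: W_def S0 spl)
  have W_decr: "W j \<subseteq> W (Suc i)" if "i < j" for i j
    using that
  proof (induction j)
    case (Suc j)
    thus ?case using spl[OF W_F[of j]] by (auto simp: W_Suc less_Suc_eq)
  qed simp
  define T where "T i = fst (spl (W i))" for i
  have disj: "T i \<inter> T j = {}" if "i < j" for i j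
    using spl[OF W_F[of i]] spl[OF W_F[of j]] W_decr[OF that] unfolding T_def W_Suc by blast
  have "T i \<in> F" for i using spl[OF W_F[of i]] by (simp add: T_def)
  moreover have "T i \<inter> T j = {}" if "i \<noteq> j" for i j
    using disj[of i j] disj[of j i] that by (auto simp: nat_neq_iff)
  ultimately show ?thesis by blast
qed

lemma infinite_image_sequence:
  assumes "infinite (f ` A)"
  obtains a :: "nat \<Rightarrow> 'a" where "\<And>i. a i \<in> A" "\<And>i j. i \<noteq> j \<Longrightarrow> f (a i) \<noteq> f (a j)"
proof -
  obtain s :: "nat \<Rightarrow> 'b" where s: "inj s" "range s \<subseteq> f ` A"
    using infinite_countable_subset[OF assms] by blast
  show thesis
  proof (rule that[of "\<lambda>i. inv_into A f (s i)"])
    show "inv_into A f (s i) \<in> A" for i using s(2) by (blast intro: inv_into_into)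
    show "f (inv_into A f (s i)) \<noteq> f (inv_into A f (s j))" if "i \<noteq> j" for i j
    proof
      assume "f (inv_into A f (s i)) = f (inv_into A f (s j))"
      hence "s i = s j" using s(2) by (simp add: f_inv_into_f image_subset_iff)
      thus False using s(1) that by (simp add: inj_eq)
    qed
  qed
qed

lemma infinite_subsequence_cases:
  fixes P Q :: "nat \<Rightarrow> bool"
  assumes "\<And>i. P i \<or> Q i"
  shows "\<exists>f :: nat \<Rightarrow> nat. inj f \<and> ((\<forall>j. P (f j)) \<or> (\<forall>j. Q (f j)))"
proof (cases "finite {i. P i}")
  case True
  have "{i. Q i} = UNIV - {i. P i} \<union> {i. Q i}" using assms by blast
  hence "infinite {i. Q i}" using True by (metis Diff_infinite_finite finite_Un infinite_UNIV_nat)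
  from infinite_countable_subset[OF this] show ?thesis by blast
next
  case False
  from infinite_countable_subset[OF this] show ?thesis by blast
qed

section \<open>Conjugates, cosets and malnormal subgroups\<close>

context group
begin

lemma mult_inv_mult_cancel [simp]: "x \<in> carrier G \<Longrightarrow> y \<in> carrier G \<Longrightarrow> x \<otimes> (inv x \<otimes> y) = y"
  by (simp add: m_assoc[symmetric])

lemma inv_mult_mult_cancel [simp]: "x \<in> carrier G \<Longrightarrow> y \<in> carrier G \<Longrightarrow> inv x \<otimes> (x \<otimes> y) = y"
  by (simp add: m_assoc[symmetric])

lemma conj_mult:
  assumes "a \<in> carrier G" "b \<in> carrier G" "y \<in> carrier G"
  shows "a \<otimes> (b \<otimes> y \<otimes> inv b) \<otimes> inv a = (a \<otimes> b) \<otimes> y \<otimes> inv (a \<otimes> b)"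
  using assms by (simp add: m_assoc inv_mult_group)

lemma conj_inv_cancel:
  assumes "h \<in> carrier G" "y \<in> carrier G"
  shows "inv h \<otimes> (h \<otimes> y \<otimes> inv h) \<otimes> h = y"
  using assms by (simp add: m_assoc)

lemma conj_eq_one_iff:
  assumes "h \<in> carrier G" "y \<in> carrier G"
  shows "h \<otimes> y \<otimes> inv h = \<one> \<longleftrightarrow> y = \<one>"
proof
  assume "h \<otimes> y \<otimes> inv h = \<one>"
  hence "inv h \<otimes> (h \<otimes> y \<otimes> inv h) \<otimes> h = inv h \<otimes> \<one> \<otimes> h" by simp
  thus "y = \<one>" using assms by (simp add: conj_inv_cancel)
qed (use assms in simp)

lemma subgroup_conj_closed:
  assumes "subgroup K G" "h \<in> K" "y \<in> K"
  shows "h \<otimes> y \<otimes> inv h \<in> K"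
  using assms by (simp add: subgroup.m_closed subgroup.m_inv_closed)

lemma subgroup_conj_transfer:
  assumes M: "subgroup M G" and G: "x \<in> carrier G" "a \<in> carrier G" "y \<in> carrier G"
    and xa: "x \<otimes> inv a \<in> M" and ya: "a \<otimes> y \<otimes> inv a \<in> M"
  shows "x \<otimes> y \<otimes> inv x \<in> M"
proof -
  have "(x \<otimes> inv a) \<otimes> (a \<otimes> y \<otimes> inv a) \<otimes> inv (x \<otimes> inv a) \<in> M"
    by (rule subgroup_conj_closed[OF M xa ya])
  moreover have "(x \<otimes> inv a) \<otimes> a = x" using G by (simp add: m_assoc)
  ultimately show ?thesis using conj_mult[of "x \<otimes> inv a" a y] G by simp
qed

lemma mem_conjg_iff:
  assumes "B \<subseteq> carrier G" "g \<in> carrier G"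
  shows "x \<in> conjg G B g \<longleftrightarrow> x \<in> carrier G \<and> g \<otimes> x \<otimes> inv g \<in> B"
proof
  assume "x \<in> conjg G B g"
  then obtain b where b: "b \<in> B" "x = inv g \<otimes> b \<otimes> g" unfolding conjg_def by blast
  have bG: "b \<in> carrier G" using b assms by blast
  have "g \<otimes> x \<otimes> inv g = b" using bG assms(2) unfolding b(2) by (simp add: m_assoc)
  thus "x \<in> carrier G \<and> g \<otimes> x \<otimes> inv g \<in> B" using b bG assms(2) by simp
next
  assume a: "x \<in> carrier G \<and> g \<otimes> x \<otimes> inv g \<in> B"
  have "inv g \<otimes> (g \<otimes> x \<otimes> inv g) \<otimes> g = x" using a assms(2) by (simp add: m_assoc)
  thus "x \<in> conjg G B g" using a unfolding conjg_def by (metis image_eqI)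
qed

lemma conjg_subset: "B \<subseteq> carrier G \<Longrightarrow> g \<in> carrier G \<Longrightarrow> conjg G B g \<subseteq> carrier G"
  unfolding conjg_def by auto

lemma conjg_mono: "X \<subseteq> Y \<Longrightarrow> conjg G X g \<subseteq> conjg G Y g"
  unfolding conjg_def by blast

lemma conjg_one: "B \<subseteq> carrier G \<Longrightarrow> conjg G B \<one> = B"
  unfolding conjg_def by (simp add: subset_iff image_def)

lemma conjg_conjg:
  assumes "B \<subseteq> carrier G" "a \<in> carrier G" "b \<in> carrier G"
  shows "conjg G (conjg G B a) b = conjg G B (a \<otimes> b)"
  unfolding conjg_def image_image using assms by (auto simp: m_assoc inv_mult_group intro!: image_cong)

lemma conjg_Int:
  assumes "A \<subseteq> carrier G" "B \<subseteq> carrier G" "g \<in> carrier G"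
  shows "conjg G (A \<inter> B) g = conjg G A g \<inter> conjg G B g"
proof -
  have "A \<inter> B \<subseteq> carrier G" using assms(1) by blast
  thus ?thesis using assms by (auto simp: mem_conjg_iff)
qed

lemma conjg_subgroup_self:
  assumes "subgroup H G" "h \<in> H"
  shows "conjg G H h = H"
proof -
  have hG: "h \<in> carrier G" and HG: "H \<subseteq> carrier G" using assms subgroup.subset by blast+
  have "y \<in> H" if "h \<otimes> y \<otimes> inv h \<in> H" "y \<in> carrier G" for y
    using subgroup_conj_closed[OF assms(1) subgroup.m_inv_closed[OF assms] that(1)]
      conj_inv_cancel[OF hG that(2)] hG by simp
  thus ?thesis using assms HG hG by (auto simp: mem_conjg_iff intro: subgroup_conj_closed)
qed

lemma one_in_conjg: "subgroup M G \<Longrightarrow> g \<in> carrier G \<Longrightarrow> \<one> \<in> conjg G M g"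
  using mem_conjg_iff[OF subgroup.subset] subgroup.one_closed by fastforce

lemma conjg_nontrivial:
  assumes M: "M \<subseteq> carrier G" and g: "g \<in> carrier G" and ne: "M - {\<one>} \<noteq> {}"
  shows "conjg G M g - {\<one>} \<noteq> {}"
proof -
  obtain m where m: "m \<in> M" "m \<noteq> \<one>" using ne by blast
  have "inv g \<otimes> m \<otimes> g \<in> conjg G M g" unfolding conjg_def using m by blast
  moreover have "inv g \<otimes> m \<otimes> g \<noteq> \<one>" using conj_eq_one_iff[of "inv g" m] g m M by auto
  ultimately show ?thesis by blast
qed

lemma conjg_subgroup:
  assumes M: "subgroup M G" and g: "g \<in> carrier G"
  shows "subgroup (conjg G M g) G"
proof (rule subgroupI)
  have MG: "M \<subseteq> carrier G" using M subgroup.subset by blast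
  show "conjg G M g \<subseteq> carrier G" by (rule conjg_subset[OF MG g])
  show "conjg G M g \<noteq> {}" using one_in_conjg[OF M g] by blast
  fix a assume "a \<in> conjg G M g"
  hence a: "a \<in> carrier G" "g \<otimes> a \<otimes> inv g \<in> M" using mem_conjg_iff[OF MG g] by auto
  have "inv (g \<otimes> a \<otimes> inv g) = g \<otimes> inv a \<otimes> inv g" using a g by (simp add: inv_mult_group m_assoc)
  hence "g \<otimes> inv a \<otimes> inv g \<in> M" using a M by (metis subgroup.m_inv_closed)
  thus "inv a \<in> conjg G M g" using mem_conjg_iff[OF MG g] a by simp
next
  have MG: "M \<subseteq> carrier G" using M subgroup.subset by blast
  fix a b assume "a \<in> conjg G M g" "b \<in> conjg G M g"
  hence a: "a \<in> carrier G" "g \<otimes> a \<otimes> inv g \<in> M" and b: "b \<in> carrier G" "g \<otimes> b \<otimes> inv g \<in> M"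
    using mem_conjg_iff[OF MG g] by auto
  have "g \<otimes> (a \<otimes> b) \<otimes> inv g = (g \<otimes> a \<otimes> inv g) \<otimes> (g \<otimes> b \<otimes> inv g)"
    using a b g by (simp add: m_assoc)
  hence "g \<otimes> (a \<otimes> b) \<otimes> inv g \<in> M" using a b M by (simp add: subgroup.m_closed)
  thus "a \<otimes> b \<in> conjg G M g" using mem_conjg_iff[OF MG g] a b by simp
qed

lemma conjg_eq_if_mult_inv_mem:
  assumes C: "subgroup C G" and a: "a \<in> carrier G" and b: "b \<in> carrier G" and ab: "a \<otimes> inv b \<in> C"
  shows "conjg G C a = conjg G C b"
proof -
  have CG: "C \<subseteq> carrier G" using C subgroup.subset by blast
  have ba: "b \<otimes> inv a \<in> C" using subgroup.m_inv_closed[OF C ab] a b by (simp add: inv_mult_group)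
  show ?thesis
    using subgroup_conj_transfer[OF C b a _ ba] subgroup_conj_transfer[OF C a b _ ab]
    by (auto simp: mem_conjg_iff[OF CG a] mem_conjg_iff[OF CG b])
qed

lemma card_conjg: "C \<subseteq> carrier G \<Longrightarrow> a \<in> carrier G \<Longrightarrow> card (conjg G C a) = card C"
  unfolding conjg_def by (rule card_image) (auto intro!: inj_onI simp: subset_iff)

lemma mem_rcos_iff:
  assumes "X \<subseteq> carrier G" "a \<in> carrier G"
  shows "y \<in> X #> a \<longleftrightarrow> y \<in> carrier G \<and> y \<otimes> inv a \<in> X"
proof
  assume "y \<in> X #> a"
  then obtain x where x: "x \<in> X" "y = x \<otimes> a" unfolding r_coset_def by blast
  thus "y \<in> carrier G \<and> y \<otimes> inv a \<in> X" using assms by (auto simp: m_assoc)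
next
  assume y: "y \<in> carrier G \<and> y \<otimes> inv a \<in> X"
  have "y = (y \<otimes> inv a) \<otimes> a" using y assms by (simp add: m_assoc)
  thus "y \<in> X #> a" using y unfolding r_coset_def by blast
qed

lemma rcos_eq_image: "X #> a = (\<lambda>x. x \<otimes> a) ` X"
  unfolding r_coset_def by auto

lemma rcos_Int:
  assumes "M \<subseteq> carrier G" "N \<subseteq> carrier G" "a \<in> carrier G"
  shows "(M \<inter> N) #> a = (M #> a) \<inter> (N #> a)"
proof -
  have "M \<inter> N \<subseteq> carrier G" using assms by blast
  thus ?thesis using assms by (auto simp: mem_rcos_iff)
qed

lemma rcos_Int_rcos:
  assumes "X \<subseteq> carrier G" "a \<in> carrier G" "b \<in> carrier G"
  shows "(X \<inter> (X #> a)) #> b = (X #> b) \<inter> (X #> (a \<otimes> b))"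
  using assms by (simp add: rcos_Int r_coset_subset_G coset_mult_assoc)

lemma rcos_mono: "M \<subseteq> N \<Longrightarrow> M #> a \<subseteq> N #> a"
  unfolding r_coset_def by auto

lemma rcos_nonempty: "M \<noteq> {} \<Longrightarrow> M #> a \<noteq> {}"
  unfolding r_coset_def by auto

lemma rcos_subset_subgroup: "subgroup H G \<Longrightarrow> M \<subseteq> H \<Longrightarrow> a \<in> H \<Longrightarrow> M #> a \<subseteq> H"
  unfolding r_coset_def using subgroup.m_closed by fastforce

lemma rcos_inv_cancel: "M \<subseteq> carrier G \<Longrightarrow> a \<in> carrier G \<Longrightarrow> (M #> a) #> inv a = M"
  by (simp add: coset_mult_assoc)

lemma rcos_eq_iff:
  assumes "subgroup C G" "a \<in> carrier G" "b \<in> carrier G"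
  shows "C #> a = C #> b \<longleftrightarrow> a \<otimes> inv b \<in> C"
  using assms by (metis rcos_self repr_independence subgroup.rcos_module is_group)

lemma card_rcos: "C \<subseteq> carrier G \<Longrightarrow> a \<in> carrier G \<Longrightarrow> card (C #> a) = card C"
  unfolding rcos_eq_image by (rule card_image) (auto intro!: inj_onI simp: subset_iff)

definition malnormal_in :: "'a set \<Rightarrow> 'a set \<Rightarrow> bool" where
  "malnormal_in K C \<longleftrightarrow> (\<forall>g\<in>K. \<forall>z\<in>C. z \<noteq> \<one> \<longrightarrow> g \<otimes> z \<otimes> inv g \<in> C \<longrightarrow> g \<in> C)"

lemma malnormal_in_mono: "malnormal_in K C \<Longrightarrow> K' \<subseteq> K \<Longrightarrow> malnormal_in K' C"
  unfolding malnormal_in_def by blast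

lemma malnormal_in_restrict: "malnormal_in K A \<Longrightarrow> K' \<subseteq> K \<Longrightarrow> malnormal_in K' (A \<inter> K')"
  unfolding malnormal_in_def by blast

lemma malnormal_in_conj_iff_rcos:
  assumes C: "subgroup C G" and mal: "malnormal_in K C" and KG: "K \<subseteq> carrier G"
    and h: "h \<in> K" and h0: "h0 \<in> K" "h \<otimes> inv h0 \<in> K"
    and y: "y \<in> carrier G" "y \<noteq> \<one>" and h0y: "h0 \<otimes> y \<otimes> inv h0 \<in> C"
  shows "h \<otimes> y \<otimes> inv h \<in> C \<longleftrightarrow> h \<otimes> inv h0 \<in> C"
proof -
  have hG: "h \<in> carrier G" and h0G: "h0 \<in> carrier G" using h h0 KG by auto
  have conj: "(h \<otimes> inv h0) \<otimes> (h0 \<otimes> y \<otimes> inv h0) \<otimes> inv (h \<otimes> inv h0) = h \<otimes> y \<otimes> inv h"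
    using conj_mult[of "h \<otimes> inv h0" h0 y] hG h0G y by (simp add: m_assoc)
  have "h0 \<otimes> y \<otimes> inv h0 \<noteq> \<one>" using conj_eq_one_iff[OF h0G y(1)] y(2) by simp
  thus ?thesis
    using mal h0(2) h0y conj subgroup_conj_closed[OF C _ h0y] unfolding malnormal_in_def by metis
qed

lemma malnormal_subgroup: "malnormal G M \<Longrightarrow> subgroup M G"
  by (simp add: malnormal_def)

lemma malnormal_subset: "malnormal G M \<Longrightarrow> M \<subseteq> carrier G"
  using malnormal_subgroup subgroup.subset by blast

lemma malnormal_imp_malnormal_in:
  assumes M: "malnormal G M"
  shows "malnormal_in (carrier G) M"
  unfolding malnormal_in_def
proof (intro ballI impI)
  fix g z assume g: "g \<in> carrier G" and z: "z \<in> M" "z \<noteq> \<one>" "g \<otimes> z \<otimes> inv g \<in> M"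
  show "g \<in> M"
  proof (rule ccontr)
    assume "g \<notin> M"
    hence "inv g \<notin> M" using malnormal_subgroup[OF M] g by (metis inv_inv subgroup.m_inv_closed)
    hence trivial: "M \<inter> conjg G M (inv g) = {\<one>}" using M g unfolding malnormal_def by simp
    have zG: "z \<in> carrier G" using z malnormal_subset[OF M] by blast
    have "g \<otimes> z \<otimes> inv g \<in> conjg G M (inv g)"
      using mem_conjg_iff[OF malnormal_subset[OF M], of "inv g"] g zG z conj_inv_cancel[OF g zG] by simp
    hence "g \<otimes> z \<otimes> inv g = \<one>" using trivial z by blast
    thus False using conj_eq_one_iff[OF g zG] z by simp
  qed
qed

lemma malnormal_conj_mult_inv_mem:
  assumes M: "malnormal G M" and G: "a \<in> carrier G" "b \<in> carrier G" "y \<in> carrier G"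
    and y1: "y \<noteq> \<one>" and ya: "a \<otimes> y \<otimes> inv a \<in> M" and yb: "b \<otimes> y \<otimes> inv b \<in> M"
  shows "a \<otimes> inv b \<in> M"
proof -
  have "b \<otimes> y \<otimes> inv b \<noteq> \<one>" using conj_eq_one_iff[OF G(2,3)] y1 by simp
  moreover have "(a \<otimes> inv b) \<otimes> (b \<otimes> y \<otimes> inv b) \<otimes> inv (a \<otimes> inv b) = a \<otimes> y \<otimes> inv a"
    using conj_mult[of "a \<otimes> inv b" b y] G by (simp add: m_assoc)
  ultimately show ?thesis
    using malnormal_imp_malnormal_in[OF M] G ya yb unfolding malnormal_in_def by (metis inv_closed m_closed)
qed

lemma malnormal_conjg_eq:
  assumes M: "malnormal G M" and a: "a \<in> carrier G" and b: "b \<in> carrier G"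
    and meet: "conjg G M a \<inter> conjg G M b \<noteq> {\<one>}"
  shows "conjg G M a = conjg G M b"
proof -
  have MG: "M \<subseteq> carrier G" by (rule malnormal_subset[OF M])
  have "\<one> \<in> conjg G M a \<inter> conjg G M b"
    using one_in_conjg[OF malnormal_subgroup[OF M]] a b by blast
  then obtain y where y: "y \<in> conjg G M a" "y \<in> conjg G M b" "y \<noteq> \<one>" using meet by blast
  have "a \<otimes> inv b \<in> M"
    using y mem_conjg_iff[OF MG a] mem_conjg_iff[OF MG b] by (intro malnormal_conj_mult_inv_mem[OF M a b]) auto
  thus ?thesis by (rule conjg_eq_if_mult_inv_mem[OF malnormal_subgroup[OF M] a b])
qed

lemma malnormal_conjg:
  assumes M: "malnormal G M" and a: "a \<in> carrier G"
  shows "malnormal G (conjg G M a)"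
  unfolding malnormal_def
proof (intro conjI ballI)
  have MG: "M \<subseteq> carrier G" by (rule malnormal_subset[OF M])
  show Ma: "subgroup (conjg G M a) G" by (rule conjg_subgroup[OF malnormal_subgroup[OF M] a])
  fix g assume g: "g \<in> carrier G - conjg G M a"
  have ag: "a \<otimes> g \<in> carrier G" using a g by simp
  have "conjg G M a \<inter> conjg G M (a \<otimes> g) \<subseteq> {\<one>}"
  proof
    fix y assume y: "y \<in> conjg G M a \<inter> conjg G M (a \<otimes> g)"
    show "y \<in> {\<one>}"
    proof (rule ccontr)
      assume "y \<notin> {\<one>}"
      hence "(a \<otimes> g) \<otimes> inv a \<in> M"
        using y mem_conjg_iff[OF MG a] mem_conjg_iff[OF MG ag]
        by (intro malnormal_conj_mult_inv_mem[OF M ag a]) auto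
      thus False using g mem_conjg_iff[OF MG a] by simp
    qed
  qed
  hence "conjg G M a \<inter> conjg G M (a \<otimes> g) = {\<one>}"
    using one_in_conjg[OF malnormal_subgroup[OF M]] a ag by blast
  thus "conjg G M a \<inter> conjg G (conjg G M a) g = {\<one>}"
    using conjg_conjg[OF MG a] g by simp
qed

lemma malnormal_conjg_eq_iff:
  assumes M: "malnormal G M" and nontriv: "M - {\<one>} \<noteq> {}" and a: "a \<in> carrier G" and b: "b \<in> carrier G"
  shows "conjg G M a = conjg G M b \<longleftrightarrow> a \<otimes> inv b \<in> M"
proof
  assume eq: "conjg G M a = conjg G M b"
  have MG: "M \<subseteq> carrier G" by (rule malnormal_subset[OF M])
  obtain y where y: "y \<in> conjg G M a" "y \<noteq> \<one>" using conjg_nontrivial[OF MG a nontriv] by blast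
  show "a \<otimes> inv b \<in> M"
    using y eq mem_conjg_iff[OF MG a] mem_conjg_iff[OF MG b]
    by (intro malnormal_conj_mult_inv_mem[OF M a b]) auto
qed (rule conjg_eq_if_mult_inv_mem[OF malnormal_subgroup[OF M] a b])

lemma malnormal_Int:
  assumes M: "malnormal G M" and N: "malnormal G N"
  shows "malnormal G (M \<inter> N)"
  unfolding malnormal_def
proof (intro conjI ballI)
  have MN: "subgroup (M \<inter> N) G"
    by (rule subgroups_Inter_pair[OF malnormal_subgroup[OF M] malnormal_subgroup[OF N]])
  show "subgroup (M \<inter> N) G" by (rule MN)
  fix g assume g: "g \<in> carrier G - M \<inter> N"
  have "M \<inter> conjg G M g = {\<one>} \<or> N \<inter> conjg G N g = {\<one>}"
    using M N g unfolding malnormal_def by blast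
  hence "(M \<inter> N) \<inter> conjg G (M \<inter> N) g \<subseteq> {\<one>}"
    using conjg_mono[of "M \<inter> N" M g] conjg_mono[of "M \<inter> N" N g] by blast
  moreover have "\<one> \<in> (M \<inter> N) \<inter> conjg G (M \<inter> N) g"
    using one_in_conjg[OF MN] g subgroup.one_closed[OF MN] by blast
  ultimately show "(M \<inter> N) \<inter> conjg G (M \<inter> N) g = {\<one>}" by blast
qed

lemma conjg_restrict:
  assumes "subgroup H G" "x \<in> H"
  shows "conjg (G\<lparr>carrier := H\<rparr>) X x = conjg G X x"
  unfolding conjg_def using m_inv_consistent[OF assms] by simp

lemma malnormal_restrict:
  assumes M: "malnormal G M" and H: "subgroup H G"
  shows "malnormal (G\<lparr>carrier := H\<rparr>) (M \<inter> H)"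
  unfolding malnormal_def
proof (intro conjI ballI)
  have MH: "subgroup (M \<inter> H) G" by (rule subgroups_Inter_pair[OF malnormal_subgroup[OF M] H])
  show "subgroup (M \<inter> H) (G\<lparr>carrier := H\<rparr>)" by (rule subgroup_incl[OF MH H]) blast
  fix x assume x: "x \<in> carrier (G\<lparr>carrier := H\<rparr>) - M \<inter> H"
  hence xG: "x \<in> carrier G" and "x \<notin> M" using subgroup.subset[OF H] by auto
  hence "M \<inter> conjg G M x = {\<one>}" using M unfolding malnormal_def by blast
  moreover have "\<one> \<in> (M \<inter> H) \<inter> conjg G (M \<inter> H) x"
    using one_in_conjg[OF MH xG] subgroup.one_closed[OF MH] by blast
  ultimately show "(M \<inter> H) \<inter> conjg (G\<lparr>carrier := H\<rparr>) (M \<inter> H) x = {\<one>\<^bsub>G\<lparr>carrier := H\<rparr>\<^esub>}"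
    using conjg_restrict[OF H] x conjg_mono[of "M \<inter> H" M x] by auto
qed

lemma finite_if_malnormal_in_finite_index:
  assumes C: "subgroup C G" "C \<subseteq> C'" "malnormal_in C' C" and C': "subgroup C' G"
    and b: "b \<in> C'" "b \<notin> C" and fin: "finite ((\<lambda>a. C #> a) ` C')"
  shows "finite C"
proof -
  have CG: "C \<subseteq> carrier G" and bG: "b \<in> carrier G" using C(1) b(1) C' subgroup.subset by blast+
  \<comment> \<open>\<open>c \<mapsto> C b c\<close> is injective: a coincidence would conjugate \<open>c1 c2\<inverse> \<noteq> \<one>\<close> into \<open>C\<close> by \<open>b\<close>\<close>
  have "inj_on (\<lambda>c. C #> (b \<otimes> c)) C"
  proof (rule inj_onI)
    fix c1 c2 assume c: "c1 \<in> C" "c2 \<in> C" "C #> (b \<otimes> c1) = C #> (b \<otimes> c2)"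
    have cG: "c1 \<in> carrier G" "c2 \<in> carrier G" using c CG by auto
    have "(b \<otimes> c1) \<otimes> inv (b \<otimes> c2) \<in> C" using c(3) rcos_eq_iff[OF C(1)] bG cG by simp
    moreover have "(b \<otimes> c1) \<otimes> inv (b \<otimes> c2) = b \<otimes> (c1 \<otimes> inv c2) \<otimes> inv b"
      using bG cG by (simp add: m_assoc inv_mult_group)
    moreover have "c1 \<otimes> inv c2 \<in> C" using c C(1) by (simp add: subgroup.m_closed subgroup.m_inv_closed)
    ultimately have "c1 \<otimes> inv c2 = \<one>" using C(3) b unfolding malnormal_in_def by metis
    thus "c1 = c2" using cG inv_equality[of c1 "inv c2"] by simp
  qed
  moreover have "(\<lambda>c. C #> (b \<otimes> c)) ` C \<subseteq> (\<lambda>a. C #> a) ` C'"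
    using b(1) C(2) subgroup.m_closed[OF C'] by blast
  ultimately show ?thesis using finite_imageD[OF finite_subset[OF _ fin]] by blast
qed

lemma card_subgroup_eq_index_mult:
  assumes C: "subgroup C G" "C \<subseteq> C'" and C': "subgroup C' G"
    and fin: "finite ((\<lambda>a. C #> a) ` C')" and finC: "finite C"
  shows "finite C'" "card C' = card ((\<lambda>a. C #> a) ` C') * card C"
proof -
  let ?R = "(\<lambda>a. C #> a) ` C'"
  have CG: "C \<subseteq> carrier G" and C'G: "C' \<subseteq> carrier G" using C(1) C' subgroup.subset by blast+
  have card_R: "card r = card C" if "r \<in> ?R" for r using that card_rcos[OF CG] C'G by auto
  have fin_r: "finite r" if "r \<in> ?R" for r
    using that finC by (auto simp: rcos_eq_image)
  have union: "\<Union>?R = C'"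
    using rcos_subset_subgroup[OF C' C(2)] rcos_self[OF _ C(1)] C'G by blast
  have disjoint: "pairwise disjnt ?R"
    using pairwise_subset[OF rcos_disjoint[OF C(1)]] rcosetsI[OF CG] C'G by blast
  show "finite C'" using finite_Union[OF fin fin_r] union by simp
  have "card C' = (\<Sum>r\<in>?R. card r)" using card_Union_disjoint[OF disjoint fin_r] union by simp
  also have "\<dots> = card ?R * card C" using card_R by simp
  finally show "card C' = card ?R * card C" .
qed

lemma card_conjugates_le_index:
  assumes C: "subgroup C G" and C'G: "C' \<subseteq> carrier G" and fin: "finite ((\<lambda>a. C #> a) ` C')"
  shows "finite ((\<lambda>a. conjg G C a) ` C')" "card ((\<lambda>a. conjg G C a) ` C') \<le> card ((\<lambda>a. C #> a) ` C')"
proof -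
  let ?R = "(\<lambda>a. C #> a) ` C'"
  \<comment> \<open>a conjugate \<open>C\<^sup>a\<close> only depends on the coset \<open>C a\<close>\<close>
  have sub: "(\<lambda>a. conjg G C a) ` C' \<subseteq> (\<lambda>r. conjg G C (inv_into C' (\<lambda>a. C #> a) r)) ` ?R"
  proof
    fix X assume "X \<in> (\<lambda>a. conjg G C a) ` C'"
    then obtain a where a: "a \<in> C'" "X = conjg G C a" by blast
    let ?a' = "inv_into C' (\<lambda>a. C #> a) (C #> a)"
    have a': "?a' \<in> C'" using a(1) by (blast intro: inv_into_into)
    have "C #> ?a' = C #> a" using f_inv_into_f[of "C #> a" "(#>) C" C'] a(1) by blast
    moreover have a'G: "?a' \<in> carrier G" and aG: "a \<in> carrier G" using a' a(1) C'G by auto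
    ultimately have "?a' \<otimes> inv a \<in> C" using rcos_eq_iff[OF C(1) a'G aG] by simp
    hence "conjg G C ?a' = X" unfolding a(2) by (rule conjg_eq_if_mult_inv_mem[OF C(1) a'G aG])
    thus "X \<in> (\<lambda>r. conjg G C (inv_into C' (\<lambda>a. C #> a) r)) ` ?R" using a(1) by (intro image_eqI) auto
  qed
  show "finite ((\<lambda>a. conjg G C a) ` C')" using finite_surj[OF fin sub] .
  show "card ((\<lambda>a. conjg G C a) ` C') \<le> card ?R" using surj_card_le[OF fin sub] .
qed

text \<open>The counting argument for finite Frobenius groups: if \<open>C\<close> has index \<open>k \<ge> 2\<close> in \<open>C'\<close>,
  its conjugates cover at most \<open>k (|C| - 1) < |C'| - 1\<close> nontrivial elements of \<open>C'\<close>.\<close>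

lemma malnormal_finite_index_not_covering:
  assumes C: "subgroup C G" "C \<subseteq> C'" "C \<noteq> C'" "malnormal_in C' C" and C': "subgroup C' G"
    and fin: "finite ((\<lambda>a. C #> a) ` C')"
    and cover: "\<And>x. x \<in> C' \<Longrightarrow> \<exists>a\<in>C'. x \<in> conjg G C a"
  shows False
proof -
  let ?R = "(\<lambda>a. C #> a) ` C'" and ?K = "(\<lambda>a. conjg G C a) ` C'"
  have CG: "C \<subseteq> carrier G" and C'G: "C' \<subseteq> carrier G" using C(1) C' subgroup.subset by blast+
  have oneC: "\<one> \<in> C" and oneC': "\<one> \<in> C'" using C(1) C' subgroup.one_closed by blast+
  obtain b where b: "b \<in> C'" "b \<notin> C" using C(2,3) by blast
  have finC: "finite C" by (rule finite_if_malnormal_in_finite_index[OF C(1,2,4) C' b fin])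
  have cpos: "0 < card C" using finC oneC card_gt_0_iff by blast
  note card_C' = card_subgroup_eq_index_mult[OF C(1,2) C' fin finC]
  note card_K = card_conjugates_le_index[OF C(1) C'G fin]
  have "C #> b \<noteq> C" using rcos_self[OF _ C(1)] b C'G by blast
  moreover have "C \<in> ?R" "C #> b \<in> ?R" using oneC' coset_mult_one[OF CG] b(1) by (blast, blast)
  ultimately have k2: "2 \<le> card ?R"
    using card_mono[OF fin, of "{C, C #> b}"] by (simp add: card_insert_if)
  have card_X: "finite (X - {\<one>}) \<and> card (X - {\<one>}) = card C - 1" if X: "X \<in> ?K" for X
  proof -
    obtain a where a: "a \<in> C'" "X = conjg G C a" using X by blast
    have aG: "a \<in> carrier G" using a(1) C'G by blast
    have "finite X" unfolding a(2) conjg_def using finC by simp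
    moreover have "\<one> \<in> X" unfolding a(2) by (rule one_in_conjg[OF C(1) aG])
    ultimately show ?thesis using card_conjg[OF CG aG] a(2) by (simp add: card_Diff_singleton)
  qed
  have "C' - {\<one>} \<subseteq> (\<Union>X\<in>?K. X - {\<one>})"
  proof
    fix x assume x: "x \<in> C' - {\<one>}"
    then obtain a where "a \<in> C'" "x \<in> conjg G C a" using cover by blast
    thus "x \<in> (\<Union>X\<in>?K. X - {\<one>})" using x by blast
  qed
  hence "card (C' - {\<one>}) \<le> card (\<Union>X\<in>?K. X - {\<one>})"
    by (rule card_mono[OF finite_UN_I[OF card_K(1)], rotated]) (use card_X in blast)
  also have "\<dots> \<le> (\<Sum>X\<in>?K. card (X - {\<one>}))" by (rule card_UN_le[OF card_K(1)])
  also have "\<dots> = card ?K * (card C - 1)" using card_X by (simp add: sum.cong[OF refl, of ?K _ "\<lambda>_. card C - 1"])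
  also have "\<dots> \<le> card ?R * (card C - 1)" using card_K(2) by simp
  finally have "card C' - 1 \<le> card ?R * card C - card ?R"
    using card_C'(1) oneC' by (simp add: card_Diff_singleton diff_mult_distrib2)
  moreover have "card ?R \<le> card ?R * card C" using cpos by simp
  ultimately show False using card_C'(2) k2 by linarith
qed

end

section \<open>Groups of finite Morley rank\<close>

locale fmr_group = group G for G (structure) +
  fixes D :: "nat \<Rightarrow> 'a list set set" and rk :: "'a list set \<Rightarrow> nat"
  assumes ranked: "ranked_universe (carrier G) D rk"
    and mult_definable: "{[x, y, x \<otimes> y] | x y. x \<in> carrier G \<and> y \<in> carrier G} \<in> D 3"
begin

lemma D_subset_Mn: "X \<in> D n \<Longrightarrow> X \<subseteq> Mn (carrier G) n"
  using ranked by (auto simp: ranked_universe_def)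

lemma Mn_in_D: "Mn (carrier G) n \<in> D n"
  using ranked by (simp add: ranked_universe_def)

lemma D_Compl: "X \<in> D n \<Longrightarrow> Mn (carrier G) n - X \<in> D n"
  using ranked by (simp add: ranked_universe_def)

lemma D_Int: "X \<in> D n \<Longrightarrow> Y \<in> D n \<Longrightarrow> X \<inter> Y \<in> D n"
  using ranked by (simp add: ranked_universe_def)

lemma D_diag: "i < n \<Longrightarrow> j < n \<Longrightarrow> {xs \<in> Mn (carrier G) n. xs ! i = xs ! j} \<in> D n"
  using ranked by (simp add: ranked_universe_def)

lemma D_append: "X \<in> D n \<Longrightarrow> Y \<in> D m \<Longrightarrow> {xs @ ys | xs ys. xs \<in> X \<and> ys \<in> Y} \<in> D (n + m)"
  using ranked by (simp add: ranked_universe_def)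

lemma D_take: "X \<in> D (n + m) \<Longrightarrow> take n ` X \<in> D n"
  using ranked by (simp add: ranked_universe_def)

lemma D_fibre: "X \<in> D (n + m) \<Longrightarrow> a \<in> Mn (carrier G) n \<Longrightarrow> {ys. a @ ys \<in> X} \<in> D m"
  using ranked by (simp add: ranked_universe_def)

lemma rk_Suc_le_iff:
  assumes "A \<in> D n" "A \<noteq> {}"
  shows "Suc k \<le> rk A \<longleftrightarrow>
    (\<exists>S :: nat \<Rightarrow> 'a list set. (\<forall>i. S i \<in> D n \<and> S i \<subseteq> A \<and> S i \<noteq> {} \<and> k \<le> rk (S i)) \<and>
       (\<forall>i j. i \<noteq> j \<longrightarrow> S i \<inter> S j = {}))"
  using ranked assms by (simp add: ranked_universe_def)

lemma D_rk_level: "def_fun D n m A B f \<Longrightarrow> {b \<in> B. fib A f b \<noteq> {} \<and> rk (fib A f b) = k} \<in> D m"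
  using ranked by (simp add: ranked_universe_def)

lemma rk_additive:
  assumes "def_fun D n m A B f" "f ` A = B" "A \<noteq> {}" "\<forall>b\<in>B. rk (fib A f b) = k"
  shows "rk A = rk B + k"
proof -
  have "\<forall>n m A B f k. def_fun D n m A B f \<longrightarrow> f ` A = B \<longrightarrow> A \<noteq> {} \<longrightarrow>
      (\<forall>b\<in>B. rk (fib A f b) = k) \<longrightarrow> rk A = rk B + k"
    using ranked unfolding ranked_universe_def by (elim conjE) assumption
  thus ?thesis using assms by blast
qed

definition dpred :: "nat \<Rightarrow> ('a list \<Rightarrow> bool) \<Rightarrow> bool" where
  "dpred n P \<longleftrightarrow> {xs \<in> Mn (carrier G) n. P xs} \<in> D n"

lemma Mn1: "xs \<in> Mn A (Suc 0) \<longleftrightarrow> (\<exists>x\<in>A. xs = [x])"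
  unfolding Mn_def by (auto simp: length_Suc_conv)

lemma Mn2: "xs \<in> Mn A 2 \<longleftrightarrow> (\<exists>x\<in>A. \<exists>y\<in>A. xs = [x, y])"
  unfolding Mn_def by (auto simp: length_Suc_conv numeral_2_eq_2)

lemma Mn3: "xs \<in> Mn A 3 \<longleftrightarrow> (\<exists>x\<in>A. \<exists>y\<in>A. \<exists>z\<in>A. xs = [x, y, z])"
  unfolding Mn_def by (auto simp: length_Suc_conv numeral_3_eq_3)

lemma Mn_length: "xs \<in> Mn A n \<Longrightarrow> length xs = n" by (simp add: Mn_def)

lemma Mn_snoc: "xs \<in> Mn A n \<Longrightarrow> y \<in> A \<Longrightarrow> xs @ [y] \<in> Mn A (Suc n)"
  by (simp add: Mn_def)

lemma Mn_take: "ys \<in> Mn A m \<Longrightarrow> n \<le> m \<Longrightarrow> take n ys \<in> Mn A n"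
  by (auto simp: Mn_def dest: in_set_takeD)

lemma dpred_cong:
  assumes "dpred n P" "\<And>xs. xs \<in> Mn (carrier G) n \<Longrightarrow> P xs = Q xs"
  shows "dpred n Q"
proof -
  have "{xs \<in> Mn (carrier G) n. P xs} = {xs \<in> Mn (carrier G) n. Q xs}" using assms(2) by blast
  thus ?thesis using assms(1) unfolding dpred_def by simp
qed

lemma dpred_True: "dpred n (\<lambda>_. True)" using Mn_in_D by (simp add: dpred_def)

lemma dpred_not:
  assumes "dpred n P"
  shows "dpred n (\<lambda>xs. \<not> P xs)"
proof -
  have e: "{xs \<in> Mn (carrier G) n. \<not> P xs} = Mn (carrier G) n - {xs \<in> Mn (carrier G) n. P xs}" by blast
  show ?thesis unfolding dpred_def e using assms unfolding dpred_def by (rule D_Compl)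
qed

lemma dpred_conj:
  assumes "dpred n P" "dpred n Q"
  shows "dpred n (\<lambda>xs. P xs \<and> Q xs)"
proof -
  have e: "{xs \<in> Mn (carrier G) n. P xs \<and> Q xs} =
      {xs \<in> Mn (carrier G) n. P xs} \<inter> {xs \<in> Mn (carrier G) n. Q xs}" by blast
  show ?thesis unfolding dpred_def e using assms unfolding dpred_def by (rule D_Int)
qed

lemma dpred_coord_eq: "i < n \<Longrightarrow> j < n \<Longrightarrow> dpred n (\<lambda>xs. xs ! i = xs ! j)"
  unfolding dpred_def by (rule D_diag)

lemma dpred_ex:
  assumes "dpred (Suc n) P"
  shows "dpred n (\<lambda>xs. \<exists>y\<in>carrier G. P (xs @ [y]))"
proof -
  have "take n ` {xs \<in> Mn (carrier G) (n + 1). P xs} \<in> D n"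
    using assms unfolding dpred_def by (intro D_take[where m=1]) simp
  moreover have "take n ` {xs \<in> Mn (carrier G) (n + 1). P xs} = {xs \<in> Mn (carrier G) n. \<exists>y\<in>carrier G. P (xs @ [y])}"
  proof (intro equalityI subsetI)
    fix xs assume "xs \<in> take n ` {xs \<in> Mn (carrier G) (n + 1). P xs}"
    then obtain zs where zs: "zs \<in> Mn (carrier G) (n+1)" "P zs" "xs = take n zs" by blast
    have len: "length zs = Suc n" using zs(1) by (simp add: Mn_def)
    hence e: "take n zs @ [zs ! n] = zs" by (simp add: take_Suc_conv_app_nth[symmetric])
    have y: "zs ! n \<in> carrier G" using zs(1) len unfolding Mn_def by (simp add: subset_iff)
    have t: "take n zs \<in> Mn (carrier G) n" using zs(1) len unfolding Mn_def by (auto dest: in_set_takeD)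
    have p: "P (take n zs @ [zs ! n])" using zs(2) e by simp
    show "xs \<in> {xs \<in> Mn (carrier G) n. \<exists>y\<in>carrier G. P (xs @ [y])}" using y t p zs(3) by blast
  next
    fix xs assume "xs \<in> {xs \<in> Mn (carrier G) n. \<exists>y\<in>carrier G. P (xs @ [y])}"
    then obtain y where "xs \<in> Mn (carrier G) n" "y \<in> carrier G" "P (xs @ [y])" by auto
    thus "xs \<in> take n ` {xs \<in> Mn (carrier G) (n + 1). P xs}"
      by (intro image_eqI[of _ _ "xs @ [y]"]) (auto simp: Mn_def)
  qed
  ultimately show ?thesis by (simp add: dpred_def)
qed

lemma dpred_drop_mem:
  assumes X: "X \<in> D k"
  shows "dpred (n + k) (\<lambda>zs. drop n zs \<in> X)"
proof -
  have "{xs @ ys | xs ys. xs \<in> Mn (carrier G) n \<and> ys \<in> X} \<in> D (n + k)" by (rule D_append[OF Mn_in_D X])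
  moreover have "{xs @ ys | xs ys. xs \<in> Mn (carrier G) n \<and> ys \<in> X} = {zs \<in> Mn (carrier G) (n + k). drop n zs \<in> X}"
  proof (intro equalityI subsetI)
    fix zs assume "zs \<in> {xs @ ys | xs ys. xs \<in> Mn (carrier G) n \<and> ys \<in> X}"
    then obtain xs ys where "zs = xs @ ys" "xs \<in> Mn (carrier G) n" "ys \<in> X" by auto
    moreover have "ys \<in> Mn (carrier G) k" using D_subset_Mn[OF X] \<open>ys \<in> X\<close> by auto
    ultimately show "zs \<in> {zs \<in> Mn (carrier G) (n + k). drop n zs \<in> X}" by (auto simp: Mn_def)
  next
    fix zs assume "zs \<in> {zs \<in> Mn (carrier G) (n + k). drop n zs \<in> X}"
    hence "zs = take n zs @ drop n zs" "take n zs \<in> Mn (carrier G) n" "drop n zs \<in> X"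
      by (auto simp: Mn_def dest: in_set_takeD)
    thus "zs \<in> {xs @ ys | xs ys. xs \<in> Mn (carrier G) n \<and> ys \<in> X}" by blast
  qed
  ultimately show ?thesis by (simp add: dpred_def)
qed

lemma dpred_reindex:
  assumes X: "X \<in> D k" and s: "\<forall>i<k. \<sigma> i < n"
  shows "dpred n (\<lambda>xs. map (\<lambda>i. xs ! \<sigma> i) [0..<k] \<in> X)"
proof -
  \<comment> \<open>append the reindexed tuple as \<open>k\<close> extra coordinates, equate them one by one, then project\<close>
  define Q where "Q j zs \<longleftrightarrow> drop n zs \<in> X \<and> (\<forall>i<j. zs ! (n+i) = zs ! (\<sigma> i))" for j zs
  have "Q 0 = (\<lambda>zs. drop n zs \<in> X)" by (simp add: Q_def fun_eq_iff)
  hence base: "dpred (n+k) (Q 0)" using dpred_drop_mem[OF X, of n] by simp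
  have step: "j \<le> k \<Longrightarrow> dpred (n+k) (Q j)" for j
  proof (induction j)
    case 0 thus ?case using base by simp
  next
    case (Suc j)
    have "\<sigma> j < n" using Suc s by auto
    hence "dpred (n+k) (\<lambda>zs. Q j zs \<and> zs ! (n+j) = zs ! (\<sigma> j))"
      using Suc by (intro dpred_conj dpred_coord_eq) auto
    moreover have "(\<lambda>zs. Q j zs \<and> zs ! (n+j) = zs ! (\<sigma> j)) = Q (Suc j)"
      by (auto simp: Q_def less_Suc_eq)
    ultimately show ?case by simp
  qed
  have "take n ` {zs \<in> Mn (carrier G) (n+k). Q k zs} \<in> D n"
    using step[of k] unfolding dpred_def by (intro D_take) simp
  moreover have "take n ` {zs \<in> Mn (carrier G) (n+k). Q k zs} =
      {xs \<in> Mn (carrier G) n. map (\<lambda>i. xs ! \<sigma> i) [0..<k] \<in> X}"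
  proof (intro equalityI subsetI)
    fix xs assume "xs \<in> take n ` {zs \<in> Mn (carrier G) (n+k). Q k zs}"
    then obtain zs where zs: "zs \<in> Mn (carrier G) (n+k)" "Q k zs" "xs = take n zs" by auto
    have "map (\<lambda>i. xs ! \<sigma> i) [0..<k] = drop n zs"
      using zs s by (intro nth_equalityI) (auto simp: Mn_def Q_def)
    thus "xs \<in> {xs \<in> Mn (carrier G) n. map (\<lambda>i. xs ! \<sigma> i) [0..<k] \<in> X}"
      using zs by (auto simp: Mn_def Q_def dest: in_set_takeD)
  next
    fix xs assume xs: "xs \<in> {xs \<in> Mn (carrier G) n. map (\<lambda>i. xs ! \<sigma> i) [0..<k] \<in> X}"
    define zs where "zs = xs @ map (\<lambda>i. xs ! \<sigma> i) [0..<k]"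
    have "zs \<in> Mn (carrier G) (n+k)" using xs s by (auto simp: Mn_def zs_def)
    moreover have "Q k zs" using xs s by (auto simp: Q_def zs_def Mn_def nth_append)
    moreover have "xs = take n zs" using xs by (auto simp: zs_def Mn_def)
    ultimately show "xs \<in> take n ` {zs \<in> Mn (carrier G) (n+k). Q k zs}" by blast
  qed
  ultimately show ?thesis by (simp add: dpred_def)
qed

lemma D_singleton1:
  assumes "a \<in> carrier G"
  shows "{[a]} \<in> D 1"
proof -
  have "{xs \<in> Mn (carrier G) (1+1). xs ! 0 = xs ! 1} \<in> D (1+1)" by (rule D_diag) auto
  hence "{ys. [a] @ ys \<in> {xs \<in> Mn (carrier G) (1+1). xs ! 0 = xs ! 1}} \<in> D 1"
    by (rule D_fibre) (use assms in \<open>simp add: Mn_def\<close>)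
  moreover have "{ys. [a] @ ys \<in> {xs \<in> Mn (carrier G) (1+1). xs ! 0 = xs ! 1}} = {[a]}"
  proof (intro equalityI subsetI)
    fix ys assume "ys \<in> {ys. [a] @ ys \<in> {xs \<in> Mn (carrier G) (1+1). xs ! 0 = xs ! 1}}"
    hence "length ys = 1" "ys ! 0 = a" unfolding Mn_def by auto
    thus "ys \<in> {[a]}" by (cases ys) auto
  qed (use assms in \<open>simp add: Mn_def\<close>)
  ultimately show ?thesis by simp
qed

lemma dpred_coord_const:
  assumes "a \<in> carrier G" "i < n"
  shows "dpred n (\<lambda>xs. xs ! i = a)"
proof -
  have "dpred n (\<lambda>xs. map (\<lambda>t. xs ! ((\<lambda>_. i) t)) [0..<1] \<in> {[a]})"
    by (rule dpred_reindex[OF D_singleton1[OF assms(1)]]) (use assms in auto)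
  thus ?thesis by (rule dpred_cong) simp
qed

lemma dpred_mult:
  assumes "i < n" "j < n" "l < n"
  shows "dpred n (\<lambda>xs. xs ! l = xs ! i \<otimes> xs ! j)"
proof -
  define \<sigma> where "\<sigma> t = (if t = 0 then i else if t = 1 then j else l)" for t :: nat
  have "dpred n (\<lambda>xs. map (\<lambda>t. xs ! \<sigma> t) [0..<3] \<in> {[x, y, x \<otimes> y] | x y. x \<in> carrier G \<and> y \<in> carrier G})"
    by (rule dpred_reindex[OF mult_definable]) (use assms in \<open>auto simp: \<sigma>_def\<close>)
  note d = this
  have e: "map (\<lambda>t. xs ! \<sigma> t) [0..<3] = [xs ! i, xs ! j, xs ! l]" for xs
    by (simp add: \<sigma>_def numeral_3_eq_3 upt_rec)
  from d show ?thesis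
  proof (rule dpred_cong)
    fix xs assume "xs \<in> Mn (carrier G) n"
    hence "xs ! i \<in> carrier G" "xs ! j \<in> carrier G" using assms by (auto simp: Mn_def)
    thus "(map (\<lambda>t. xs ! \<sigma> t) [0..<3] \<in> {[x, y, x \<otimes> y] | x y. x \<in> carrier G \<and> y \<in> carrier G}) =
        (xs ! l = xs ! i \<otimes> xs ! j)"
      unfolding e by auto
  qed
qed

lemma dpred_coord_in:
  assumes "definable1 D S" "i < n"
  shows "dpred n (\<lambda>xs. xs ! i \<in> S)"
proof -
  have "dpred n (\<lambda>xs. map (\<lambda>t. xs ! ((\<lambda>_. i) t)) [0..<1] \<in> (\<lambda>x. [x]) ` S)"
    by (rule dpred_reindex) (use assms in \<open>auto simp: definable1_def\<close>)
  thus ?thesis by (rule dpred_cong) auto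
qed

lemma dpred_coords_in:
  assumes "X \<in> D 2" "i < n" "j < n"
  shows "dpred n (\<lambda>xs. [xs ! i, xs ! j] \<in> X)"
proof -
  define \<sigma> where "\<sigma> t = (if t = 0 then i else j)" for t :: nat
  have "dpred n (\<lambda>xs. map (\<lambda>t. xs ! \<sigma> t) [0..<2] \<in> X)"
    by (rule dpred_reindex[OF assms(1)]) (use assms in \<open>auto simp: \<sigma>_def\<close>)
  note d = this
  have e: "map (\<lambda>t. xs ! \<sigma> t) [0..<2] = [xs ! i, xs ! j]" for xs
    by (simp add: \<sigma>_def numeral_2_eq_2 upt_rec)
  from d show ?thesis by (rule dpred_cong) (simp only: e)
qed

lemma D2_of_dpred:
  assumes "dpred 2 (\<lambda>xs. P (xs ! 0) (xs ! 1))"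
  shows "{[x, y] | x y. x \<in> carrier G \<and> y \<in> carrier G \<and> P x y} \<in> D 2"
proof -
  have "{[x, y] | x y. x \<in> carrier G \<and> y \<in> carrier G \<and> P x y} = {xs \<in> Mn (carrier G) 2. P (xs ! 0) (xs ! 1)}"
    by (auto simp: Mn2)
  thus ?thesis using assms unfolding dpred_def by simp
qed

lemma D2_elem: "A \<in> D 2 \<Longrightarrow> p \<in> A \<Longrightarrow> \<exists>x\<in>carrier G. \<exists>y\<in>carrier G. p = [x, y]"
  using D_subset_Mn[of A 2] Mn2 by blast

lemma D2_carrier: "A \<in> D 2 \<Longrightarrow> [x, y] \<in> A \<Longrightarrow> x \<in> carrier G \<and> y \<in> carrier G"
  using D_subset_Mn[of A 2] by (auto simp: Mn2)

lemma D2_elem_eq: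
  assumes "A \<in> D 2" "p \<in> A"
  shows "p = [p ! 0, p ! 1]"
proof -
  obtain x y where "p = [x, y]" using D2_elem[OF assms] by blast
  thus ?thesis by simp
qed

lemma dpred_mem_D2:
  assumes "A \<in> D 2"
  shows "dpred 2 (\<lambda>xs. xs \<in> A)"
proof -
  have "dpred 2 (\<lambda>xs. [xs ! 0, xs ! 1] \<in> A)" by (rule dpred_coords_in[OF assms]) auto
  thus ?thesis by (rule dpred_cong) (auto simp: Mn2)
qed

lemma D_Diff:
  assumes "A \<in> D n" "B \<in> D n"
  shows "A - B \<in> D n"
proof -
  have "A - B = A \<inter> (Mn (carrier G) n - B)" using D_subset_Mn[OF assms(1)] by blast
  thus ?thesis using assms by (simp add: D_Int D_Compl)
qed

lemma D_Un:
  assumes "A \<in> D n" "B \<in> D n"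
  shows "A \<union> B \<in> D n"
proof -
  have "A \<union> B = Mn (carrier G) n - ((Mn (carrier G) n - A) \<inter> (Mn (carrier G) n - B))"
    using D_subset_Mn[OF assms(1)] D_subset_Mn[OF assms(2)] by blast
  thus ?thesis using assms by (simp add: D_Int D_Compl)
qed

lemma D_empty: "{} \<in> D n" using D_Diff[OF Mn_in_D Mn_in_D] by simp

lemma D_UN_lessThan: "(\<And>j. j < (m::nat) \<Longrightarrow> A j \<in> D d) \<Longrightarrow> (\<Union>j<m. A j) \<in> D d"
proof (induction m)
  case 0 thus ?case using D_empty by simp
next
  case (Suc m)
  have "(\<Union>j<Suc m. A j) = (\<Union>j<m. A j) \<union> A m" by (auto simp: less_Suc_eq)
  thus ?case using Suc by (simp add: D_Un)
qed

definition dterm :: "nat \<Rightarrow> ('a list \<Rightarrow> 'a) \<Rightarrow> bool" where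
  "dterm n t \<longleftrightarrow> (\<forall>xs\<in>Mn (carrier G) n. t xs \<in> carrier G) \<and> dpred (Suc n) (\<lambda>ys. ys ! n = t (take n ys))"

lemma dterm_carrier: "dterm n t \<Longrightarrow> xs \<in> Mn (carrier G) n \<Longrightarrow> t xs \<in> carrier G"
  by (simp add: dterm_def)

lemma dpred_subst:
  assumes t: "dterm n t" and P: "dpred (Suc n) P"
  shows "dpred n (\<lambda>xs. P (xs @ [t xs]))"
proof -
  have "dpred (Suc n) (\<lambda>ys. ys ! n = t (take n ys) \<and> P ys)" using t P unfolding dterm_def by (intro dpred_conj) auto
  hence "dpred n (\<lambda>xs. \<exists>y\<in>carrier G. (xs @ [y]) ! n = t (take n (xs @ [y])) \<and> P (xs @ [y]))" by (rule dpred_ex)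
  thus ?thesis
  proof (rule dpred_cong)
    fix xs assume xs: "xs \<in> Mn (carrier G) n"
    hence l: "length xs = n" by (simp add: Mn_def)
    have tc: "t xs \<in> carrier G" using t xs by (simp add: dterm_def)
    show "(\<exists>y\<in>carrier G. (xs @ [y]) ! n = t (take n (xs @ [y])) \<and> P (xs @ [y])) = P (xs @ [t xs])"
      using l tc by auto
  qed
qed

lemma map_take_snoc:
  assumes "length ys = Suc m" "n \<le> m"
  shows "map (\<lambda>i. ys ! (if i < n then i else m)) [0..<Suc n] = take n ys @ [ys ! m]"
  using assms by (intro nth_equalityI) (auto simp: nth_append less_Suc_eq)

lemma dterm_lift:
  assumes t: "dterm n t" and nm: "n \<le> m"
  shows "dterm m (\<lambda>ys. t (take n ys))"
proof -
  let ?X = "{ys \<in> Mn (carrier G) (Suc n). ys ! n = t (take n ys)}"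
  have X: "?X \<in> D (Suc n)" using t by (simp add: dterm_def dpred_def)
  have "dpred (Suc m) (\<lambda>ys. map (\<lambda>i. ys ! (if i < n then i else m)) [0..<Suc n] \<in> ?X)"
    by (rule dpred_reindex[OF X]) (use nm in auto)
  hence "dpred (Suc m) (\<lambda>ys. ys ! m = t (take n (take m ys)))"
  proof (rule dpred_cong)
    fix ys assume ys: "ys \<in> Mn (carrier G) (Suc m)"
    hence l: "length ys = Suc m" by (simp add: Mn_def)
    have e: "map (\<lambda>i. ys ! (if i < n then i else m)) [0..<Suc n] = take n ys @ [ys ! m]"
      by (rule map_take_snoc[OF l nm])
    have tkm: "take n ys \<in> Mn (carrier G) n" using Mn_take[OF ys, of n] nm by simp
    have ym: "ys ! m \<in> carrier G" using ys l by (auto simp: Mn_def)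
    have m1: "take n ys @ [ys ! m] \<in> Mn (carrier G) (Suc n)" by (rule Mn_snoc[OF tkm ym])
    have tk: "take n (take m ys) = take n ys" using nm by (simp add: min_def)
    show "(map (\<lambda>i. ys ! (if i < n then i else m)) [0..<Suc n] \<in> ?X) =
          (ys ! m = t (take n (take m ys)))"
      unfolding e tk using m1 l nm by (simp add: nth_append)
  qed
  moreover have "\<forall>xs\<in>Mn (carrier G) m. t (take n xs) \<in> carrier G"
    using t nm by (auto simp: dterm_def intro: Mn_take)
  ultimately show ?thesis unfolding dterm_def by simp
qed

lemma dterm_cong:
  assumes "dterm n s" "\<And>xs. xs \<in> Mn (carrier G) n \<Longrightarrow> s xs = t xs"
  shows "dterm n t"
proof -
  have "dpred (Suc n) (\<lambda>ys. ys ! n = t (take n ys))"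
  proof (rule dpred_cong)
    show "dpred (Suc n) (\<lambda>ys. ys ! n = s (take n ys))" using assms(1) by (simp add: dterm_def)
    fix ys assume "ys \<in> Mn (carrier G) (Suc n)"
    hence "take n ys \<in> Mn (carrier G) n" by (rule Mn_take) simp
    thus "(ys ! n = s (take n ys)) = (ys ! n = t (take n ys))" using assms(2) by simp
  qed
  moreover have "\<forall>xs\<in>Mn (carrier G) n. t xs \<in> carrier G" using assms by (simp add: dterm_def)
  ultimately show ?thesis by (simp add: dterm_def)
qed

lemma dterm_coord:
  assumes "i < n"
  shows "dterm n (\<lambda>xs. xs ! i)"
proof -
  have "dpred (Suc n) (\<lambda>ys. ys ! n = ys ! i)" using assms by (intro dpred_coord_eq) auto
  hence "dpred (Suc n) (\<lambda>ys. ys ! n = take n ys ! i)" by (rule dpred_cong) (use assms in simp)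
  thus ?thesis unfolding dterm_def using assms by (auto simp: Mn_def)
qed

lemma dterm_const:
  assumes "a \<in> carrier G"
  shows "dterm n (\<lambda>xs. a)"
  unfolding dterm_def using assms by (auto intro: dpred_coord_const)

lemma dterm_mult:
  assumes s: "dterm n s" and t: "dterm n t"
  shows "dterm n (\<lambda>xs. s xs \<otimes> t xs)"
proof -
  have a0: "dpred (Suc (Suc (Suc n))) (\<lambda>zs. zs ! n = zs ! (Suc n) \<otimes> zs ! (Suc (Suc n)))" by (rule dpred_mult) auto
  have t2: "dterm (Suc (Suc n)) (\<lambda>ws. t (take n ws))" by (rule dterm_lift[OF t]) simp
  have a1: "dpred (Suc (Suc n)) (\<lambda>ws. ws ! n = ws ! (Suc n) \<otimes> t (take n ws))"
    using dpred_subst[OF t2 a0] by (rule dpred_cong) (auto dest!: Mn_length simp: nth_append)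
  have s1: "dterm (Suc n) (\<lambda>ws. s (take n ws))" by (rule dterm_lift[OF s]) simp
  have a2: "dpred (Suc n) (\<lambda>ys. ys ! n = s (take n ys) \<otimes> t (take n ys))"
    using dpred_subst[OF s1 a1] by (rule dpred_cong) (auto dest!: Mn_length simp: nth_append)
  moreover have "\<forall>xs\<in>Mn (carrier G) n. s xs \<otimes> t xs \<in> carrier G" using s t by (simp add: dterm_def)
  ultimately show ?thesis unfolding dterm_def by simp
qed

lemma dterm_inv:
  assumes t: "dterm n t"
  shows "dterm n (\<lambda>xs. inv (t xs))"
proof -
  have a0: "dpred (Suc (Suc (Suc n))) (\<lambda>zs. zs ! (Suc (Suc n)) = zs ! n \<otimes> zs ! (Suc n))" by (rule dpred_mult) auto
  have a1: "dpred (Suc (Suc n)) (\<lambda>ws. \<one> = ws ! n \<otimes> ws ! (Suc n))"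
    using dpred_subst[OF dterm_const[OF one_closed] a0] by (rule dpred_cong) (auto dest!: Mn_length simp: nth_append)
  have t1: "dterm (Suc n) (\<lambda>ws. t (take n ws))" by (rule dterm_lift[OF t]) simp
  have a2: "dpred (Suc n) (\<lambda>ys. \<one> = ys ! n \<otimes> t (take n ys))"
    using dpred_subst[OF t1 a1] by (rule dpred_cong) (auto dest!: Mn_length simp: nth_append)
  have a3: "dpred (Suc n) (\<lambda>ys. ys ! n = inv (t (take n ys)))"
  proof (rule dpred_cong[OF a2])
    fix ys assume ys: "ys \<in> Mn (carrier G) (Suc n)"
    have yn: "ys ! n \<in> carrier G" using ys by (auto simp: Mn_def)
    have tc: "t (take n ys) \<in> carrier G" using t Mn_take[OF ys, of n] by (simp add: dterm_def)
    show "(\<one> = ys ! n \<otimes> t (take n ys)) = (ys ! n = inv (t (take n ys)))"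
      using yn tc by (metis inv_equality r_inv)
  qed
  moreover have "\<forall>xs\<in>Mn (carrier G) n. inv (t xs) \<in> carrier G" using t by (simp add: dterm_def)
  ultimately show ?thesis unfolding dterm_def by simp
qed

lemma dterm_nth0_1: "dterm 1 (\<lambda>xs. xs ! 0)" by (rule dterm_coord) simp

lemma dterm_nth0_2: "dterm 2 (\<lambda>xs. xs ! 0)" by (rule dterm_coord) simp

lemma dterm_nth1_2: "dterm 2 (\<lambda>xs. xs ! 1)" by (rule dterm_coord) simp

lemma dpred_dterm_eq:
  assumes s: "dterm n s" and t: "dterm n t"
  shows "dpred n (\<lambda>xs. s xs = t xs)"
proof -
  have a0: "dpred (Suc (Suc n)) (\<lambda>zs. zs ! n = zs ! (Suc n))" by (rule dpred_coord_eq) auto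
  have t1: "dterm (Suc n) (\<lambda>ws. t (take n ws))" by (rule dterm_lift[OF t]) simp
  have a1: "dpred (Suc n) (\<lambda>ws. ws ! n = t (take n ws))"
    using dpred_subst[OF t1 a0] by (rule dpred_cong) (auto dest!: Mn_length simp: nth_append)
  show ?thesis using dpred_subst[OF s a1] by (rule dpred_cong) (auto dest!: Mn_length simp: nth_append)
qed

lemma dpred_dterm_in:
  assumes t: "dterm n t" and S: "definable1 D S"
  shows "dpred n (\<lambda>xs. t xs \<in> S)"
proof -
  have a0: "dpred (Suc n) (\<lambda>zs. zs ! n \<in> S)" by (rule dpred_coord_in[OF S]) auto
  show ?thesis using dpred_subst[OF t a0] by (rule dpred_cong) (auto dest!: Mn_length simp: nth_append)
qed

lemma definable1_of_dpred:
  assumes "dpred 1 (\<lambda>xs. P (xs ! 0))"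
  shows "definable1 D {x \<in> carrier G. P x}"
proof -
  have "(\<lambda>x. [x]) ` {x \<in> carrier G. P x} = {xs \<in> Mn (carrier G) 1. P (xs ! 0)}"
    by (auto simp: Mn1)
  thus ?thesis using assms unfolding dpred_def definable1_def by simp
qed

lemma definable1_subset: "definable1 D S \<Longrightarrow> S \<subseteq> carrier G"
  using D_subset_Mn[of "(\<lambda>x. [x]) ` S" 1] unfolding definable1_def Mn_def by auto

lemma inj_singleton_list: "inj (\<lambda>x::'a. [x])" by (rule injI) simp

lemma definable1_Int: "definable1 D X \<Longrightarrow> definable1 D Y \<Longrightarrow> definable1 D (X \<inter> Y)"
  unfolding definable1_def using image_Int[OF inj_singleton_list, of X Y] D_Int by simp

lemma definable1_Un: "definable1 D X \<Longrightarrow> definable1 D Y \<Longrightarrow> definable1 D (X \<union> Y)"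
  unfolding definable1_def using D_Un by (simp add: image_Un)

lemma definable1_Diff: "definable1 D X \<Longrightarrow> definable1 D Y \<Longrightarrow> definable1 D (X - Y)"
  unfolding definable1_def using image_set_diff[OF inj_singleton_list, of X Y] D_Diff by simp

lemma definable1_carrier: "definable1 D (carrier G)"
proof -
  have "(\<lambda>x. [x]) ` carrier G = Mn (carrier G) 1" by (auto simp: Mn1)
  thus ?thesis unfolding definable1_def using Mn_in_D by simp
qed

lemma definable1_empty: "definable1 D {}"
  using definable1_Diff[OF definable1_carrier definable1_carrier] by simp

lemma definable1_singleton: "a \<in> carrier G \<Longrightarrow> definable1 D {a}"
  unfolding definable1_def using D_singleton1 by simp

lemma definable1_UN_lessThan: "(\<And>j. j < (m::nat) \<Longrightarrow> definable1 D (A j)) \<Longrightarrow> definable1 D (\<Union>j<m. A j)"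
proof (induction m)
  case 0 thus ?case using definable1_empty by simp
next
  case (Suc m)
  have "(\<Union>j<Suc m. A j) = (\<Union>j<m. A j) \<union> A m" by (auto simp: less_Suc_eq)
  thus ?case using Suc by (simp add: definable1_Un)
qed

lemma D1_proj_fst:
  assumes "A \<in> D 2"
  shows "(\<lambda>x. [x]) ` {x. \<exists>y. [x, y] \<in> A} \<in> D 1"
proof -
  have "dpred 1 (\<lambda>xs. \<exists>y\<in>carrier G. [(xs @ [y]) ! 0, (xs @ [y]) ! 1] \<in> A)"
    by (rule dpred_ex) (rule dpred_coords_in[OF assms], auto)
  hence "dpred 1 (\<lambda>xs. \<exists>y. [xs ! 0, y] \<in> A)"
    by (rule dpred_cong) (use D2_carrier[OF assms] in \<open>auto simp: Mn1\<close>)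
  hence "definable1 D {x \<in> carrier G. \<exists>y. [x, y] \<in> A}" by (rule definable1_of_dpred)
  moreover have "{x \<in> carrier G. \<exists>y. [x, y] \<in> A} = {x. \<exists>y. [x, y] \<in> A}" using D2_carrier[OF assms] by blast
  ultimately show ?thesis by (simp add: definable1_def)
qed

lemma D1_proj_snd:
  assumes "A \<in> D 2"
  shows "(\<lambda>x. [x]) ` {y. \<exists>x. [x, y] \<in> A} \<in> D 1"
proof -
  have "dpred 1 (\<lambda>xs. \<exists>y\<in>carrier G. [(xs @ [y]) ! 1, (xs @ [y]) ! 0] \<in> A)"
    by (rule dpred_ex) (rule dpred_coords_in[OF assms], auto)
  hence "dpred 1 (\<lambda>xs. \<exists>y. [y, xs ! 0] \<in> A)"
    by (rule dpred_cong) (use D2_carrier[OF assms] in \<open>auto simp: Mn1\<close>)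
  hence "definable1 D {x \<in> carrier G. \<exists>y. [y, x] \<in> A}" by (rule definable1_of_dpred)
  moreover have "{x \<in> carrier G. \<exists>y. [y, x] \<in> A} = {y. \<exists>x. [x, y] \<in> A}" using D2_carrier[OF assms] by blast
  ultimately show ?thesis by (simp add: definable1_def)
qed

lemma def_fun_coord:
  assumes "A \<in> D 2" "c < 2" "B \<in> D 1" "(\<lambda>p. [p ! c]) ` A \<subseteq> B"
  shows "def_fun D 2 1 A B (\<lambda>p. [p ! c])"
proof -
  have cc: "c = 0 \<or> c = 1" using assms(2) by auto
  have d1: "dpred 3 (\<lambda>zs. [zs ! 0, zs ! 1] \<in> A)" by (rule dpred_coords_in[OF assms(1)]) simp_all
  have d2: "dpred 3 (\<lambda>zs. zs ! 2 = zs ! c)" by (rule dpred_coord_eq) (use cc in auto)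
  have d: "dpred 3 (\<lambda>zs. [zs ! 0, zs ! 1] \<in> A \<and> zs ! 2 = zs ! c)" by (rule dpred_conj[OF d1 d2])
  have "{xs @ [xs ! c] | xs. xs \<in> A} = {zs \<in> Mn (carrier G) 3. [zs ! 0, zs ! 1] \<in> A \<and> zs ! 2 = zs ! c}"
  proof (intro equalityI subsetI)
    fix zs assume "zs \<in> {xs @ [xs ! c] | xs. xs \<in> A}"
    then obtain xs where xs: "xs \<in> A" "zs = xs @ [xs ! c]" by blast
    then obtain x y where xy: "x \<in> carrier G" "y \<in> carrier G" "xs = [x, y]" using D2_elem[OF assms(1)] by blast
    have c: "[x, y] ! c \<in> carrier G" "[x, y, [x, y] ! c] ! c = [x, y] ! c"
      using cc xy by auto
    have z: "zs = [x, y, [x, y] ! c]" using xs xy by simp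
    have "zs \<in> Mn (carrier G) 3" unfolding Mn3 z using xy c by blast
    moreover have "[zs ! 0, zs ! 1] \<in> A" using xs xy z by simp
    moreover have "zs ! 2 = zs ! c" unfolding z using c by simp
    ultimately show "zs \<in> {zs \<in> Mn (carrier G) 3. [zs ! 0, zs ! 1] \<in> A \<and> zs ! 2 = zs ! c}" by blast
  next
    fix zs assume zs: "zs \<in> {zs \<in> Mn (carrier G) 3. [zs ! 0, zs ! 1] \<in> A \<and> zs ! 2 = zs ! c}"
    then obtain x y z where e: "zs = [x, y, z]" unfolding Mn3 by blast
    have A: "[x, y] \<in> A" "z = [x, y, z] ! c" using zs unfolding e by simp_all
    have "z = [x, y] ! c" using A(2) cc by auto
    hence "zs = [x, y] @ [[x, y] ! c]" using e by simp
    thus "zs \<in> {xs @ [xs ! c] | xs. xs \<in> A}" using A(1) by blast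
  qed
  thus ?thesis using d assms unfolding def_fun_def dpred_def by simp
qed

definition rk1 :: "'a set \<Rightarrow> nat" where "rk1 S = rk ((\<lambda>x. [x]) ` S)"

lemma rk_Suc_leI:
  fixes T :: "nat \<Rightarrow> 'a list set"
  assumes "A \<in> D n" "\<And>i. T i \<in> D n" "\<And>i. T i \<subseteq> A" "\<And>i. T i \<noteq> {}" "\<And>i. k \<le> rk (T i)"
    "\<And>i j. i \<noteq> j \<Longrightarrow> T i \<inter> T j = {}"
  shows "Suc k \<le> rk A"
proof -
  have "A \<noteq> {}" using assms(3)[of 0] assms(4)[of 0] by blast
  show ?thesis unfolding rk_Suc_le_iff[OF assms(1) \<open>A \<noteq> {}\<close>]
    by (intro exI[of _ T] conjI allI impI) (simp_all add: assms)
qed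

lemma rk_Suc_leD:
  assumes "A \<in> D n" "A \<noteq> {}" "Suc k \<le> rk A"
  shows "\<exists>T :: nat \<Rightarrow> 'a list set. (\<forall>i. T i \<in> D n \<and> T i \<subseteq> A \<and> T i \<noteq> {} \<and> k \<le> rk (T i)) \<and>
    (\<forall>i j. i \<noteq> j \<longrightarrow> T i \<inter> T j = {})"
  using assms(3) unfolding rk_Suc_le_iff[OF assms(1,2)] .

lemma rk_finite:
  assumes "A \<in> D n" "finite A" "A \<noteq> {}"
  shows "rk A = 0"
proof (rule ccontr)
  assume "rk A \<noteq> 0" hence "Suc 0 \<le> rk A" by simp
  then obtain S :: "nat \<Rightarrow> 'a list set" where S0: "\<forall>i. S i \<in> D n \<and> S i \<subseteq> A \<and> S i \<noteq> {} \<and> 0 \<le> rk (S i)"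
    "\<forall>i j. i \<noteq> j \<longrightarrow> S i \<inter> S j = {}"
    using rk_Suc_leD[OF assms(1,3) \<open>Suc 0 \<le> rk A\<close>] by blast
  have S: "\<And>i. S i \<in> D n" "\<And>i. S i \<subseteq> A" "\<And>i. S i \<noteq> {}" "\<And>i. 0 \<le> rk (S i)"
    "\<And>i j. i \<noteq> j \<Longrightarrow> S i \<inter> S j = {}" using S0 by simp_all
  have "inj S"
  proof (rule injI)
    fix i j assume e: "S i = S j"
    show "i = j"
    proof (rule ccontr)
      assume "i \<noteq> j" hence "S i \<inter> S j = {}" by (rule S(5))
      with e S(3)[of i] show False by simp
    qed
  qed
  moreover have "range S \<subseteq> Pow A" using S(2) by auto
  hence "finite (range S)" by (rule finite_subset) (simp add: assms(2))
  ultimately have "finite (UNIV :: nat set)" using finite_imageD[of S UNIV] by simp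
  thus False by simp
qed

lemma rk_mono:
  assumes "A \<in> D n" "B \<in> D n" "A \<subseteq> B" "A \<noteq> {}"
  shows "rk A \<le> rk B"
proof (cases "rk A")
  case 0 thus ?thesis by simp
next
  case (Suc k)
  obtain S :: "nat \<Rightarrow> 'a list set" where S0: "\<forall>i. S i \<in> D n \<and> S i \<subseteq> A \<and> S i \<noteq> {} \<and> k \<le> rk (S i)"
    "\<forall>i j. i \<noteq> j \<longrightarrow> S i \<inter> S j = {}"
    using rk_Suc_leD[OF assms(1,4), of k] Suc by auto
  have S: "\<And>i. S i \<in> D n" "\<And>i. S i \<subseteq> A" "\<And>i. S i \<noteq> {}" "\<And>i. k \<le> rk (S i)"
    "\<And>i j. i \<noteq> j \<Longrightarrow> S i \<inter> S j = {}" using S0 by simp_all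
  have "Suc k \<le> rk B"
    using S(1,3,4,5) subset_trans[OF S(2) assms(3)] by (intro rk_Suc_leI[OF assms(2), of S])
  thus ?thesis using Suc by simp
qed

lemma rk_Un_cases:
  "A \<in> D n \<Longrightarrow> B \<in> D n \<Longrightarrow> A \<union> B \<noteq> {} \<Longrightarrow> k \<le> rk (A \<union> B) \<Longrightarrow>
    (A \<noteq> {} \<and> k \<le> rk A) \<or> (B \<noteq> {} \<and> k \<le> rk B)"
proof (induction k arbitrary: A B)
  case 0 thus ?case by auto
next
  case (Suc k)
  have AB: "A \<union> B \<in> D n" using Suc.prems by (simp add: D_Un)
  obtain S :: "nat \<Rightarrow> 'a list set" where S0: "\<forall>i. S i \<in> D n \<and> S i \<subseteq> A \<union> B \<and> S i \<noteq> {} \<and> k \<le> rk (S i)"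
    "\<forall>i j. i \<noteq> j \<longrightarrow> S i \<inter> S j = {}"
    using rk_Suc_leD[OF AB Suc.prems(3,4)] by blast
  have S: "\<And>i. S i \<in> D n" "\<And>i. S i \<subseteq> A \<union> B" "\<And>i. S i \<noteq> {}" "\<And>i. k \<le> rk (S i)"
    "\<And>i j. i \<noteq> j \<Longrightarrow> S i \<inter> S j = {}" using S0 by simp_all
  define SA where "SA i = S i \<inter> A" for i
  define SB where "SB i = S i - A" for i
  have D: "SA i \<in> D n" "SB i \<in> D n" for i
    unfolding SA_def SB_def using S(1) Suc.prems(1) by (simp_all add: D_Int D_Diff)
  have sides: "SA i \<subseteq> A" "SB i \<subseteq> B" for i using S(2)[of i] unfolding SA_def SB_def by blast+
  have disj: "SA (f i) \<inter> SA (f j) = {}" "SB (f i) \<inter> SB (f j) = {}"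
    if "inj f" "i \<noteq> j" for f :: "nat \<Rightarrow> nat" and i j
  proof -
    have "f i \<noteq> f j" using that by (simp add: inj_eq)
    thus "SA (f i) \<inter> SA (f j) = {}" "SB (f i) \<inter> SB (f j) = {}" using S(5) unfolding SA_def SB_def by blast+
  qed
  \<comment> \<open>each \<open>S i\<close> has a part of rank \<open>\<ge> k\<close> in \<open>A\<close> or in \<open>B\<close>; infinitely many fall on one side\<close>
  have "(SA i \<noteq> {} \<and> k \<le> rk (SA i)) \<or> (SB i \<noteq> {} \<and> k \<le> rk (SB i))" for i
  proof -
    have eq: "SA i \<union> SB i = S i" unfolding SA_def SB_def by blast
    have "SA i \<union> SB i \<noteq> {}" "k \<le> rk (SA i \<union> SB i)" unfolding eq by (rule S(3), rule S(4))
    from Suc.IH[OF D(1) D(2) this] show ?thesis .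
  qed
  then obtain f :: "nat \<Rightarrow> nat" where f: "inj f"
    and one_side: "(\<forall>j. SA (f j) \<noteq> {} \<and> k \<le> rk (SA (f j))) \<or> (\<forall>j. SB (f j) \<noteq> {} \<and> k \<le> rk (SB (f j)))"
    using infinite_subsequence_cases[of "\<lambda>i. SA i \<noteq> {} \<and> k \<le> rk (SA i)" "\<lambda>i. SB i \<noteq> {} \<and> k \<le> rk (SB i)"]
    by blast
  thus ?case
  proof (elim disjE)
    assume A: "\<forall>j. SA (f j) \<noteq> {} \<and> k \<le> rk (SA (f j))"
    have "Suc k \<le> rk A"
      by (rule rk_Suc_leI[OF Suc.prems(1), of "\<lambda>j. SA (f j)"]) (use A D(1) disj(1)[OF f] sides(1) in auto)
    thus ?thesis using A sides(1)[of "f 0"] by blast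
  next
    assume B: "\<forall>j. SB (f j) \<noteq> {} \<and> k \<le> rk (SB (f j))"
    have "Suc k \<le> rk B"
      by (rule rk_Suc_leI[OF Suc.prems(2), of "\<lambda>j. SB (f j)"]) (use B D(2) disj(2)[OF f] sides(2) in auto)
    thus ?thesis using B sides(2)[of "f 0"] by blast
  qed
qed

lemma rk_UN_lessThan_cases: "(\<And>j. j < (m::nat) \<Longrightarrow> A j \<in> D d) \<Longrightarrow> (\<Union>j<m. A j) \<noteq> {} \<Longrightarrow> k \<le> rk (\<Union>j<m. A j) \<Longrightarrow>
   \<exists>j<m. A j \<noteq> {} \<and> k \<le> rk (A j)"
proof (induction m)
  case 0 thus ?case by simp
next
  case (Suc m)
  have e: "(\<Union>j<Suc m. A j) = (\<Union>j<m. A j) \<union> A m" by (auto simp: less_Suc_eq)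
  have d: "(\<Union>j<m. A j) \<in> D d" using Suc.prems(1) by (intro D_UN_lessThan) simp
  have "((\<Union>j<m. A j) \<noteq> {} \<and> k \<le> rk (\<Union>j<m. A j)) \<or> (A m \<noteq> {} \<and> k \<le> rk (A m))"
    using rk_Un_cases[OF d Suc.prems(1)[of m]] Suc.prems(2,3) unfolding e by simp
  thus ?case
  proof
    assume "(\<Union>j<m. A j) \<noteq> {} \<and> k \<le> rk (\<Union>j<m. A j)"
    thus ?thesis using Suc.IH Suc.prems(1) by (metis less_SucI)
  qed blast
qed

lemma D_singleton:
  assumes "xs \<in> Mn (carrier G) n"
  shows "{xs} \<in> D n"
proof -
  have "j \<le> n \<Longrightarrow> dpred n (\<lambda>ys. \<forall>i<j. ys ! i = xs ! i)" for j
  proof (induction j)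
    case 0 show ?case using dpred_True by simp
  next
    case (Suc j)
    have "xs ! j \<in> carrier G" using assms Suc.prems by (auto simp: Mn_def)
    hence "dpred n (\<lambda>ys. (\<forall>i<j. ys ! i = xs ! i) \<and> ys ! j = xs ! j)"
      using Suc by (intro dpred_conj dpred_coord_const) auto
    thus ?case by (rule dpred_cong) (auto simp: less_Suc_eq)
  qed
  hence "dpred n (\<lambda>ys. \<forall>i<n. ys ! i = xs ! i)" by simp
  moreover have "{ys \<in> Mn (carrier G) n. \<forall>i<n. ys ! i = xs ! i} = {xs}"
  proof (intro equalityI subsetI)
    fix ys assume ys: "ys \<in> {ys \<in> Mn (carrier G) n. \<forall>i<n. ys ! i = xs ! i}"
    have "length ys = length xs" using ys assms by (simp add: Mn_def)
    hence "ys = xs" using ys assms by (intro nth_equalityI) (simp_all add: Mn_def)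
    thus "ys \<in> {xs}" by simp
  qed (use assms in simp)
  ultimately show ?thesis unfolding dpred_def by simp
qed

lemma rk_bij_eq:
  assumes "def_fun D n m A B f" "f ` A = B" "inj_on f A" "A \<noteq> {}"
  shows "rk A = rk B"
proof -
  have "\<forall>b\<in>B. rk (fib A f b) = 0"
  proof
    fix b assume "b \<in> B"
    then obtain a where a: "a \<in> A" "f a = b" using assms(2) by blast
    have "fib A f b = {a}" using a assms(3) unfolding fib_def inj_on_def by blast
    moreover have "a \<in> Mn (carrier G) n" using a(1) assms(1) D_subset_Mn unfolding def_fun_def by blast
    ultimately show "rk (fib A f b) = 0" using rk_finite[OF D_singleton] by simp
  qed
  thus ?thesis using rk_additive[OF assms(1,2,4), of 0] by simp
qed

lemma rk1_singleton:
  assumes "a \<in> carrier G"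
  shows "rk1 {a} = 0"
  unfolding rk1_def using rk_finite[OF D_singleton1[OF assms]] by simp

lemma rk1_mono:
  assumes "definable1 D X" "definable1 D Y" "X \<subseteq> Y" "X \<noteq> {}"
  shows "rk1 X \<le> rk1 Y"
  unfolding rk1_def using assms by (intro rk_mono[of _ 1]) (auto simp: definable1_def)

lemma rk1_Un_cases:
  assumes "definable1 D X" "definable1 D Y" "X \<union> Y \<noteq> {}" "k \<le> rk1 (X \<union> Y)"
  shows "(X \<noteq> {} \<and> k \<le> rk1 X) \<or> (Y \<noteq> {} \<and> k \<le> rk1 Y)"
  using rk_Un_cases[of "(\<lambda>x. [x]) ` X" 1 "(\<lambda>x. [x]) ` Y" k] assms
  unfolding rk1_def definable1_def by (simp add: image_Un)

lemma rk1_UN_lessThan_cases: "(\<And>j. j < (m::nat) \<Longrightarrow> definable1 D (A j)) \<Longrightarrow> (\<Union>j<m. A j) \<noteq> {} \<Longrightarrow> k \<le> rk1 (\<Union>j<m. A j) \<Longrightarrow>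
   \<exists>j<m. A j \<noteq> {} \<and> k \<le> rk1 (A j)"
proof (induction m)
  case 0 thus ?case by simp
next
  case (Suc m)
  have e: "(\<Union>j<Suc m. A j) = (\<Union>j<m. A j) \<union> A m" by (auto simp: less_Suc_eq)
  have d: "definable1 D (\<Union>j<m. A j)" using Suc.prems(1) by (intro definable1_UN_lessThan) simp
  have "((\<Union>j<m. A j) \<noteq> {} \<and> k \<le> rk1 (\<Union>j<m. A j)) \<or> (A m \<noteq> {} \<and> k \<le> rk1 (A m))"
    using rk1_Un_cases[OF d Suc.prems(1)[of m]] Suc.prems(2,3) unfolding e by simp
  thus ?case
  proof
    assume "(\<Union>j<m. A j) \<noteq> {} \<and> k \<le> rk1 (\<Union>j<m. A j)"
    thus ?thesis using Suc.IH Suc.prems(1) by (metis less_SucI)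
  qed blast
qed

lemma rk1_Suc_leI:
  fixes T :: "nat \<Rightarrow> 'a set"
  assumes "definable1 D A" "\<And>i. definable1 D (T i)" "\<And>i. T i \<subseteq> A" "\<And>i. T i \<noteq> {}" "\<And>i. k \<le> rk1 (T i)"
    "\<And>i j. i \<noteq> j \<Longrightarrow> T i \<inter> T j = {}"
  shows "Suc k \<le> rk1 A"
  unfolding rk1_def
proof (rule rk_Suc_leI[of _ 1 "\<lambda>i. (\<lambda>x. [x]) ` T i"])
  fix i j :: nat assume "i \<noteq> j"
  thus "(\<lambda>x. [x]) ` T i \<inter> (\<lambda>x. [x]) ` T j = {}"
    using assms(6) by (simp add: image_Int[OF inj_singleton_list, symmetric])
qed (use assms in \<open>auto simp: definable1_def rk1_def\<close>)

definition proj_fst :: "'a list set \<Rightarrow> 'a set" where "proj_fst A = {x. \<exists>y. [x, y] \<in> A}"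

definition proj_snd :: "'a list set \<Rightarrow> 'a set" where "proj_snd A = {y. \<exists>x. [x, y] \<in> A}"

definition fibre_fst :: "'a list set \<Rightarrow> 'a \<Rightarrow> 'a set" where "fibre_fst A x = {y. [x, y] \<in> A}"

definition fibre_snd :: "'a list set \<Rightarrow> 'a \<Rightarrow> 'a set" where "fibre_snd A y = {x. [x, y] \<in> A}"

lemma D1_fibre_fst:
  assumes "A \<in> D 2" "x \<in> carrier G"
  shows "(\<lambda>y. [y]) ` fibre_fst A x \<in> D 1"
proof -
  have A': "A \<in> D (1 + 1)" using assms(1) by (simp add: numeral_2_eq_2)
  have "{ys. [x] @ ys \<in> A} \<in> D 1" using assms(2) by (intro D_fibre[OF A']) (auto simp: Mn_def)
  moreover have "{ys. [x] @ ys \<in> A} = (\<lambda>y. [y]) ` fibre_fst A x"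
    using D2_elem[OF assms(1)] by (auto simp: fibre_fst_def)
  ultimately show ?thesis by simp
qed

lemma D2_row_fst:
  assumes "A \<in> D 2" "x \<in> carrier G"
  shows "{p \<in> A. p ! 0 = x} \<in> D 2"
proof -
  have "dpred 2 (\<lambda>p. p \<in> A \<and> p ! 0 = x)" using assms by (intro dpred_conj dpred_mem_D2 dpred_coord_const) auto
  moreover have "{p \<in> Mn (carrier G) 2. p \<in> A \<and> p ! 0 = x} = {p \<in> A. p ! 0 = x}"
    using D_subset_Mn[OF assms(1)] by blast
  ultimately show ?thesis unfolding dpred_def by simp
qed

lemma D2_row_snd:
  assumes "A \<in> D 2" "x \<in> carrier G"
  shows "{p \<in> A. p ! 1 = x} \<in> D 2"
proof -
  have "dpred 2 (\<lambda>p. p \<in> A \<and> p ! 1 = x)" using assms by (intro dpred_conj dpred_mem_D2 dpred_coord_const) auto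
  moreover have "{p \<in> Mn (carrier G) 2. p \<in> A \<and> p ! 1 = x} = {p \<in> A. p ! 1 = x}"
    using D_subset_Mn[OF assms(1)] by blast
  ultimately show ?thesis unfolding dpred_def by simp
qed

lemma rk_row_fst:
  assumes "A \<in> D 2" "x \<in> proj_fst A"
  shows "rk {p \<in> A. p ! 0 = x} = rk1 (fibre_fst A x)"
proof -
  have xG: "x \<in> carrier G" using assms D2_elem[OF assms(1)] unfolding proj_fst_def by fastforce
  have R: "{p \<in> A. p ! 0 = x} \<in> D 2" by (rule D2_row_fst[OF assms(1) xG])
  have img: "(\<lambda>p. [p ! 1]) ` {p \<in> A. p ! 0 = x} = (\<lambda>y. [y]) ` fibre_fst A x"
  proof (intro equalityI subsetI)
    fix q assume "q \<in> (\<lambda>p. [p ! 1]) ` {p \<in> A. p ! 0 = x}"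
    then obtain p where "p \<in> A" "p ! 0 = x" "q = [p ! 1]" by blast
    thus "q \<in> (\<lambda>y. [y]) ` fibre_fst A x" using D2_elem[OF assms(1)] by (force simp: fibre_fst_def)
  qed (force simp: fibre_fst_def)
  have "rk {p \<in> A. p ! 0 = x} = rk ((\<lambda>y. [y]) ` fibre_fst A x)"
  proof (rule rk_bij_eq)
    show "def_fun D 2 1 {p \<in> A. p ! 0 = x} ((\<lambda>y. [y]) ` fibre_fst A x) (\<lambda>p. [p ! 1])"
      using img by (intro def_fun_coord R D1_fibre_fst assms xG) auto
    show "inj_on (\<lambda>p. [p ! 1]) {p \<in> A. p ! 0 = x}"
    proof (rule inj_onI)
      fix p q assume "p \<in> {p \<in> A. p ! 0 = x}" "q \<in> {p \<in> A. p ! 0 = x}" "[p ! 1] = [q ! 1]"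
      thus "p = q" using D2_elem_eq[OF assms(1)] by (metis (mono_tags, lifting) list.inject mem_Collect_eq)
    qed
    show "{p \<in> A. p ! 0 = x} \<noteq> {}" using assms(2) unfolding proj_fst_def by force
  qed (rule img)
  thus ?thesis by (simp add: rk1_def)
qed

lemma rk_row_snd:
  assumes "A \<in> D 2" "y \<in> proj_snd A"
  shows "rk {p \<in> A. p ! 1 = y} = rk1 (fibre_snd A y)"
proof -
  have yG: "y \<in> carrier G" using assms D2_carrier[OF assms(1)] unfolding proj_snd_def by blast
  have R: "{p \<in> A. p ! 1 = y} \<in> D 2" by (rule D2_row_snd[OF assms(1) yG])
  have fbe: "fibre_snd A y = {x. \<exists>z. [x, z] \<in> {p \<in> A. p ! 1 = y}}" unfolding fibre_snd_def by auto
  have fbD: "(\<lambda>x. [x]) ` fibre_snd A y \<in> D 1" unfolding fbe by (rule D1_proj_fst[OF R])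
  have img: "(\<lambda>p. [p ! 0]) ` {p \<in> A. p ! 1 = y} = (\<lambda>x. [x]) ` fibre_snd A y"
  proof (intro equalityI subsetI)
    fix q assume "q \<in> (\<lambda>p. [p ! 0]) ` {p \<in> A. p ! 1 = y}"
    then obtain p where p: "p \<in> A" "p ! 1 = y" "q = [p ! 0]" by blast
    have "p = [p ! 0, y]" using D2_elem_eq[OF assms(1) p(1)] p(2) by simp
    hence "p ! 0 \<in> fibre_snd A y" using p(1) unfolding fibre_snd_def by simp
    thus "q \<in> (\<lambda>x. [x]) ` fibre_snd A y" using p(3) by blast
  next
    fix q assume "q \<in> (\<lambda>x. [x]) ` fibre_snd A y"
    then obtain x where x: "[x, y] \<in> A" "q = [x]" unfolding fibre_snd_def by blast
    thus "q \<in> (\<lambda>p. [p ! 0]) ` {p \<in> A. p ! 1 = y}" by (intro image_eqI[of _ _ "[x, y]"]) simp_all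
  qed
  have "rk {p \<in> A. p ! 1 = y} = rk ((\<lambda>x. [x]) ` fibre_snd A y)"
  proof (rule rk_bij_eq)
    show "def_fun D 2 1 {p \<in> A. p ! 1 = y} ((\<lambda>x. [x]) ` fibre_snd A y) (\<lambda>p. [p ! 0])"
      using img by (intro def_fun_coord R fbD) auto
    show "inj_on (\<lambda>p. [p ! 0]) {p \<in> A. p ! 1 = y}"
    proof (rule inj_onI)
      fix p q assume "p \<in> {p \<in> A. p ! 1 = y}" "q \<in> {p \<in> A. p ! 1 = y}" "[p ! 0] = [q ! 0]"
      thus "p = q" using D2_elem_eq[OF assms(1)] by (metis (mono_tags, lifting) list.inject mem_Collect_eq)
    qed
    show "{p \<in> A. p ! 1 = y} \<noteq> {}" using assms(2) unfolding proj_snd_def by force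
  qed (rule img)
  thus ?thesis by (simp add: rk1_def)
qed

lemma rk_fibred_fst:
  assumes A: "A \<in> D 2" and ne: "A \<noteq> {}" and k: "\<forall>x\<in>proj_fst A. rk1 (fibre_fst A x) = k"
  shows "rk A = rk1 (proj_fst A) + k"
proof -
  have BD: "(\<lambda>x. [x]) ` proj_fst A \<in> D 1" unfolding proj_fst_def by (rule D1_proj_fst[OF A])
  have img: "(\<lambda>p. [p ! 0]) ` A = (\<lambda>x. [x]) ` proj_fst A"
  proof (intro equalityI subsetI)
    fix q assume "q \<in> (\<lambda>p. [p ! 0]) ` A"
    then obtain p where p: "p \<in> A" "q = [p ! 0]" by blast
    have "p = [p ! 0, p ! 1]" by (rule D2_elem_eq[OF A p(1)])
    hence "p ! 0 \<in> proj_fst A" using p(1) unfolding proj_fst_def by (metis (mono_tags) mem_Collect_eq)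
    thus "q \<in> (\<lambda>x. [x]) ` proj_fst A" using p(2) by blast
  next
    fix q assume "q \<in> (\<lambda>x. [x]) ` proj_fst A"
    then obtain x y where x: "[x, y] \<in> A" "q = [x]" unfolding proj_fst_def by blast
    thus "q \<in> (\<lambda>p. [p ! 0]) ` A" by (intro image_eqI[of _ _ "[x, y]"]) simp_all
  qed
  have DF: "def_fun D 2 1 A ((\<lambda>x. [x]) ` proj_fst A) (\<lambda>p. [p ! 0])"
    using img by (intro def_fun_coord A BD) auto
  have "\<forall>b\<in>(\<lambda>x. [x]) ` proj_fst A. rk (fib A (\<lambda>p. [p ! 0]) b) = k"
  proof
    fix b assume "b \<in> (\<lambda>x. [x]) ` proj_fst A"
    then obtain x where x: "x \<in> proj_fst A" "b = [x]" by blast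
    have "fib A (\<lambda>p. [p ! 0]) b = {p \<in> A. p ! 0 = x}" unfolding fib_def x(2) by simp
    thus "rk (fib A (\<lambda>p. [p ! 0]) b) = k" using rk_row_fst[OF A x(1)] k x(1) by simp
  qed
  hence "rk A = rk ((\<lambda>x. [x]) ` proj_fst A) + k" using rk_additive[OF DF img ne] by blast
  thus ?thesis by (simp add: rk1_def)
qed

lemma rk_fibred_snd:
  assumes A: "A \<in> D 2" and ne: "A \<noteq> {}" and k: "\<forall>y\<in>proj_snd A. rk1 (fibre_snd A y) = k"
  shows "rk A = rk1 (proj_snd A) + k"
proof -
  have BD: "(\<lambda>x. [x]) ` proj_snd A \<in> D 1" unfolding proj_snd_def by (rule D1_proj_snd[OF A])
  have img: "(\<lambda>p. [p ! 1]) ` A = (\<lambda>x. [x]) ` proj_snd A"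
  proof (intro equalityI subsetI)
    fix q assume "q \<in> (\<lambda>p. [p ! 1]) ` A"
    then obtain p where p: "p \<in> A" "q = [p ! 1]" by blast
    have "p = [p ! 0, p ! 1]" by (rule D2_elem_eq[OF A p(1)])
    hence "p ! 1 \<in> proj_snd A" using p(1) unfolding proj_snd_def by (metis (mono_tags) mem_Collect_eq)
    thus "q \<in> (\<lambda>x. [x]) ` proj_snd A" using p(2) by blast
  next
    fix q assume "q \<in> (\<lambda>x. [x]) ` proj_snd A"
    then obtain x y where x: "[x, y] \<in> A" "q = [y]" unfolding proj_snd_def by blast
    thus "q \<in> (\<lambda>p. [p ! 1]) ` A" by (intro image_eqI[of _ _ "[x, y]"]) simp_all
  qed
  have DF: "def_fun D 2 1 A ((\<lambda>x. [x]) ` proj_snd A) (\<lambda>p. [p ! 1])"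
    using img by (intro def_fun_coord A BD) auto
  have "\<forall>b\<in>(\<lambda>x. [x]) ` proj_snd A. rk (fib A (\<lambda>p. [p ! 1]) b) = k"
  proof
    fix b assume "b \<in> (\<lambda>x. [x]) ` proj_snd A"
    then obtain x where x: "x \<in> proj_snd A" "b = [x]" by blast
    have "fib A (\<lambda>p. [p ! 1]) b = {p \<in> A. p ! 1 = x}" unfolding fib_def x(2) by simp
    thus "rk (fib A (\<lambda>p. [p ! 1]) b) = k" using rk_row_snd[OF A x(1)] k x(1) by simp
  qed
  hence "rk A = rk ((\<lambda>x. [x]) ` proj_snd A) + k" using rk_additive[OF DF img ne] by blast
  thus ?thesis by (simp add: rk1_def)
qed

lemma proj_fst_image:
  assumes A: "A \<in> D 2"
  shows "(\<lambda>p. [p ! 0]) ` A = (\<lambda>x. [x]) ` proj_fst A"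
proof (intro equalityI subsetI)
  fix q assume "q \<in> (\<lambda>p. [p ! 0]) ` A"
  then obtain p where p: "p \<in> A" "q = [p ! 0]" by blast
  have "p = [p ! 0, p ! 1]" by (rule D2_elem_eq[OF A p(1)])
  hence "p ! 0 \<in> proj_fst A" using p(1) unfolding proj_fst_def by (metis (mono_tags) mem_Collect_eq)
  thus "q \<in> (\<lambda>x. [x]) ` proj_fst A" using p(2) by blast
next
  fix q assume "q \<in> (\<lambda>x. [x]) ` proj_fst A"
  then obtain x y where x: "[x, y] \<in> A" "q = [x]" unfolding proj_fst_def by blast
  thus "q \<in> (\<lambda>p. [p ! 0]) ` A" by (intro image_eqI[of _ _ "[x, y]"]) simp_all
qed

lemma definable1_rk_level:
  assumes A: "A \<in> D 2"
  shows "definable1 D {x \<in> proj_fst A. rk1 (fibre_fst A x) = k}"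
proof -
  have BD: "(\<lambda>x. [x]) ` proj_fst A \<in> D 1" unfolding proj_fst_def by (rule D1_proj_fst[OF A])
  have DF: "def_fun D 2 1 A ((\<lambda>x. [x]) ` proj_fst A) (\<lambda>p. [p ! 0])"
    using proj_fst_image[OF A] by (intro def_fun_coord A BD) auto
  have "{b \<in> (\<lambda>x. [x]) ` proj_fst A. fib A (\<lambda>p. [p ! 0]) b \<noteq> {} \<and> rk (fib A (\<lambda>p. [p ! 0]) b) = k} \<in> D 1"
    by (rule D_rk_level[OF DF])
  moreover have "{b \<in> (\<lambda>x. [x]) ` proj_fst A. fib A (\<lambda>p. [p ! 0]) b \<noteq> {} \<and> rk (fib A (\<lambda>p. [p ! 0]) b) = k}
     = (\<lambda>x. [x]) ` {x \<in> proj_fst A. rk1 (fibre_fst A x) = k}"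
  proof (intro equalityI subsetI)
    fix b assume b: "b \<in> {b \<in> (\<lambda>x. [x]) ` proj_fst A. fib A (\<lambda>p. [p ! 0]) b \<noteq> {} \<and> rk (fib A (\<lambda>p. [p ! 0]) b) = k}"
    then obtain x where x: "x \<in> proj_fst A" "b = [x]" by blast
    have "fib A (\<lambda>p. [p ! 0]) b = {p \<in> A. p ! 0 = x}" unfolding fib_def x(2) by simp
    hence "rk1 (fibre_fst A x) = k" using b rk_row_fst[OF A x(1)] by simp
    thus "b \<in> (\<lambda>x. [x]) ` {x \<in> proj_fst A. rk1 (fibre_fst A x) = k}" using x by blast
  next
    fix b assume "b \<in> (\<lambda>x. [x]) ` {x \<in> proj_fst A. rk1 (fibre_fst A x) = k}"
    then obtain x where x: "x \<in> proj_fst A" "rk1 (fibre_fst A x) = k" "b = [x]" by blast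
    have f: "fib A (\<lambda>p. [p ! 0]) b = {p \<in> A. p ! 0 = x}" unfolding fib_def x(3) by simp
    have "{p \<in> A. p ! 0 = x} \<noteq> {}" using x(1) unfolding proj_fst_def by force
    thus "b \<in> {b \<in> (\<lambda>x. [x]) ` proj_fst A. fib A (\<lambda>p. [p ! 0]) b \<noteq> {} \<and> rk (fib A (\<lambda>p. [p ! 0]) b) = k}"
      using f x rk_row_fst[OF A x(1)] by simp
  qed
  ultimately show ?thesis unfolding definable1_def by simp
qed

lemma definable1_proj_fst: "A \<in> D 2 \<Longrightarrow> definable1 D (proj_fst A)"
  unfolding definable1_def proj_fst_def by (rule D1_proj_fst)

lemma rk_less_if_fibres_less:
  assumes A: "A \<in> D 2" "A \<noteq> {}"
    and small: "\<And>x. x \<in> proj_fst A \<Longrightarrow> rk1 (fibre_fst A x) < m"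
  shows "rk A < rk1 (proj_fst A) + m"
proof (rule ccontr)
  assume big: "\<not> rk A < rk1 (proj_fst A) + m"
  define L where "L k = {x \<in> proj_fst A. rk1 (fibre_fst A x) = k}" for k
  define A_k where "A_k k = {p \<in> A. p ! 0 \<in> L k}" for k
  have A_k_D: "A_k k \<in> D 2" for k
  proof -
    have "dpred 2 (\<lambda>p. p \<in> A \<and> p ! 0 \<in> L k)"
      unfolding L_def by (intro dpred_conj dpred_mem_D2[OF A(1)] dpred_coord_in definable1_rk_level A(1)) simp
    moreover have "{p \<in> Mn (carrier G) 2. p \<in> A \<and> p ! 0 \<in> L k} = A_k k"
      unfolding A_k_def using D_subset_Mn[OF A(1)] by blast
    ultimately show ?thesis unfolding dpred_def by simp
  qed
  have "A = (\<Union>k<m. A_k k)"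
  proof (intro equalityI subsetI)
    fix p assume p: "p \<in> A"
    then obtain x y where xy: "p = [x, y]" using D2_elem[OF A(1)] by blast
    hence x: "x \<in> proj_fst A" using p unfolding proj_fst_def by blast
    hence "p \<in> A_k (rk1 (fibre_fst A x))" unfolding A_k_def L_def using p xy by simp
    thus "p \<in> (\<Union>k<m. A_k k)" using small[OF x] by blast
  qed (auto simp: A_k_def)
  then obtain k where k: "k < m" "A_k k \<noteq> {}" "rk1 (proj_fst A) + m \<le> rk (A_k k)"
    using rk_UN_lessThan_cases[of m A_k 2] A_k_D A(2) big by (metis not_less)
  have "\<forall>x\<in>proj_fst (A_k k). rk1 (fibre_fst (A_k k) x) = k"
    unfolding proj_fst_def fibre_fst_def A_k_def L_def by auto
  hence "rk (A_k k) = rk1 (proj_fst (A_k k)) + k" by (rule rk_fibred_fst[OF A_k_D k(2)])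
  moreover have "rk1 (proj_fst (A_k k)) \<le> rk1 (proj_fst A)"
  proof (rule rk1_mono[OF definable1_proj_fst[OF A_k_D] definable1_proj_fst[OF A(1)]])
    show "proj_fst (A_k k) \<subseteq> proj_fst A" unfolding proj_fst_def A_k_def by auto
    obtain p where p: "p \<in> A_k k" using k(2) by blast
    then obtain x y where "p = [x, y]" using D2_elem[OF A_k_D] by blast
    thus "proj_fst (A_k k) \<noteq> {}" using p unfolding proj_fst_def by blast
  qed
  ultimately show False using k by linarith
qed

lemma rk1_graph_bij:
  assumes G: "{[x, \<phi> x] | x. x \<in> X} \<in> D 2" and inj: "inj_on \<phi> X" and ne: "X \<noteq> {}"
  shows "rk1 (\<phi> ` X) = rk1 X"
proof -
  let ?A = "{[x, \<phi> x] | x. x \<in> X}"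
  have Ane: "?A \<noteq> {}" using ne by blast
  have d0: "proj_fst ?A = X" unfolding proj_fst_def by auto
  have d1: "proj_snd ?A = \<phi> ` X" unfolding proj_snd_def by auto
  have f0: "fibre_fst ?A x = {\<phi> x}" if "x \<in> X" for x using that unfolding fibre_fst_def by auto
  have f1: "fibre_snd ?A (\<phi> x) = {x}" if "x \<in> X" for x using that inj unfolding fibre_snd_def inj_on_def by auto
  have mem: "x \<in> carrier G \<and> \<phi> x \<in> carrier G" if "x \<in> X" for x using D2_carrier[OF G, of x "\<phi> x"] that by blast
  have "\<forall>x\<in>proj_fst ?A. rk1 (fibre_fst ?A x) = 0" using d0 f0 mem rk1_singleton by simp
  hence "rk ?A = rk1 (proj_fst ?A) + 0" by (rule rk_fibred_fst[OF G Ane])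
  moreover have "\<forall>y\<in>proj_snd ?A. rk1 (fibre_snd ?A y) = 0" using d1 f1 mem rk1_singleton by auto
  hence "rk ?A = rk1 (proj_snd ?A) + 0" by (rule rk_fibred_snd[OF G Ane])
  ultimately show ?thesis using d0 d1 by simp
qed

lemma D2_graph:
  assumes X: "definable1 D X" and t: "dterm 1 (\<lambda>xs. \<phi> (xs ! 0))"
  shows "{[x, \<phi> x] | x. x \<in> X} \<in> D 2"
proof -
  have t2: "dterm 2 (\<lambda>xs. \<phi> (take 1 xs ! 0))" using dterm_lift[OF t, of 2] by simp
  have t2': "dterm 2 (\<lambda>xs. \<phi> (xs ! 0))" by (rule dterm_cong[OF t2]) (auto simp: Mn_def)
  have "dpred 2 (\<lambda>xs. xs ! 0 \<in> X \<and> xs ! 1 = \<phi> (xs ! 0))"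
    by (intro dpred_conj dpred_coord_in[OF X] dpred_dterm_eq[OF dterm_nth1_2 t2']) simp
  hence "{[x, y] | x y. x \<in> carrier G \<and> y \<in> carrier G \<and> (x \<in> X \<and> y = \<phi> x)} \<in> D 2" by (rule D2_of_dpred)
  moreover have "{[x, y] | x y. x \<in> carrier G \<and> y \<in> carrier G \<and> (x \<in> X \<and> y = \<phi> x)} = {[x, \<phi> x] | x. x \<in> X}"
  proof (intro equalityI subsetI)
    fix p assume "p \<in> {[x, \<phi> x] | x. x \<in> X}"
    then obtain x where x: "x \<in> X" "p = [x, \<phi> x]" by blast
    have xG: "x \<in> carrier G" using x(1) definable1_subset[OF X] by blast
    have "\<phi> x \<in> carrier G" using dterm_carrier[OF t, of "[x]"] xG by (simp add: Mn_def)
    thus "p \<in> {[x, y] | x y. x \<in> carrier G \<and> y \<in> carrier G \<and> (x \<in> X \<and> y = \<phi> x)}" using x xG by blast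
  qed blast
  ultimately show ?thesis by simp
qed

lemma rk1_image:
  assumes X: "definable1 D X" and t: "dterm 1 (\<lambda>xs. \<phi> (xs ! 0))" and inj: "inj_on \<phi> X" and ne: "X \<noteq> {}"
  shows "rk1 (\<phi> ` X) = rk1 X"
  by (rule rk1_graph_bij[OF D2_graph[OF X t] inj ne])

lemma definable1_image:
  assumes X: "definable1 D X" and t: "dterm 1 (\<lambda>xs. \<phi> (xs ! 0))"
  shows "definable1 D (\<phi> ` X)"
proof -
  have "(\<lambda>x. [x]) ` {y. \<exists>x. [x, y] \<in> {[x, \<phi> x] | x. x \<in> X}} \<in> D 1" by (rule D1_proj_snd[OF D2_graph[OF X t]])
  moreover have "{y. \<exists>x. [x, y] \<in> {[x, \<phi> x] | x. x \<in> X}} = \<phi> ` X" by auto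
  ultimately show ?thesis unfolding definable1_def by simp
qed

lemma definable1_conjg:
  assumes "definable1 D B" "g \<in> carrier G"
  shows "definable1 D (conjg G B g)"
  unfolding conjg_def
  by (rule definable1_image[OF assms(1)]) (intro dterm_mult dterm_const dterm_inv dterm_nth0_1 assms(2))

lemma rk1_conjg:
  assumes "definable1 D B" "g \<in> carrier G" "B \<noteq> {}"
  shows "rk1 (conjg G B g) = rk1 B"
  unfolding conjg_def
proof (rule rk1_image[OF assms(1) _ _ assms(3)])
  show "dterm 1 (\<lambda>xs. inv g \<otimes> xs ! 0 \<otimes> g)" by (intro dterm_mult dterm_const dterm_inv dterm_nth0_1 assms(2))
  show "inj_on (\<lambda>b. inv g \<otimes> b \<otimes> g) B"
  proof (rule inj_onI)
    fix x y assume xy: "x \<in> B" "y \<in> B" "inv g \<otimes> x \<otimes> g = inv g \<otimes> y \<otimes> g"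
    have "x \<in> carrier G" "y \<in> carrier G" using xy definable1_subset[OF assms(1)] by auto
    thus "x = y" using xy(3) assms(2) by simp
  qed
qed

lemma definable1_rcos:
  assumes "definable1 D X" "a \<in> carrier G"
  shows "definable1 D (X #> a)"
  unfolding rcos_eq_image
  by (rule definable1_image[OF assms(1)]) (intro dterm_mult dterm_const dterm_nth0_1 assms(2))

lemma rk1_rcos:
  assumes "definable1 D X" "a \<in> carrier G" "X \<noteq> {}"
  shows "rk1 (X #> a) = rk1 X"
  unfolding rcos_eq_image
proof (rule rk1_image[OF assms(1) _ _ assms(3)])
  show "dterm 1 (\<lambda>xs. xs ! 0 \<otimes> a)" by (intro dterm_mult dterm_const dterm_nth0_1 assms(2))
  show "inj_on (\<lambda>x. x \<otimes> a) X"
  proof (rule inj_onI)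
    fix x y assume xy: "x \<in> X" "y \<in> X" "x \<otimes> a = y \<otimes> a"
    have "x \<in> carrier G" "y \<in> carrier G" using xy definable1_subset[OF assms(1)] by auto
    thus "x = y" using xy(3) assms(2) by simp
  qed
qed

lemma rk1_Diff_one:
  assumes C: "definable1 D C" and ne: "C - {\<one>} \<noteq> {}"
  shows "rk1 (C - {\<one>}) = rk1 C"
proof -
  have d: "definable1 D (C - {\<one>})" by (rule definable1_Diff[OF C definable1_singleton[OF one_closed]])
  have le: "rk1 (C - {\<one>}) \<le> rk1 C" by (rule rk1_mono[OF d C _ ne]) blast
  have "rk1 C \<le> rk1 (C - {\<one>})"
  proof (cases "rk1 C")
    case 0 thus ?thesis by simp
  next
    case (Suc k)
    have e: "(C - {\<one>}) \<union> (C \<inter> {\<one>}) = C" by blast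
    have d2: "definable1 D (C \<inter> {\<one>})" by (rule definable1_Int[OF C definable1_singleton[OF one_closed]])
    have "(C - {\<one>} \<noteq> {} \<and> rk1 C \<le> rk1 (C - {\<one>})) \<or> (C \<inter> {\<one>} \<noteq> {} \<and> rk1 C \<le> rk1 (C \<inter> {\<one>}))"
      using rk1_Un_cases[OF d d2, of "rk1 C"] ne unfolding e by blast
    moreover have "C \<inter> {\<one>} \<noteq> {} \<Longrightarrow> rk1 (C \<inter> {\<one>}) = 0"
    proof -
      assume "C \<inter> {\<one>} \<noteq> {}"
      hence "C \<inter> {\<one>} = {\<one>}" by blast
      thus ?thesis using rk1_singleton[OF one_closed] by simp
    qed
    ultimately show ?thesis using Suc by linarith
  qed
  thus ?thesis using le by simp
qed

lemma rk1_inv_mult_image: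
  assumes X: "definable1 D X" and y: "y \<in> carrier G" and ne: "X \<noteq> {}"
  shows "rk1 ((\<lambda>x. inv x \<otimes> y) ` X) = rk1 X"
proof (rule rk1_image[OF X _ _ ne])
  show "dterm 1 (\<lambda>xs. inv (xs ! 0) \<otimes> y)" by (intro dterm_mult dterm_inv dterm_nth0_1 dterm_const y)
  show "inj_on (\<lambda>x. inv x \<otimes> y) X"
  proof (rule inj_onI)
    fix a b assume ab: "a \<in> X" "b \<in> X" "inv a \<otimes> y = inv b \<otimes> y"
    have "a \<in> carrier G" "b \<in> carrier G" using ab definable1_subset[OF X] by auto
    thus "a = b" using ab(3) y by (metis inv_closed inv_inv right_cancel)
  qed
qed

lemma finite_index_if_rk1_le:
  assumes C: "subgroup C G" "definable1 D C" and C': "subgroup C' G" "definable1 D C'"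
    and sub: "C \<subseteq> C'" and le: "rk1 C' \<le> rk1 C"
  shows "finite ((\<lambda>a. C #> a) ` C')"
proof (rule ccontr)
  assume "infinite ((\<lambda>a. C #> a) ` C')"
  then obtain a :: "nat \<Rightarrow> 'a" where a: "\<And>i. a i \<in> C'" "\<And>i j. i \<noteq> j \<Longrightarrow> C #> a i \<noteq> C #> a j"
    by (rule infinite_image_sequence) blast
  have aG: "a i \<in> carrier G" for i using a(1) C' subgroup.subset by blast
  have C_ne: "C \<noteq> {}" using subgroup.one_closed[OF C(1)] by blast
  \<comment> \<open>infinitely many disjoint cosets of \<open>C\<close> inside \<open>C'\<close> raise the rank\<close>
  have "Suc (rk1 C) \<le> rk1 C'"
  proof (rule rk1_Suc_leI[OF C'(2), of "\<lambda>i. C #> a i"])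
    fix i
    show "definable1 D (C #> a i)" by (rule definable1_rcos[OF C(2) aG])
    show "C #> a i \<subseteq> C'" by (rule rcos_subset_subgroup[OF C'(1) sub a(1)])
    show "C #> a i \<noteq> {}" using rcos_nonempty[OF C_ne] .
    show "rk1 C \<le> rk1 (C #> a i)" using rk1_rcos[OF C(2) aG C_ne] by simp
  next
    fix i j :: nat assume "i \<noteq> j"
    thus "(C #> a i) \<inter> (C #> a j) = {}"
      using a(2) rcos_disjoint[OF C(1)] rcosetsI[OF subgroup.subset[OF C(1)] aG]
      unfolding pairwise_def disjnt_def by metis
  qed
  thus False using le by simp
qed

end

section \<open>Generic subsets of a connected definable subgroup\<close>

locale connected_subgroup = fmr_group +
  fixes H :: "'a set"
  assumes H_subgroup: "subgroup H G" and H_definable: "definable1 D H"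
    and H_connected: "connected_sg G D H"
begin

definition dsubset :: "'a set \<Rightarrow> bool" where
  "dsubset Z \<longleftrightarrow> definable1 D Z \<and> Z \<subseteq> H"

definition generic :: "'a set \<Rightarrow> bool" where
  "generic Z \<longleftrightarrow> Z \<noteq> {} \<and> rk1 H \<le> rk1 Z"

definition degree_one :: "'a set \<Rightarrow> bool" where
  "degree_one X \<longleftrightarrow> dsubset X \<and> generic X \<and>
    (\<forall>P Q. dsubset P \<and> dsubset Q \<and> P \<subseteq> X \<and> Q \<subseteq> X \<and> P \<inter> Q = {} \<longrightarrow> \<not> (generic P \<and> generic Q))"

lemma H_subset: "H \<subseteq> carrier G"
  using H_subgroup subgroup.subset by blast

lemma H_carrier: "h \<in> H \<Longrightarrow> h \<in> carrier G"
  using H_subset by blast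

lemma H_inv_closed: "h \<in> H \<Longrightarrow> inv h \<in> H"
  using H_subgroup by (rule subgroup.m_inv_closed)

lemma H_mult_closed: "h \<in> H \<Longrightarrow> k \<in> H \<Longrightarrow> h \<otimes> k \<in> H"
  using H_subgroup by (rule subgroup.m_closed)

lemma dsubset_carrier: "dsubset Z \<Longrightarrow> Z \<subseteq> carrier G"
  using H_subset by (auto simp: dsubset_def)

lemma dsubset_Int: "dsubset P \<Longrightarrow> definable1 D Q \<Longrightarrow> dsubset (P \<inter> Q)"
  unfolding dsubset_def using definable1_Int by blast

lemma dsubset_Diff: "dsubset P \<Longrightarrow> definable1 D Q \<Longrightarrow> dsubset (P - Q)"
  unfolding dsubset_def using definable1_Diff by blast

lemma dsubset_rcos: "dsubset Z \<Longrightarrow> h \<in> H \<Longrightarrow> dsubset (Z #> h)"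
  unfolding dsubset_def using definable1_rcos H_carrier rcos_subset_subgroup[OF H_subgroup] by blast

lemma rk1_le_rk1_H: "dsubset P \<Longrightarrow> P \<noteq> {} \<Longrightarrow> rk1 P \<le> rk1 H"
  unfolding dsubset_def using rk1_mono[OF _ H_definable] by blast

lemma generic_mono: "dsubset P \<Longrightarrow> dsubset Q \<Longrightarrow> P \<subseteq> Q \<Longrightarrow> generic P \<Longrightarrow> generic Q"
  unfolding generic_def dsubset_def using rk1_mono[of P Q] by fastforce

lemma generic_Un_cases: "dsubset P \<Longrightarrow> dsubset Q \<Longrightarrow> generic (P \<union> Q) \<Longrightarrow> generic P \<or> generic Q"
  unfolding generic_def dsubset_def using rk1_Un_cases[of P Q "rk1 H"] by blast

lemma generic_rcos: "dsubset Z \<Longrightarrow> h \<in> H \<Longrightarrow> generic Z \<Longrightarrow> generic (Z #> h)"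
  using rk1_rcos H_carrier rcos_nonempty unfolding generic_def dsubset_def by metis

lemma generic_Int_rcos_shift:
  assumes X: "dsubset X" and a: "a \<in> H" and b: "b \<in> H" and gen: "generic (X \<inter> (X #> a))"
  shows "generic ((X #> b) \<inter> (X #> (a \<otimes> b)))"
proof -
  have "dsubset (X \<inter> (X #> a))"
    using X a dsubset_rcos dsubset_Int unfolding dsubset_def by blast
  from generic_rcos[OF this b gen] show ?thesis
    using rcos_Int_rcos[OF dsubset_carrier[OF X]] a b H_carrier by simp
qed

lemma no_generic_sequence:
  fixes T :: "nat \<Rightarrow> 'a set"
  assumes "\<And>i. dsubset (T i)" "\<And>i. generic (T i)" "\<And>i j. i \<noteq> j \<Longrightarrow> T i \<inter> T j = {}"
  shows False
proof -
  have "Suc (rk1 H) \<le> rk1 H"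
    by (rule rk1_Suc_leI[OF H_definable, of T]) (use assms in \<open>auto simp: dsubset_def generic_def\<close>)
  thus False by simp
qed

lemma no_generic_almost_disjoint_sequence:
  fixes Y :: "nat \<Rightarrow> 'a set"
  assumes Y: "\<And>i. dsubset (Y i)" "\<And>i. generic (Y i)"
    and small: "\<And>i j. i \<noteq> j \<Longrightarrow> \<not> generic (Y i \<inter> Y j)"
  shows False
proof -
  define Z where "Z i = Y i - (\<Union>j<i. Y j)" for i
  have definable: "definable1 D (Y i)" for i using Y(1) by (simp add: dsubset_def)
  have dZ: "dsubset (Z i)" for i
    unfolding Z_def by (rule dsubset_Diff[OF Y(1) definable1_UN_lessThan[OF definable]])
  have gZ: "generic (Z i)" for i
  proof -
    have overlap: "dsubset (\<Union>j<i. Y i \<inter> Y j)"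
      using Y(1)[of i] definable1_UN_lessThan[of i "\<lambda>j. Y i \<inter> Y j"] definable1_Int[OF definable definable]
      unfolding dsubset_def by blast
    have "\<not> generic (\<Union>j<i. Y i \<inter> Y j)"
    proof
      assume "generic (\<Union>j<i. Y i \<inter> Y j)"
      then obtain j where "j < i" "generic (Y i \<inter> Y j)"
        using rk1_UN_lessThan_cases[of i "\<lambda>j. Y i \<inter> Y j" "rk1 H"] definable1_Int[OF definable definable]
        unfolding generic_def by blast
      thus False using small[of i j] by simp
    qed
    moreover have "Y i = Z i \<union> (\<Union>j<i. Y i \<inter> Y j)" unfolding Z_def by blast
    ultimately show ?thesis using generic_Un_cases[OF dZ overlap] Y(2)[of i] by auto
  qed
  have "Z i \<inter> Z j = {}" if "i \<noteq> j" for i j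
    using that unfolding Z_def by (cases "i < j") auto
  thus False by (rule no_generic_sequence[OF dZ gZ])
qed

lemma degree_one_no_split:
  "degree_one X \<Longrightarrow> dsubset P \<Longrightarrow> dsubset Q \<Longrightarrow> P \<subseteq> X \<Longrightarrow> Q \<subseteq> X \<Longrightarrow> P \<inter> Q = {} \<Longrightarrow>
    \<not> (generic P \<and> generic Q)"
  unfolding degree_one_def by blast

lemma degree_one_generic_Int:
  assumes X: "degree_one X" and P: "dsubset P" "P \<subseteq> X" "generic P"
    and Q: "dsubset Q" "Q \<subseteq> X" "generic Q"
  shows "generic (P \<inter> Q)"
proof (rule ccontr)
  assume "\<not> generic (P \<inter> Q)"
  have dQ: "definable1 D Q" using Q(1) by (simp add: dsubset_def)
  have "P = (P - Q) \<union> (P \<inter> Q)" by blast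
  hence "generic (P - Q) \<or> generic (P \<inter> Q)"
    using generic_Un_cases[OF dsubset_Diff[OF P(1) dQ] dsubset_Int[OF P(1) dQ]] P(3) by simp
  hence "generic (P - Q)" using \<open>\<not> generic (P \<inter> Q)\<close> by blast
  moreover have "(P - Q) \<inter> Q = {}" "P - Q \<subseteq> X" using P(2) by blast+
  ultimately show False
    using degree_one_no_split[OF X dsubset_Diff[OF P(1) dQ] Q(1)] Q(2,3) by blast
qed

lemma degree_one_rcos:
  assumes X: "degree_one X" and h: "h \<in> H"
  shows "degree_one (X #> h)"
proof -
  have dX: "dsubset X" "generic X" using X by (auto simp: degree_one_def)
  have ih: "inv h \<in> H" and hG: "h \<in> carrier G" using h H_inv_closed H_carrier by auto
  have "\<not> (generic P \<and> generic Q)"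
    if PQ: "dsubset P" "dsubset Q" "P \<subseteq> X #> h" "Q \<subseteq> X #> h" "P \<inter> Q = {}" for P Q
  proof
    assume gen: "generic P \<and> generic Q"
    have "P #> inv h \<subseteq> X" "Q #> inv h \<subseteq> X"
      using rcos_mono[OF PQ(3), of "inv h"] rcos_mono[OF PQ(4), of "inv h"]
        rcos_inv_cancel[OF dsubset_carrier[OF dX(1)] hG] by simp_all
    moreover have "(P #> inv h) \<inter> (Q #> inv h) = {}"
      using rcos_Int[OF dsubset_carrier[OF PQ(1)] dsubset_carrier[OF PQ(2)], of "inv h"] hG PQ(5)
      by (simp add: r_coset_def)
    moreover have "generic (P #> inv h)" "generic (Q #> inv h)"
      using gen generic_rcos[OF PQ(1) ih] generic_rcos[OF PQ(2) ih] by auto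
    ultimately show False
      using X dsubset_rcos[OF PQ(1) ih] dsubset_rcos[OF PQ(2) ih] unfolding degree_one_def by blast
  qed
  thus ?thesis unfolding degree_one_def using dsubset_rcos[OF dX(1) h] generic_rcos[OF dX(1) h dX(2)] by blast
qed

lemma degree_one_subset_ex:
  assumes "dsubset Y" "generic Y"
  shows "\<exists>X. degree_one X \<and> X \<subseteq> Y"
proof (rule ccontr)
  assume none: "\<nexists>X. degree_one X \<and> X \<subseteq> Y"
  let ?F = "{Z. dsubset Z \<and> generic Z \<and> Z \<subseteq> Y}"
  have split: "\<exists>P Q. P \<in> ?F \<and> Q \<in> ?F \<and> P \<subseteq> Z \<and> Q \<subseteq> Z \<and> P \<inter> Q = {}" if Z: "Z \<in> ?F" for Z
  proof -
    have Z': "dsubset Z" "generic Z" "Z \<subseteq> Y" using Z by simp_all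
    have "\<not> degree_one Z" using Z'(3) none by blast
    then obtain P Q where "dsubset P" "dsubset Q" "P \<subseteq> Z" "Q \<subseteq> Z" "P \<inter> Q = {}" "generic P" "generic Q"
      using Z'(1,2) unfolding degree_one_def by blast
    with Z'(3) show ?thesis by blast
  qed
  obtain T :: "nat \<Rightarrow> 'a set" where T: "\<forall>i. T i \<in> ?F" "\<forall>i j. i \<noteq> j \<longrightarrow> T i \<inter> T j = {}"
    using disjoint_sequence_if_splitting[of Y ?F, OF _ split] assms by auto
  show False by (rule no_generic_sequence[of T]) (use T in auto)
qed

definition stab :: "'a set \<Rightarrow> 'a set" where
  "stab X = {h \<in> H. generic (X \<inter> (X #> h))}"

lemma definable1_stab:
  assumes X: "degree_one X"
  shows "definable1 D (stab X)"
proof -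
  have dX: "dsubset X" using X by (simp add: degree_one_def)
  have X1: "definable1 D X" using dX by (simp add: dsubset_def)
  let ?P = "{[h, x] | h x. h \<in> carrier G \<and> x \<in> carrier G \<and> (h \<in> H \<and> x \<in> X \<and> x \<otimes> inv h \<in> X)}"
  have "dpred 2 (\<lambda>xs. xs ! 0 \<in> H \<and> xs ! 1 \<in> X \<and> xs ! 1 \<otimes> inv (xs ! 0) \<in> X)"
    by (intro dpred_conj dpred_coord_in[OF H_definable] dpred_coord_in[OF X1] dpred_dterm_in[OF _ X1]
        dterm_mult dterm_inv dterm_nth0_2 dterm_nth1_2) simp_all
  hence PD: "?P \<in> D 2" by (rule D2_of_dpred)
  have fibre: "fibre_fst ?P h = X \<inter> (X #> h)" if "h \<in> H" for h
    using that H_carrier dsubset_carrier[OF dX] by (auto simp: fibre_fst_def mem_rcos_iff)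
  have proj: "h \<in> proj_fst ?P \<longleftrightarrow> h \<in> H \<and> fibre_fst ?P h \<noteq> {}" for h
    unfolding proj_fst_def fibre_fst_def by blast
  have "stab X = {h \<in> proj_fst ?P. rk1 (fibre_fst ?P h) = rk1 H}"
  proof (intro equalityI subsetI)
    fix h assume "h \<in> stab X"
    hence h: "h \<in> H" "generic (X \<inter> (X #> h))" unfolding stab_def by auto
    have "dsubset (X \<inter> (X #> h))" using dsubset_Int[OF dX] definable1_rcos[OF X1 H_carrier[OF h(1)]] by simp
    hence "rk1 (X \<inter> (X #> h)) = rk1 H" using h(2) rk1_le_rk1_H unfolding generic_def by (simp add: le_antisym)
    thus "h \<in> {h \<in> proj_fst ?P. rk1 (fibre_fst ?P h) = rk1 H}" using h fibre proj unfolding generic_def by auto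
  qed (use fibre proj in \<open>auto simp: stab_def generic_def\<close>)
  thus ?thesis using definable1_rk_level[OF PD] by simp
qed

lemma subgroup_stab:
  assumes X: "degree_one X"
  shows "subgroup (stab X) G"
proof (rule subgroupI)
  have dX: "dsubset X" and gX: "generic X" using X by (auto simp: degree_one_def)
  have XG: "X \<subseteq> carrier G" by (rule dsubset_carrier[OF dX])
  show "stab X \<subseteq> carrier G" unfolding stab_def using H_subset by blast
  have "\<one> \<in> stab X"
    using gX coset_mult_one[OF XG] subgroup.one_closed[OF H_subgroup] unfolding stab_def by simp
  thus "stab X \<noteq> {}" by blast
  fix a assume "a \<in> stab X"
  hence a: "a \<in> H" "generic (X \<inter> (X #> a))" unfolding stab_def by auto
  have "generic ((X #> inv a) \<inter> (X #> (a \<otimes> inv a)))"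
    by (rule generic_Int_rcos_shift[OF dX a(1) H_inv_closed[OF a(1)] a(2)])
  thus "inv a \<in> stab X" using a(1) H_inv_closed XG H_carrier unfolding stab_def by (simp add: Int_commute)
next
  have dX: "dsubset X" using X by (simp add: degree_one_def)
  have X1: "definable1 D X" using dX by (simp add: dsubset_def)
  fix a b assume "a \<in> stab X" "b \<in> stab X"
  hence a: "a \<in> H" "generic (X \<inter> (X #> a))" and b: "b \<in> H" "generic (X \<inter> (X #> b))"
    unfolding stab_def by auto
  have ab: "a \<otimes> b \<in> H" and dab: "definable1 D (X #> (a \<otimes> b))"
    using a b H_mult_closed H_carrier definable1_rcos[OF X1] by auto
  have dXb: "dsubset (X #> b)" by (rule dsubset_rcos[OF dX b(1)])
  \<comment> \<open>inside the degree-one set \<open>X #> b\<close>, the generic sets \<open>X #> b \<inter> X\<close> and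
      \<open>X #> b \<inter> X #> (a \<otimes> b)\<close> meet generically\<close>
  have "generic (((X #> b) \<inter> X) \<inter> ((X #> b) \<inter> (X #> (a \<otimes> b))))"
  proof (rule degree_one_generic_Int[OF degree_one_rcos[OF X b(1)]])
    show "dsubset ((X #> b) \<inter> X)" "dsubset ((X #> b) \<inter> (X #> (a \<otimes> b)))"
      using dsubset_Int[OF dXb] X1 dab by auto
    show "generic ((X #> b) \<inter> X)" using b(2) by (simp add: Int_commute)
    show "generic ((X #> b) \<inter> (X #> (a \<otimes> b)))" by (rule generic_Int_rcos_shift[OF dX a(1) b(1) a(2)])
  qed auto
  moreover have "dsubset (((X #> b) \<inter> X) \<inter> ((X #> b) \<inter> (X #> (a \<otimes> b))))"
    using dsubset_Int[OF dsubset_Int[OF dXb X1] dab] by (simp add: Int_ac)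
  ultimately have "generic (X \<inter> (X #> (a \<otimes> b)))"
    using generic_mono dsubset_Int[OF dX dab] by blast
  thus "a \<otimes> b \<in> stab X" using ab unfolding stab_def by simp
qed

lemma stab_rcos_eq_if_generic_Int:
  assumes X: "degree_one X" and h: "h \<in> H" and k: "k \<in> H"
    and gen: "generic ((X #> h) \<inter> (X #> k))"
  shows "stab X #> h = stab X #> k"
proof -
  have dX: "dsubset X" using X by (simp add: degree_one_def)
  have XG: "X \<subseteq> carrier G" by (rule dsubset_carrier[OF dX])
  have hG: "h \<in> carrier G" and kG: "k \<in> carrier G" using h k H_carrier by auto
  define c where "c = h \<otimes> inv k"
  have c: "c \<in> H" "c \<in> carrier G" unfolding c_def using h k H_mult_closed H_inv_closed hG kG by auto
  have "dsubset ((X #> h) \<inter> (X #> k))"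
    using dsubset_Int[OF dsubset_rcos[OF dX h]] definable1_rcos dX kG unfolding dsubset_def by blast
  from generic_rcos[OF this H_inv_closed[OF k] gen]
  have "generic ((X #> c) \<inter> X)"
    using rcos_Int[OF r_coset_subset_G[OF XG hG] r_coset_subset_G[OF XG kG], of "inv k"] kG hG XG
    by (simp add: coset_mult_assoc c_def)
  hence "c \<in> stab X" using c(1) unfolding stab_def by (simp add: Int_commute)
  thus ?thesis unfolding c_def by (simp add: rcos_eq_iff[OF subgroup_stab[OF X] hG kG])
qed

lemma finite_index_stab:
  assumes X: "degree_one X"
  shows "finite ((\<lambda>h. stab X #> h) ` H)"
proof (rule ccontr)
  assume "infinite ((\<lambda>h. stab X #> h) ` H)"
  then obtain hh :: "nat \<Rightarrow> 'a" where hh: "\<And>i. hh i \<in> H" "\<And>i j. i \<noteq> j \<Longrightarrow> stab X #> hh i \<noteq> stab X #> hh j"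
    by (rule infinite_image_sequence) blast
  have dX: "dsubset X" and gX: "generic X" using X by (auto simp: degree_one_def)
  show False
  proof (rule no_generic_almost_disjoint_sequence[of "\<lambda>i. X #> hh i"])
    show "dsubset (X #> hh i)" "generic (X #> hh i)" for i
      using dsubset_rcos[OF dX hh(1)] generic_rcos[OF dX hh(1) gX] by auto
    show "\<not> generic ((X #> hh i) \<inter> (X #> hh j))" if "i \<noteq> j" for i j
    proof
      assume "generic ((X #> hh i) \<inter> (X #> hh j))"
      hence "stab X #> hh i = stab X #> hh j" by (rule stab_rcos_eq_if_generic_Int[OF X hh(1) hh(1)])
      thus False using hh(2)[OF that] by simp
    qed
  qed
qed

lemma stab_eq_H: "degree_one X \<Longrightarrow> stab X = H"
  using H_connected subgroup_stab definable1_stab finite_index_stab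
  unfolding connected_sg_def stab_def by blast

lemma degree_one_Int_rcos_generic: "degree_one X \<Longrightarrow> h \<in> H \<Longrightarrow> generic (X \<inter> (X #> h))"
  using stab_eq_H unfolding stab_def by blast

definition translation_graph :: "'a set \<Rightarrow> 'a set \<Rightarrow> 'a list set" where
  "translation_graph W X = {[h, y] | h y. h \<in> H \<and> y \<in> W \<and> y \<otimes> inv h \<in> X}"

lemma D2_translation_graph:
  assumes W: "dsubset W" and X: "dsubset X"
  shows "translation_graph W X \<in> D 2"
proof -
  have "dpred 2 (\<lambda>xs. xs ! 0 \<in> H \<and> xs ! 1 \<in> W \<and> xs ! 1 \<otimes> inv (xs ! 0) \<in> X)"
    using W X unfolding dsubset_def
    by (intro dpred_conj dpred_coord_in[OF H_definable] dpred_coord_in dpred_dterm_in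
        dterm_mult dterm_inv dterm_nth0_2 dterm_nth1_2) auto
  hence "{[h, y] | h y. h \<in> carrier G \<and> y \<in> carrier G \<and> (h \<in> H \<and> y \<in> W \<and> y \<otimes> inv h \<in> X)} \<in> D 2"
    by (rule D2_of_dpred)
  thus ?thesis
    unfolding translation_graph_def using dsubset_carrier[OF W] H_subset by (smt (verit) Collect_cong subsetD)
qed

lemma fibre_fst_translation_graph:
  assumes "dsubset W" "dsubset X" "h \<in> H"
  shows "fibre_fst (translation_graph W X) h = W \<inter> (X #> h)"
  using assms dsubset_carrier[OF assms(1)] dsubset_carrier[OF assms(2)] H_carrier
  by (auto simp: fibre_fst_def translation_graph_def mem_rcos_iff)

lemma fibre_snd_translation_graph:
  assumes W: "dsubset W" and X: "dsubset X" and y: "y \<in> W"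
  shows "fibre_snd (translation_graph W X) y = (\<lambda>x. inv x \<otimes> y) ` X"
proof (intro equalityI subsetI)
  have yG: "y \<in> carrier G" using y dsubset_carrier[OF W] by blast
  fix h assume "h \<in> fibre_snd (translation_graph W X) y"
  hence h: "h \<in> H" "y \<otimes> inv h \<in> X" unfolding fibre_snd_def translation_graph_def by auto
  have "inv (y \<otimes> inv h) \<otimes> y = h" using H_carrier[OF h(1)] yG by (simp add: inv_mult_group m_assoc)
  thus "h \<in> (\<lambda>x. inv x \<otimes> y) ` X" using h(2) by (metis image_eqI)
next
  have yG: "y \<in> carrier G" using y dsubset_carrier[OF W] by blast
  fix h assume "h \<in> (\<lambda>x. inv x \<otimes> y) ` X"
  then obtain x where x: "x \<in> X" "h = inv x \<otimes> y" by blast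
  have "x \<in> H" "y \<in> H" using x(1) y W X by (auto simp: dsubset_def)
  hence "h \<in> H" unfolding x(2) using H_inv_closed H_mult_closed by blast
  moreover have "y \<otimes> inv h = x"
    unfolding x(2) using H_carrier[OF \<open>x \<in> H\<close>] yG by (simp add: inv_mult_group m_assoc)
  ultimately show "h \<in> fibre_snd (translation_graph W X) y"
    unfolding fibre_snd_def translation_graph_def using x(1) y by auto
qed

lemma proj_snd_translation_graph:
  assumes W: "dsubset W" and X: "dsubset X" "X \<noteq> {}"
  shows "proj_snd (translation_graph W X) = W"
  using fibre_snd_translation_graph[OF W X(1)] X(2)
  unfolding proj_snd_def fibre_snd_def by (auto simp: translation_graph_def)

lemma rk_translation_graph:
  assumes W: "dsubset W" "generic W" and X: "dsubset X" "generic X"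
  shows "rk (translation_graph W X) = rk1 H + rk1 H"
proof -
  let ?P = "translation_graph W X"
  have rk_eq: "rk1 Z = rk1 H" if "dsubset Z" "generic Z" for Z
    using that rk1_le_rk1_H unfolding generic_def by (simp add: le_antisym)
  have proj: "proj_snd ?P = W"
    using proj_snd_translation_graph[OF W(1) X(1)] X(2) unfolding generic_def by blast
  have "rk1 (fibre_snd ?P y) = rk1 H" if y: "y \<in> W" for y
  proof -
    have "y \<in> carrier G" using y dsubset_carrier[OF W(1)] by blast
    hence "rk1 ((\<lambda>x. inv x \<otimes> y) ` X) = rk1 X"
      using rk1_inv_mult_image X unfolding dsubset_def generic_def by blast
    thus ?thesis using fibre_snd_translation_graph[OF W(1) X(1) y] rk_eq[OF X] by simp
  qed
  moreover have "?P \<noteq> {}" using proj W(2) unfolding generic_def proj_snd_def by blast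
  ultimately have "rk ?P = rk1 (proj_snd ?P) + rk1 H"
    using rk_fibred_snd[OF D2_translation_graph[OF W(1) X(1)]] proj by blast
  thus ?thesis using proj rk_eq[OF W] by simp
qed

lemma generic_Int_rcos_generic:
  assumes W: "dsubset W" "generic W" and X: "dsubset X" "generic X"
  shows "\<exists>h\<in>H. generic (W \<inter> (X #> h))"
proof (rule ccontr)
  assume none: "\<not> (\<exists>h\<in>H. generic (W \<inter> (X #> h)))"
  let ?P = "translation_graph W X"
  have PD: "?P \<in> D 2" by (rule D2_translation_graph[OF W(1) X(1)])
  have proj_H: "proj_fst ?P \<subseteq> H" unfolding proj_fst_def translation_graph_def by auto
  have P_ne: "?P \<noteq> {}"
    using proj_snd_translation_graph[OF W(1) X(1)] W(2) X(2) unfolding generic_def proj_snd_def by blast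
  have "rk ?P < rk1 (proj_fst ?P) + rk1 H"
  proof (rule rk_less_if_fibres_less[OF PD P_ne])
    fix h assume h: "h \<in> proj_fst ?P"
    have "fibre_fst ?P h \<noteq> {}" using h unfolding proj_fst_def fibre_fst_def by blast
    moreover have "h \<in> H" using h proj_H by blast
    ultimately show "rk1 (fibre_fst ?P h) < rk1 H"
      using none fibre_fst_translation_graph[OF W(1) X(1)] unfolding generic_def by fastforce
  qed
  moreover have "rk1 (proj_fst ?P) \<le> rk1 H"
    using rk1_le_rk1_H definable1_proj_fst[OF PD] proj_H P_ne
    unfolding dsubset_def proj_fst_def
    by (metis (no_types, lifting) D2_elem[OF PD] empty_iff ex_in_conv mem_Collect_eq)
  ultimately show False using rk_translation_graph[OF W X] by linarith
qed

lemma generic_subsets_meet: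
  assumes Y: "dsubset Y" "generic Y" and Z: "dsubset Z" "generic Z"
  shows "Y \<inter> Z \<noteq> {}"
proof -
  obtain X where X: "degree_one X" using degree_one_subset_ex[OF Y] by blast
  have dX: "dsubset X" "generic X" using X by (auto simp: degree_one_def)
  \<comment> \<open>a degree-one set meets every degree-one set generically, since some translate of it does\<close>
  have meets: "generic (X \<inter> W)" if W: "degree_one W" for W
  proof -
    have dW: "dsubset W" "generic W" using W by (auto simp: degree_one_def)
    obtain h where h: "h \<in> H" "generic (W \<inter> (X #> h))" using generic_Int_rcos_generic[OF dW dX] by blast
    have dXh: "dsubset (X #> h)" by (rule dsubset_rcos[OF dX(1) h(1)])
    have "generic (((X #> h) \<inter> X) \<inter> ((X #> h) \<inter> W))"
    proof (rule degree_one_generic_Int[OF degree_one_rcos[OF X h(1)]])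
      show "dsubset ((X #> h) \<inter> X)" "dsubset ((X #> h) \<inter> W)"
        using dsubset_Int[OF dXh] dX(1) dW(1) unfolding dsubset_def by auto
      show "generic ((X #> h) \<inter> X)" using degree_one_Int_rcos_generic[OF X h(1)] by (simp add: Int_commute)
      show "generic ((X #> h) \<inter> W)" using h(2) by (simp add: Int_commute)
    qed auto
    moreover have "dsubset (((X #> h) \<inter> X) \<inter> ((X #> h) \<inter> W))" "dsubset (X \<inter> W)"
      using dsubset_Int[OF dsubset_Int[OF dXh] ] dX(1) dW(1) dsubset_Int unfolding dsubset_def
      by (auto simp: Int_ac intro: definable1_Int)
    ultimately show ?thesis using generic_mono by blast
  qed
  obtain Y' where Y': "degree_one Y'" "Y' \<subseteq> Y" using degree_one_subset_ex[OF Y] by blast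
  obtain Z' where Z': "degree_one Z'" "Z' \<subseteq> Z" using degree_one_subset_ex[OF Z] by blast
  have "dsubset (X \<inter> Y')" "dsubset (X \<inter> Z')"
    using Y'(1) Z'(1) dX(1) dsubset_Int unfolding degree_one_def dsubset_def by auto
  hence "generic ((X \<inter> Y') \<inter> (X \<inter> Z'))"
    by (intro degree_one_generic_Int[OF X] meets Y'(1) Z'(1)) auto
  thus ?thesis using Y'(2) Z'(2) unfolding generic_def by blast
qed

definition malnormal_dsubgroup :: "'a set \<Rightarrow> bool" where
  "malnormal_dsubgroup C \<longleftrightarrow>
    subgroup C G \<and> definable1 D C \<and> C \<subseteq> H \<and> C - {\<one>} \<noteq> {} \<and> malnormal_in H C"

definition conj_into :: "'a set \<Rightarrow> 'a set" where
  "conj_into C = {y \<in> H. y \<noteq> \<one> \<and> (\<exists>h\<in>H. h \<otimes> y \<otimes> inv h \<in> C)}"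

definition conj_graph :: "'a set \<Rightarrow> 'a list set" where
  "conj_graph C = {[y, h] | y h. y \<in> carrier G \<and> h \<in> H \<and> y \<noteq> \<one> \<and> h \<otimes> y \<otimes> inv h \<in> C}"

lemma malnormal_dsubgroup_Int_H:
  assumes M: "malnormal G M" "definable1 D M" and nontriv: "(M \<inter> H) - {\<one>} \<noteq> {}"
  shows "malnormal_dsubgroup (M \<inter> H)"
  unfolding malnormal_dsubgroup_def
  using subgroups_Inter_pair[OF malnormal_subgroup[OF M(1)] H_subgroup] definable1_Int[OF M(2) H_definable]
    nontriv malnormal_in_restrict[OF malnormal_imp_malnormal_in[OF M(1)] H_subset]
  by blast

lemma D2_conj_graph:
  assumes C: "definable1 D C"
  shows "conj_graph C \<in> D 2"
proof -
  have "dpred 2 (\<lambda>xs. xs ! 1 \<in> H \<and> \<not> xs ! 0 = \<one> \<and> xs ! 1 \<otimes> xs ! 0 \<otimes> inv (xs ! 1) \<in> C)"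
    by (intro dpred_conj dpred_not dpred_coord_in[OF H_definable] dpred_dterm_eq dterm_const one_closed
        dpred_dterm_in[OF _ C] dterm_mult dterm_inv dterm_nth0_2 dterm_nth1_2) simp_all
  hence "{[y, h] | y h. y \<in> carrier G \<and> h \<in> carrier G \<and> (h \<in> H \<and> \<not> y = \<one> \<and> h \<otimes> y \<otimes> inv h \<in> C)} \<in> D 2"
    by (rule D2_of_dpred)
  moreover have "{[y, h] | y h. y \<in> carrier G \<and> h \<in> carrier G \<and> (h \<in> H \<and> \<not> y = \<one> \<and> h \<otimes> y \<otimes> inv h \<in> C)}
      = conj_graph C"
    unfolding conj_graph_def using H_carrier by blast
  ultimately show ?thesis by simp
qed

lemma proj_fst_conj_graph:
  assumes "C \<subseteq> H"
  shows "proj_fst (conj_graph C) = conj_into C"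
proof (intro equalityI subsetI)
  fix y assume "y \<in> proj_fst (conj_graph C)"
  then obtain h where h: "h \<in> H" "y \<in> carrier G" "y \<noteq> \<one>" "h \<otimes> y \<otimes> inv h \<in> C"
    unfolding proj_fst_def conj_graph_def by blast
  have "h \<otimes> y \<otimes> inv h \<in> H" using h(4) assms by blast
  hence "inv h \<otimes> (h \<otimes> y \<otimes> inv h) \<otimes> h \<in> H"
    using h(1) by (simp add: H_inv_closed H_mult_closed)
  hence "y \<in> H" using conj_inv_cancel[OF H_carrier[OF h(1)] h(2)] by simp
  thus "y \<in> conj_into C" using h unfolding conj_into_def by blast
next
  fix y assume "y \<in> conj_into C"
  then obtain h where "y \<in> H" "y \<noteq> \<one>" "h \<in> H" "h \<otimes> y \<otimes> inv h \<in> C" unfolding conj_into_def by blast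
  thus "y \<in> proj_fst (conj_graph C)" unfolding proj_fst_def conj_graph_def using H_carrier by blast
qed

lemma fibre_snd_conj_graph:
  assumes CH: "C \<subseteq> H" and h: "h \<in> H"
  shows "fibre_snd (conj_graph C) h = conjg G (C - {\<one>}) h"
proof -
  have hG: "h \<in> carrier G" by (rule H_carrier[OF h])
  have "y \<in> fibre_snd (conj_graph C) h \<longleftrightarrow> y \<in> conjg G (C - {\<one>}) h" for y
  proof -
    have "y \<in> fibre_snd (conj_graph C) h \<longleftrightarrow> y \<in> carrier G \<and> y \<noteq> \<one> \<and> h \<otimes> y \<otimes> inv h \<in> C"
      unfolding fibre_snd_def conj_graph_def using h by simp
    moreover have "y \<in> conjg G (C - {\<one>}) h \<longleftrightarrow> y \<in> carrier G \<and> h \<otimes> y \<otimes> inv h \<in> C - {\<one>}"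
      by (rule mem_conjg_iff) (use CH H_subset hG in auto)
    ultimately show ?thesis using conj_eq_one_iff[OF hG] by blast
  qed
  thus ?thesis by blast
qed

lemma fibre_fst_conj_graph:
  assumes C: "malnormal_dsubgroup C" and y: "y \<in> conj_into C"
    and h0: "h0 \<in> H" "h0 \<otimes> y \<otimes> inv h0 \<in> C"
  shows "fibre_fst (conj_graph C) y = C #> h0"
proof -
  have Csub: "subgroup C G" "C \<subseteq> H" "malnormal_in H C" using C unfolding malnormal_dsubgroup_def by auto
  have yG: "y \<in> carrier G" "y \<noteq> \<one>" using y H_carrier unfolding conj_into_def by auto
  have h0G: "h0 \<in> carrier G" and CG: "C \<subseteq> carrier G" using h0(1) Csub(2) H_subset by auto
  have iff: "h \<otimes> y \<otimes> inv h \<in> C \<longleftrightarrow> h \<otimes> inv h0 \<in> C" if "h \<in> H" "h \<otimes> inv h0 \<in> H" for h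
    by (rule malnormal_in_conj_iff_rcos[OF Csub(1,3) H_subset that(1) h0(1) that(2) yG h0(2)])
  show ?thesis
  proof (intro equalityI subsetI)
    fix h assume "h \<in> fibre_fst (conj_graph C) y"
    hence h: "h \<in> H" "h \<otimes> y \<otimes> inv h \<in> C" unfolding fibre_fst_def conj_graph_def by auto
    have "h \<otimes> inv h0 \<in> H" using h(1) h0(1) by (simp add: H_mult_closed H_inv_closed)
    hence "h \<otimes> inv h0 \<in> C" using iff[OF h(1)] h(2) by simp
    thus "h \<in> C #> h0" using mem_rcos_iff[OF CG h0G] H_carrier[OF h(1)] by simp
  next
    fix h assume "h \<in> C #> h0"
    hence hG: "h \<in> carrier G" and c: "h \<otimes> inv h0 \<in> C" using mem_rcos_iff[OF CG h0G] by auto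
    have cH: "h \<otimes> inv h0 \<in> H" using c Csub(2) by blast
    have "h = (h \<otimes> inv h0) \<otimes> h0" using hG h0G by (simp add: m_assoc)
    hence hH: "h \<in> H" using H_mult_closed[OF cH h0(1)] by simp
    hence "h \<otimes> y \<otimes> inv h \<in> C" using iff[OF hH cH] c by simp
    thus "h \<in> fibre_fst (conj_graph C) y" unfolding fibre_fst_def conj_graph_def using hH yG by simp
  qed
qed

lemma generic_conj_into:
  assumes C: "malnormal_dsubgroup C"
  shows "dsubset (conj_into C) \<and> generic (conj_into C)"
proof -
  have Cdef: "definable1 D C" and CH: "C \<subseteq> H" and nontriv: "C - {\<one>} \<noteq> {}"
    using C unfolding malnormal_dsubgroup_def by auto
  let ?Q = "conj_graph C"
  have QD: "?Q \<in> D 2" by (rule D2_conj_graph[OF Cdef])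
  have fibres_snd: "fibre_snd ?Q h = conjg G (C - {\<one>}) h \<and> conjg G (C - {\<one>}) h \<noteq> {}" if "h \<in> H" for h
    using fibre_snd_conj_graph[OF CH that] nontriv unfolding conjg_def by blast
  have proj_snd: "proj_snd ?Q = H"
    using fibres_snd unfolding proj_snd_def fibre_snd_def by (auto simp: conj_graph_def)
  have Q_ne: "?Q \<noteq> {}"
    using proj_snd subgroup.one_closed[OF H_subgroup] unfolding proj_snd_def by blast
  have "\<forall>h\<in>proj_snd ?Q. rk1 (fibre_snd ?Q h) = rk1 C"
    using fibres_snd proj_snd rk1_conjg[OF definable1_Diff[OF Cdef definable1_singleton[OF one_closed]]]
      rk1_Diff_one[OF Cdef nontriv] H_carrier nontriv by auto
  hence "rk ?Q = rk1 H + rk1 C" using rk_fibred_snd[OF QD Q_ne] proj_snd by simp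
  moreover have "\<forall>y\<in>proj_fst ?Q. rk1 (fibre_fst ?Q y) = rk1 C"
  proof
    fix y assume "y \<in> proj_fst ?Q"
    hence y: "y \<in> conj_into C" using proj_fst_conj_graph[OF CH] by simp
    then obtain h0 where h0: "h0 \<in> H" "h0 \<otimes> y \<otimes> inv h0 \<in> C" unfolding conj_into_def by blast
    show "rk1 (fibre_fst ?Q y) = rk1 C"
      using fibre_fst_conj_graph[OF C y h0] rk1_rcos[OF Cdef H_carrier[OF h0(1)]] nontriv by auto
  qed
  hence "rk ?Q = rk1 (conj_into C) + rk1 C" using rk_fibred_fst[OF QD Q_ne] proj_fst_conj_graph[OF CH] by simp
  moreover have "dsubset (conj_into C)"
    using definable1_proj_fst[OF QD] proj_fst_conj_graph[OF CH] unfolding dsubset_def conj_into_def by auto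
  moreover have "conj_into C \<noteq> {}"
    using Q_ne D2_elem[OF QD] proj_fst_conj_graph[OF CH] unfolding proj_fst_def by blast
  ultimately show ?thesis unfolding generic_def by simp
qed

lemma malnormal_dsubgroups_conjugates_meet:
  assumes C1: "malnormal_dsubgroup C1" and C2: "malnormal_dsubgroup C2"
  shows "\<exists>x\<in>H. C1 \<inter> conjg G C2 x - {\<one>} \<noteq> {}"
proof -
  obtain y h1 h2 where y: "y \<in> H" "y \<noteq> \<one>" and h1: "h1 \<in> H" "h1 \<otimes> y \<otimes> inv h1 \<in> C1"
    and h2: "h2 \<in> H" "h2 \<otimes> y \<otimes> inv h2 \<in> C2"
    using generic_subsets_meet[OF generic_conj_into[OF C1, THEN conjunct1] generic_conj_into[OF C1, THEN conjunct2]
        generic_conj_into[OF C2, THEN conjunct1] generic_conj_into[OF C2, THEN conjunct2]]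
    unfolding conj_into_def by blast
  have G: "y \<in> carrier G" "h1 \<in> carrier G" "h2 \<in> carrier G" using y h1 h2 H_carrier by auto
  have C2G: "C2 \<subseteq> carrier G" using C2 H_subset unfolding malnormal_dsubgroup_def by blast
  define x where "x = h2 \<otimes> inv h1"
  have x: "x \<in> H" "x \<in> carrier G" unfolding x_def using h1 h2 H_inv_closed H_mult_closed G by auto
  have "x \<otimes> (h1 \<otimes> y \<otimes> inv h1) \<otimes> inv x = h2 \<otimes> y \<otimes> inv h2"
    unfolding x_def using G by (simp add: m_assoc inv_mult_group)
  hence "h1 \<otimes> y \<otimes> inv h1 \<in> C1 \<inter> conjg G C2 x"
    using h1(2) h2(2) mem_conjg_iff[OF C2G x(2)] G by simp
  moreover have "h1 \<otimes> y \<otimes> inv h1 \<noteq> \<one>" using conj_eq_one_iff[OF G(2,1)] y(2) by simp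
  ultimately show ?thesis using x(1) by blast
qed

lemma malnormal_conjugates_meeting_H_are_H_conjugate:
  assumes M: "malnormal G M" "definable1 D M" and g: "g \<in> carrier G" and a: "a \<in> carrier G"
    and meet_g: "conjg G M g \<inter> H - {\<one>} \<noteq> {}" and meet_a: "conjg G M a \<inter> H - {\<one>} \<noteq> {}"
  shows "\<exists>x\<in>H. conjg G M a = conjg G M (g \<otimes> x)"
proof -
  have MG: "M \<subseteq> carrier G" by (rule malnormal_subset[OF M(1)])
  have C: "malnormal_dsubgroup (conjg G M c \<inter> H)" if "c \<in> carrier G" "conjg G M c \<inter> H - {\<one>} \<noteq> {}" for c
    using malnormal_conjg[OF M(1) that(1)] definable1_conjg[OF M(2) that(1)] that(2)
    by (rule malnormal_dsubgroup_Int_H)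
  obtain x z where x: "x \<in> H" and z: "z \<in> conjg G M g" "z \<in> conjg G (conjg G M a \<inter> H) x" "z \<noteq> \<one>"
    using malnormal_dsubgroups_conjugates_meet[OF C[OF g meet_g] C[OF a meet_a]] by blast
  have xG: "x \<in> carrier G" by (rule H_carrier[OF x])
  have "z \<in> conjg G M (a \<otimes> x)"
    using conjg_mono[of "conjg G M a \<inter> H" "conjg G M a" x] z(2) conjg_conjg[OF MG a xG] by auto
  hence "conjg G M g \<inter> conjg G M (a \<otimes> x) \<noteq> {\<one>}" using z(1,3) by blast
  hence "conjg G M g = conjg G M (a \<otimes> x)" by (rule malnormal_conjg_eq[OF M(1) g m_closed[OF a xG]])
  hence "conjg G M (g \<otimes> inv x) = conjg G M a"
    using conjg_conjg[OF MG g inv_closed[OF xG]] conjg_conjg[OF MG m_closed[OF a xG] inv_closed[OF xG]] a xG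
    by (simp add: m_assoc)
  thus ?thesis using H_inv_closed[OF x] by (intro bexI[of _ "inv x"]) simp_all
qed

end

section \<open>Full Frobenius complements\<close>

context fmr_group
begin

lemma full_frob_complementD:
  assumes "full_frob_complement G D B"
  shows "malnormal G B" "definable1 D B" "y \<in> carrier G \<Longrightarrow> \<exists>a\<in>carrier G. y \<in> conjg G B a"
  using assms unfolding full_frob_complement_def by auto

lemma one_in_full_frob_complement: "full_frob_complement G D B \<Longrightarrow> \<one> \<in> B"
  using full_frob_complementD(1) malnormal_subgroup subgroup.one_closed by blast

lemma full_frob_complement_nontrivial:
  assumes B: "full_frob_complement G D B" and x: "x \<in> carrier G" "x \<noteq> \<one>"
  shows "B - {\<one>} \<noteq> {}"
proof
  assume "B - {\<one>} = {}"
  hence "conjg G B a \<subseteq> {\<one>}" if "a \<in> carrier G" for a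
    using conjg_mono[of B "{\<one>}" a] that by (auto simp: conjg_def)
  thus False using full_frob_complementD(3)[OF B x(1)] x(2) by blast
qed

lemma full_frob_complement_conjg:
  assumes B: "full_frob_complement G D B" and a: "a \<in> carrier G"
  shows "full_frob_complement G D (conjg G B a)"
proof -
  have BG: "B \<subseteq> carrier G" by (rule malnormal_subset[OF full_frob_complementD(1)[OF B]])
  have "y \<in> (\<Union>g\<in>carrier G. conjg G (conjg G B a) g)" if y: "y \<in> carrier G" for y
  proof -
    obtain b where b: "b \<in> carrier G" "y \<in> conjg G B b" using full_frob_complementD(3)[OF B y] by blast
    have "conjg G (conjg G B a) (inv a \<otimes> b) = conjg G B b"
      using conjg_conjg[OF BG a] a b by (simp add: m_assoc[symmetric])
    thus ?thesis using a b by blast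
  qed
  moreover have "conjg G (conjg G B a) g \<subseteq> carrier G" if "g \<in> carrier G" for g
    by (rule conjg_subset[OF conjg_subset[OF BG a] that])
  ultimately show ?thesis
    unfolding full_frob_complement_def
    using definable1_conjg[OF full_frob_complementD(2)[OF B] a] malnormal_conjg[OF full_frob_complementD(1)[OF B] a]
    by blast
qed

end

context connected_subgroup
begin

lemma full_frob_complement_trace:
  assumes B: "full_frob_complement G D B" and g: "g \<in> carrier G" and meet: "conjg G B g \<inter> H \<noteq> {\<one>}"
  shows "full_frob_complement (G\<lparr>carrier := H\<rparr>) D (conjg G B g \<inter> H)"
proof -
  note B_mal = full_frob_complementD(1)[OF B] and B_def = full_frob_complementD(2)[OF B]
  let ?C = "conjg G B g \<inter> H"
  have BG: "B \<subseteq> carrier G" by (rule malnormal_subset[OF B_mal])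
  have Bg: "conjg G B g \<subseteq> carrier G" by (rule conjg_subset[OF BG g])
  have C_sub: "subgroup ?C G"
    by (rule subgroups_Inter_pair[OF conjg_subgroup[OF malnormal_subgroup[OF B_mal] g] H_subgroup])
  have one: "\<one> \<in> conjg G B c \<inter> H" if "c \<in> carrier G" for c
    using one_in_conjg[OF malnormal_subgroup[OF B_mal] that] subgroup.one_closed[OF H_subgroup] by blast
  \<comment> \<open>a nontrivial element of \<open>H\<close> lies in a conjugate of \<open>B\<close>, whose trace on \<open>H\<close> is then
      \<open>H\<close>-conjugate to \<open>B\<^sup>g \<inter> H\<close>\<close>
  have "\<exists>x\<in>H. y \<in> conjg G ?C x" if y: "y \<in> H" for y
  proof (cases "y = \<one>")
    case True
    thus ?thesis using one_in_conjg[OF C_sub one_closed] subgroup.one_closed[OF H_subgroup] by blast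
  next
    case False
    obtain a where a: "a \<in> carrier G" "y \<in> conjg G B a"
      using full_frob_complementD(3)[OF B H_carrier[OF y]] by blast
    obtain x where x: "x \<in> H" "conjg G B a = conjg G B (g \<otimes> x)"
      using malnormal_conjugates_meeting_H_are_H_conjugate[OF B_mal B_def g a(1)] meet one[OF g] a y False
      by blast
    have xG: "x \<in> carrier G" by (rule H_carrier[OF x(1)])
    have "y \<in> conjg G (conjg G B g) x \<inter> conjg G H x"
      using a(2) x conjg_conjg[OF BG g xG] conjg_subgroup_self[OF H_subgroup x(1)] y by simp
    thus ?thesis using conjg_Int[OF Bg H_subset xG] x(1) by blast
  qed
  moreover have "conjg G ?C x \<subseteq> H" if "x \<in> H" for x
    using conjg_mono[of ?C H x] conjg_subgroup_self[OF H_subgroup that] by blast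
  ultimately have "(\<Union>x\<in>H. conjg (G\<lparr>carrier := H\<rparr>) ?C x) = H"
    using conjg_restrict[OF H_subgroup] by auto
  thus ?thesis
    unfolding full_frob_complement_def
    using definable1_Int[OF definable1_conjg[OF B_def g] H_definable]
      malnormal_restrict[OF malnormal_conjg[OF B_mal g] H_subgroup]
    by simp
qed

lemma in_conjugate_if_contains_conjugate:
  assumes B: "full_frob_complement G D B" and nontriv: "B - {\<one>} \<noteq> {}"
    and g0: "g0 \<in> carrier G" and sub: "conjg G B g0 \<subseteq> H" and y: "y \<in> H" "y \<noteq> \<one>"
  shows "\<exists>k\<in>H. y \<in> conjg G B (g0 \<otimes> k)"
proof -
  have BG: "B \<subseteq> carrier G" by (rule malnormal_subset[OF full_frob_complementD(1)[OF B]])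
  have "conjg G B g0 \<inter> H - {\<one>} \<noteq> {}" using conjg_nontrivial[OF BG g0 nontriv] sub by blast
  moreover obtain a where a: "a \<in> carrier G" "y \<in> conjg G B a"
    using full_frob_complementD(3)[OF B H_carrier[OF y(1)]] by blast
  ultimately show ?thesis
    using malnormal_conjugates_meeting_H_are_H_conjugate[OF full_frob_complementD(1,2)[OF B] g0 a(1)] y by blast
qed

lemma malnormal_if_contains_conjugate:
  assumes B: "full_frob_complement G D B" and nontriv: "B - {\<one>} \<noteq> {}"
    and g0: "g0 \<in> carrier G" and sub: "conjg G B g0 \<subseteq> H"
  shows "malnormal G H"
proof -
  note B_mal = full_frob_complementD(1)[OF B]
  note in_conj = in_conjugate_if_contains_conjugate[OF B nontriv g0 sub]
  have BG: "B \<subseteq> carrier G" by (rule malnormal_subset[OF B_mal])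
  have trivial: "H \<inter> conjg G H g \<subseteq> {\<one>}" if g: "g \<in> carrier G" "g \<notin> H" for g
  proof
    fix x assume x: "x \<in> H \<inter> conjg G H g"
    have xG: "x \<in> carrier G" and gx: "g \<otimes> x \<otimes> inv g \<in> H" using x mem_conjg_iff[OF H_subset g(1)] by auto
    show "x \<in> {\<one>}"
    proof (rule ccontr)
      assume "x \<notin> {\<one>}"
      hence x1: "x \<noteq> \<one>" and gx1: "g \<otimes> x \<otimes> inv g \<noteq> \<one>" using conj_eq_one_iff[OF g(1) xG] by auto
      have "x \<in> H" using x by blast
      from in_conj[OF this x1] obtain k where k: "k \<in> H" "x \<in> conjg G B (g0 \<otimes> k)" ..
      from in_conj[OF gx gx1] obtain k' where k': "k' \<in> H" "g \<otimes> x \<otimes> inv g \<in> conjg G B (g0 \<otimes> k')" ..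
      have kG: "k \<in> carrier G" and k'G: "k' \<in> carrier G" using k k' H_carrier by auto
      have "x \<in> conjg G B (g0 \<otimes> k' \<otimes> g)"
        using k'(2) xG mem_conjg_iff[OF BG] g(1) g0 k'G by (simp add: m_assoc inv_mult_group)
      hence "conjg G B (g0 \<otimes> k) \<inter> conjg G B (g0 \<otimes> k' \<otimes> g) \<noteq> {\<one>}" using k(2) x1 by blast
      hence "conjg G B (g0 \<otimes> k) = conjg G B (g0 \<otimes> k' \<otimes> g)"
        using malnormal_conjg_eq[OF B_mal] g0 kG k'G g(1) by simp
      hence "(g0 \<otimes> k) \<otimes> inv (g0 \<otimes> k' \<otimes> g) \<in> B"
        using malnormal_conjg_eq_iff[OF B_mal nontriv] g0 kG k'G g(1) by simp
      \<comment> \<open>so \<open>k g\<inverse> k'\<inverse>\<close> lies in \<open>B\<^bsup>g0\<^esup> \<subseteq> H\<close>, forcing \<open>g \<in> H\<close>\<close>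
      moreover have "(g0 \<otimes> k) \<otimes> inv (g0 \<otimes> k' \<otimes> g) = g0 \<otimes> (k \<otimes> inv g \<otimes> inv k') \<otimes> inv g0"
        using g0 kG k'G g(1) by (simp add: m_assoc inv_mult_group)
      moreover have "k \<otimes> inv g \<otimes> inv k' \<in> carrier G" using kG k'G g(1) by simp
      ultimately have "k \<otimes> inv g \<otimes> inv k' \<in> conjg G B g0" using mem_conjg_iff[OF BG g0] by simp
      hence "inv k \<otimes> (k \<otimes> inv g \<otimes> inv k') \<otimes> k' \<in> H"
        using sub k(1) k'(1) by (simp add: subsetD H_mult_closed H_inv_closed)
      hence "inv g \<in> H" using kG k'G g(1) by (simp add: m_assoc)
      thus False using H_inv_closed[of "inv g"] g by simp
    qed
  qed
  show ?thesis
    unfolding malnormal_def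
  proof (intro conjI ballI)
    show "subgroup H G" by (rule H_subgroup)
    fix g assume "g \<in> carrier G - H"
    moreover have "\<one> \<in> H \<inter> conjg G H g"
      using one_in_conjg[OF H_subgroup] subgroup.one_closed[OF H_subgroup] \<open>g \<in> carrier G - H\<close> by blast
    ultimately show "H \<inter> conjg G H g = {\<one>}" using trivial by blast
  qed
qed

lemma full_frob_complement_if_contains_conjugate:
  assumes B: "full_frob_complement G D B" and nontriv: "B - {\<one>} \<noteq> {}"
    and g0: "g0 \<in> carrier G" and sub: "conjg G B g0 \<subseteq> H"
  shows "full_frob_complement G D H"
proof -
  have BG: "B \<subseteq> carrier G" by (rule malnormal_subset[OF full_frob_complementD(1)[OF B]])
  have "(\<Union>x\<in>carrier G. conjg G H x) = carrier G"
  proof (intro equalityI subsetI)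
    fix y assume y: "y \<in> carrier G"
    obtain a where a: "a \<in> carrier G" "y \<in> conjg G B a" using full_frob_complementD(3)[OF B y] by blast
    have "conjg G B a = conjg G (conjg G B g0) (inv g0 \<otimes> a)"
      using conjg_conjg[OF BG g0] g0 a(1) by (simp add: m_assoc[symmetric])
    hence "y \<in> conjg G H (inv g0 \<otimes> a)" using a(2) conjg_mono[OF sub] by blast
    moreover have "inv g0 \<otimes> a \<in> carrier G" using g0 a(1) by simp
    ultimately show "y \<in> (\<Union>x\<in>carrier G. conjg G H x)" by blast
  qed (use conjg_subset[OF H_subset] in auto)
  thus ?thesis
    unfolding full_frob_complement_def using H_definable malnormal_if_contains_conjugate[OF assms] by simp
qed

lemma full_frob_group_if_not_in_conjugate:
  assumes B: "full_frob_complement G D B" and not_in: "\<forall>g\<in>carrier G. \<not> H \<subseteq> conjg G B g"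
  shows "full_frob_group (G\<lparr>carrier := H\<rparr>) D"
proof -
  have BG: "B \<subseteq> carrier G" by (rule malnormal_subset[OF full_frob_complementD(1)[OF B]])
  obtain y where y: "y \<in> H" "y \<notin> B" using not_in conjg_one[OF BG] by fastforce
  obtain a where a: "a \<in> carrier G" "y \<in> conjg G B a" using full_frob_complementD(3)[OF B H_carrier[OF y(1)]] by blast
  have "y \<noteq> \<one>" using y(2) one_in_full_frob_complement[OF B] by blast
  hence "conjg G B a \<inter> H \<noteq> {\<one>}" using y(1) a(2) by blast
  hence "full_frob_complement (G\<lparr>carrier := H\<rparr>) D (conjg G B a \<inter> H)"
    by (rule full_frob_complement_trace[OF B a(1)])
  moreover have "conjg G B a \<inter> H \<noteq> H" using not_in a(1) by blast
  ultimately show ?thesis unfolding full_frob_group_def by auto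
qed

end

context fmr_group
begin

lemma full_frob_complement_Int_covers:
  assumes conn: "connected_sg G D (carrier G)"
    and P: "full_frob_complement G D P" and Q: "full_frob_complement G D Q" and meet: "P \<inter> Q \<noteq> {\<one>}"
    and y: "y \<in> carrier G" "y \<noteq> \<one>"
  shows "\<exists>x\<in>carrier G. y \<in> conjg G (P \<inter> Q) x"
proof -
  interpret connected_subgroup G D rk "carrier G"
    by unfold_locales (use conn subgroup_self definable1_carrier in auto)
  note P_mal = full_frob_complementD(1)[OF P] and Q_mal = full_frob_complementD(1)[OF Q]
  note P_def = full_frob_complementD(2)[OF P] and Q_def = full_frob_complementD(2)[OF Q]
  have PG: "P \<subseteq> carrier G" and QG: "Q \<subseteq> carrier G" using P_mal Q_mal malnormal_subset by auto
  have PQ_mal: "malnormal G (P \<inter> Q)" by (rule malnormal_Int[OF P_mal Q_mal])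
  have "(P \<inter> Q) \<inter> carrier G - {\<one>} \<noteq> {}"
    using meet subgroup.one_closed[OF malnormal_subgroup[OF PQ_mal]] PG by blast
  hence C1: "malnormal_dsubgroup (P \<inter> Q)"
    using malnormal_dsubgroup_Int_H[OF PQ_mal definable1_Int[OF P_def Q_def]] PG by (simp add: Int_absorb2 le_infI1)
  obtain a where a: "a \<in> carrier G" "y \<in> conjg G P a" using full_frob_complementD(3)[OF P y(1)] by blast
  obtain b where b: "b \<in> carrier G" "y \<in> conjg G Q b" using full_frob_complementD(3)[OF Q y(1)] by blast
  have PaG: "conjg G P a \<subseteq> carrier G" and QbG: "conjg G Q b \<subseteq> carrier G"
    using conjg_subset[OF PG a(1)] conjg_subset[OF QG b(1)] .
  have "malnormal G (conjg G P a \<inter> conjg G Q b)"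
    by (rule malnormal_Int[OF malnormal_conjg[OF P_mal a(1)] malnormal_conjg[OF Q_mal b(1)]])
  moreover have "definable1 D (conjg G P a \<inter> conjg G Q b)"
    by (rule definable1_Int[OF definable1_conjg[OF P_def a(1)] definable1_conjg[OF Q_def b(1)]])
  moreover have "(conjg G P a \<inter> conjg G Q b) \<inter> carrier G - {\<one>} \<noteq> {}" using a b y by blast
  ultimately have "malnormal_dsubgroup ((conjg G P a \<inter> conjg G Q b) \<inter> carrier G)"
    by (rule malnormal_dsubgroup_Int_H)
  moreover have "(conjg G P a \<inter> conjg G Q b) \<inter> carrier G = conjg G P a \<inter> conjg G Q b" using PaG by blast
  ultimately have C2: "malnormal_dsubgroup (conjg G P a \<inter> conjg G Q b)" by simp
  obtain x where x: "x \<in> carrier G" and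
    "(P \<inter> Q) \<inter> conjg G (conjg G P a \<inter> conjg G Q b) x - {\<one>} \<noteq> {}"
    using malnormal_dsubgroups_conjugates_meet[OF C1 C2] by blast
  hence "P \<inter> conjg G P (a \<otimes> x) \<noteq> {\<one>}" "Q \<inter> conjg G Q (b \<otimes> x) \<noteq> {\<one>}"
    using conjg_Int[OF PaG QbG x] conjg_conjg[OF PG a(1) x] conjg_conjg[OF QG b(1) x] by auto
  \<comment> \<open>a common nontrivial element forces \<open>P = P\<^bsup>a x\<^esup>\<close> and \<open>Q = Q\<^bsup>b x\<^esup>\<close>\<close>
  hence "conjg G P \<one> = conjg G P (a \<otimes> x)" "conjg G Q \<one> = conjg G Q (b \<otimes> x)"
    using malnormal_conjg_eq[OF P_mal one_closed m_closed[OF a(1) x]]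
      malnormal_conjg_eq[OF Q_mal one_closed m_closed[OF b(1) x]] conjg_one[OF PG] conjg_one[OF QG] by simp_all
  hence "conjg G P (inv x) = conjg G P a" "conjg G Q (inv x) = conjg G Q b"
    using conjg_conjg[OF PG one_closed inv_closed[OF x]] conjg_conjg[OF QG one_closed inv_closed[OF x]]
      conjg_conjg[OF PG m_closed[OF a(1) x] inv_closed[OF x]] conjg_conjg[OF QG m_closed[OF b(1) x] inv_closed[OF x]]
      a(1) b(1) x by (simp_all add: m_assoc)
  hence "y \<in> conjg G (P \<inter> Q) (inv x)" using a(2) b(2) conjg_Int[OF PG QG inv_closed[OF x]] by simp
  thus ?thesis using inv_closed[OF x] by blast
qed

lemma full_frob_complement_Int:
  assumes conn: "connected_sg G D (carrier G)"
    and P: "full_frob_complement G D P" and Q: "full_frob_complement G D Q" and meet: "P \<inter> Q \<noteq> {\<one>}"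
  shows "full_frob_complement G D (P \<inter> Q)"
proof -
  note P_mal = full_frob_complementD(1)[OF P] and Q_mal = full_frob_complementD(1)[OF Q]
  have PQ_mal: "malnormal G (P \<inter> Q)" by (rule malnormal_Int[OF P_mal Q_mal])
  have PG: "P \<subseteq> carrier G" using P_mal malnormal_subset by auto
  have "(\<Union>x\<in>carrier G. conjg G (P \<inter> Q) x) = carrier G"
  proof (intro equalityI subsetI)
    fix y assume y: "y \<in> carrier G"
    show "y \<in> (\<Union>x\<in>carrier G. conjg G (P \<inter> Q) x)"
    proof (cases "y = \<one>")
      case True
      thus ?thesis using one_in_conjg[OF malnormal_subgroup[OF PQ_mal] one_closed] by blast
    qed (use full_frob_complement_Int_covers[OF assms y] in blast)
  qed (use conjg_subset[of "P \<inter> Q"] PG in blast)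
  thus ?thesis
    unfolding full_frob_complement_def
    using PQ_mal definable1_Int[OF full_frob_complementD(2)[OF P] full_frob_complementD(2)[OF Q]] by blast
qed

lemma rk1_full_frob_complement_psubset:
  assumes C: "full_frob_complement G D C" and C': "full_frob_complement G D C'"
    and sub: "C \<subseteq> C'" and ne: "C \<noteq> C'"
  shows "rk1 C < rk1 C'"
proof -
  note C_mal = full_frob_complementD(1)[OF C] and C'_mal = full_frob_complementD(1)[OF C']
  note C_def = full_frob_complementD(2)[OF C] and C'_def = full_frob_complementD(2)[OF C']
  have C_sub: "subgroup C G" and C'_sub: "subgroup C' G" using C_mal C'_mal malnormal_subgroup by auto
  have C'G: "C' \<subseteq> carrier G" using C'_sub subgroup.subset by blast
  have "rk1 C \<le> rk1 C'"
    using rk1_mono[OF C_def C'_def sub] one_in_full_frob_complement[OF C] by blast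
  moreover have "\<not> rk1 C' \<le> rk1 C"
  proof
    assume "rk1 C' \<le> rk1 C"
    hence fin: "finite ((\<lambda>a. C #> a) ` C')" by (rule finite_index_if_rk1_le[OF C_sub C_def C'_sub C'_def sub])
    have "\<exists>a\<in>C'. x \<in> conjg G C a" if x: "x \<in> C'" for x
    proof (cases "x = \<one>")
      case True
      thus ?thesis using one_in_conjg[OF C_sub one_closed] subgroup.one_closed[OF C'_sub] by blast
    next
      case False
      obtain a where a: "a \<in> carrier G" "x \<in> conjg G C a" using full_frob_complementD(3)[OF C] x C'G by blast
      hence "a \<otimes> x \<otimes> inv a \<in> C'" using mem_conjg_iff[OF subgroup.subset[OF C_sub] a(1)] sub by blast
      hence "a \<in> C'"
        using malnormal_imp_malnormal_in[OF C'_mal] a(1) x False unfolding malnormal_in_def by blast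
      thus ?thesis using a(2) by blast
    qed
    thus False
      using malnormal_finite_index_not_covering[OF C_sub sub ne _ C'_sub fin]
        malnormal_in_mono[OF malnormal_imp_malnormal_in[OF C_mal] C'G] by blast
  qed
  ultimately show ?thesis by simp
qed

lemma minimal_full_frob_complement_ex:
  assumes "full_frob_complement G D B"
  shows "\<exists>B0. full_frob_complement G D B0 \<and> (\<forall>C. full_frob_complement G D C \<and> C \<subseteq> B0 \<longrightarrow> C = B0)"
proof -
  \<comment> \<open>a full Frobenius complement of least rank is minimal, since rank drops along proper inclusions\<close>
  obtain B0 where B0: "full_frob_complement G D B0"
    and least: "\<And>C. full_frob_complement G D C \<Longrightarrow> rk1 B0 \<le> rk1 C"
    using ex_has_least_nat[of "full_frob_complement G D" B rk1] assms by blast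
  have "C = B0" if "full_frob_complement G D C" "C \<subseteq> B0" for C
    using rk1_full_frob_complement_psubset[OF that(1) B0 that(2)] least[OF that(1)] by fastforce
  thus ?thesis using B0 by blast
qed

lemma minimal_full_frob_complements_conjugate:
  assumes conn: "connected_sg G D (carrier G)" and x: "x \<in> carrier G" "x \<noteq> \<one>"
    and B1: "full_frob_complement G D B1" "\<forall>C. full_frob_complement G D C \<and> C \<subseteq> B1 \<longrightarrow> C = B1"
    and B2: "full_frob_complement G D B2" "\<forall>C. full_frob_complement G D C \<and> C \<subseteq> B2 \<longrightarrow> C = B2"
  shows "\<exists>g\<in>carrier G. B2 = conjg G B1 g"
proof -
  have B2G: "B2 \<subseteq> carrier G" by (rule malnormal_subset[OF full_frob_complementD(1)[OF B2(1)]])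
  obtain y where y: "y \<in> B1" "y \<noteq> \<one>" using full_frob_complement_nontrivial[OF B1(1) x] by blast
  have yG: "y \<in> carrier G"
    using y malnormal_subset[OF full_frob_complementD(1)[OF B1(1)]] by blast
  obtain a where a: "a \<in> carrier G" "y \<in> conjg G B2 a" using full_frob_complementD(3)[OF B2(1) yG] by blast
  have B2a: "full_frob_complement G D (conjg G B2 a)" by (rule full_frob_complement_conjg[OF B2(1) a(1)])
  have "B1 \<inter> conjg G B2 a \<noteq> {\<one>}" using y a(2) by blast
  hence "full_frob_complement G D (B1 \<inter> conjg G B2 a)" by (rule full_frob_complement_Int[OF conn B1(1) B2a])
  hence B1_sub: "B1 \<subseteq> conjg G B2 a" using B1(2) by blast
  have "conjg G B1 (inv a) \<subseteq> conjg G (conjg G B2 a) (inv a)" by (rule conjg_mono[OF B1_sub])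
  also have "\<dots> = B2" using conjg_conjg[OF B2G a(1) inv_closed[OF a(1)]] conjg_one[OF B2G] a(1) by simp
  finally have "conjg G B1 (inv a) = B2"
    using B2(2) full_frob_complement_conjg[OF B1(1) inv_closed[OF a(1)]] by blast
  thus ?thesis using inv_closed[OF a(1)] by blast
qed

end

lemma ranked_group_imp_fmr_group: "ranked_group G D rk \<Longrightarrow> fmr_group G D rk"
  unfolding ranked_group_def by (intro fmr_group.intro fmr_group_axioms.intro) auto

lemma (in fmr_group) connected_subgroupI:
  "subgroup H G \<Longrightarrow> definable1 D H \<Longrightarrow> connected_sg G D H \<Longrightarrow> connected_subgroup G D rk H"
  unfolding connected_subgroup_def connected_subgroup_axioms_def using fmr_group_axioms by blast

theorem mainTheorem5:
  fixes G :: "('a, 'b) monoid_scheme" and D :: "nat \<Rightarrow> 'a list set set"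
    and rk :: "'a list set \<Rightarrow> nat" and B :: "'a set"
  assumes "ranked_group G D rk"
    and "full_frob_complement G D B" and "B \<noteq> carrier G"
  shows
    "(\<forall>H. subgroup H G \<and> definable1 D H \<and> connected_sg G D H \<and>
          (\<forall>g \<in> carrier G. \<not> H \<subseteq> conjg G B g) \<longrightarrow>
        (\<forall>g \<in> carrier G. conjg G B g \<inter> H \<noteq> {\<one>\<^bsub>G\<^esub>} \<longrightarrow>
            full_frob_complement (G\<lparr>carrier := H\<rparr>) D (conjg G B g \<inter> H) \<and>
            conjg G B g \<inter> H \<noteq> H)
        \<and> full_frob_group (G\<lparr>carrier := H\<rparr>) D)
   \<and> (\<forall>H. subgroup H G \<and> definable1 D H \<and> connected_sg G D H \<and>
          (\<exists>g \<in> carrier G. conjg G B g \<subseteq> H) \<longrightarrow> full_frob_complement G D H)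
   \<and> (connected_sg G D (carrier G) \<longrightarrow>
        (\<forall>B'. full_frob_complement G D B' \<and> B \<inter> B' \<noteq> {\<one>\<^bsub>G\<^esub>} \<longrightarrow>
              full_frob_complement G D (B \<inter> B'))
        \<and> (\<exists>B0. full_frob_complement G D B0 \<and>
              (\<forall>C. full_frob_complement G D C \<and> C \<subseteq> B0 \<longrightarrow> C = B0))
        \<and> (\<forall>B1 B2. full_frob_complement G D B1 \<and>
                (\<forall>C. full_frob_complement G D C \<and> C \<subseteq> B1 \<longrightarrow> C = B1) \<and>
                full_frob_complement G D B2 \<and>
                (\<forall>C. full_frob_complement G D C \<and> C \<subseteq> B2 \<longrightarrow> C = B2) \<longrightarrow>
              (\<exists>g \<in> carrier G. B2 = conjg G B1 g)))"
proof -
  interpret fmr_group G D rk by (rule ranked_group_imp_fmr_group[OF assms(1)])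
  note B = assms(2)
  obtain x where x: "x \<in> carrier G" "x \<notin> B"
    using assms(3) malnormal_subset[OF full_frob_complementD(1)[OF B]] by blast
  have x1: "x \<noteq> \<one>\<^bsub>G\<^esub>" using x(2) one_in_full_frob_complement[OF B] by blast
  show ?thesis
  proof (intro conjI allI impI ballI; (elim conjE)?)
    fix H g assume "subgroup H G" "definable1 D H" "connected_sg G D H"
      "\<forall>g\<in>carrier G. \<not> H \<subseteq> conjg G B g" "g \<in> carrier G" "conjg G B g \<inter> H \<noteq> {\<one>\<^bsub>G\<^esub>}"
    thus "full_frob_complement (G\<lparr>carrier := H\<rparr>) D (conjg G B g \<inter> H)" "conjg G B g \<inter> H \<noteq> H"
      using connected_subgroup.full_frob_complement_trace[OF connected_subgroupI B] by blast+
  next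
    fix H assume "subgroup H G" "definable1 D H" "connected_sg G D H"
      "\<forall>g\<in>carrier G. \<not> H \<subseteq> conjg G B g"
    thus "full_frob_group (G\<lparr>carrier := H\<rparr>) D"
      using connected_subgroup.full_frob_group_if_not_in_conjugate[OF connected_subgroupI B] by blast
  next
    fix H assume "subgroup H G" "definable1 D H" "connected_sg G D H"
      "\<exists>g\<in>carrier G. conjg G B g \<subseteq> H"
    thus "full_frob_complement G D H"
      using connected_subgroup.full_frob_complement_if_contains_conjugate[OF connected_subgroupI B
          full_frob_complement_nontrivial[OF B x(1) x1]] by blast
  next
    fix B' assume "connected_sg G D (carrier G)" "full_frob_complement G D B'" "B \<inter> B' \<noteq> {\<one>\<^bsub>G\<^esub>}"
    thus "full_frob_complement G D (B \<inter> B')" by (rule full_frob_complement_Int[OF _ B])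
  next
    show "\<exists>B0. full_frob_complement G D B0 \<and> (\<forall>C. full_frob_complement G D C \<and> C \<subseteq> B0 \<longrightarrow> C = B0)"
      by (rule minimal_full_frob_complement_ex[OF B])
  next
    fix B1 B2
    assume "connected_sg G D (carrier G)"
      "full_frob_complement G D B1" "\<forall>C. full_frob_complement G D C \<and> C \<subseteq> B1 \<longrightarrow> C = B1"
      "full_frob_complement G D B2" "\<forall>C. full_frob_complement G D C \<and> C \<subseteq> B2 \<longrightarrow> C = B2"
    thus "\<exists>g\<in>carrier G. B2 = conjg G B1 g"
      by (rule minimal_full_frob_complements_conjugate[OF _ x(1) x1])
  qed
qed

end
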